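(* Let $G$ be a finite group and $T\neq 0$ a $G$-Tambara functor. The nilradical $\mathfrak N(T)=\sqrt 0$ is a prime Tambara ideal if and only if $\operatorname{Spec}_{\mathbf{Nak}}(T)$ is irreducible.
   Context: All rings are commutative with unit. A $G$-Tambara functor $T$ consists of commutative rings $T(G/H)$ for subgroups $H\le G$ with restriction ring maps, additive transfer maps, multiplicative norm maps and conjugation isomorphisms satisfying the standard Tambara axioms (Hill–Mazur). A Tambara ideal is a family of ring ideals $I(G/H)\subseteq T(G/H)$ closed under restriction, transfer, norm and conjugation; proper if $1\notin I(G/G)$. $\langle x\rangle$ is the Tambara ideal generated by $x$; the product $IJ$ is the Tambara ideal generated by levelwise products. The radical $\sqrt I$ has $\sqrt I(G/H)=\{x\mid\langle x\rangle^n\subseteq I\text{ for some }n\ge1\}$; the nilradical is $\mathfrak N(T)=\sqrt{0}$ for the zero ideal $0$. A proper Tambara ideal $P$ is prime if for all Tambara ideals $I,J$, $IJ\subseteq P$ implies $I\subseteq P$ or $J\subseteq P$. $\operatorname{Spec}_{\mathbf{Nak}}(T)$ is the set of primes, topologized with subbasic closed sets $V_H(x)=\{P\mid x\in P(G/H)\}$ for $H\le G$, $x\in T(G/H)$. A space is irreducible if any two nonempty open subsets intersect (as used here: $U\cap V=\varnothing$ implies $U=\varnothing$ or $V=\varnothing$). *)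

theory Defs
  imports "HOL-Algebra.Algebra" "HOL-Analysis.Abstract_Topology"
begin

text \<open>A G-Tambara functor assigns to every subgroup H of G a commutative ring
  t_lev T H (the value at G/H), with restrictions t_res T K H : T(G/K) -> T(G/H),
  transfers t_tr T K H : T(G/H) -> T(G/K), norms t_nm T K H : T(G/H) -> T(G/K)
  (for H a subgroup of K) and conjugations t_cj T g H : T(G/H) -> T(G/gHg^-1).\<close>

record ('g, 'r) tambara =
  t_lev :: "'g set \<Rightarrow> 'r ring"
  t_res :: "'g set \<Rightarrow> 'g set \<Rightarrow> 'r \<Rightarrow> 'r"
  t_tr  :: "'g set \<Rightarrow> 'g set \<Rightarrow> 'r \<Rightarrow> 'r"
  t_nm  :: "'g set \<Rightarrow> 'g set \<Rightarrow> 'r \<Rightarrow> 'r"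
  t_cj  :: "'g \<Rightarrow> 'g set \<Rightarrow> 'r \<Rightarrow> 'r"

definition conjsub :: "('g, 'b) monoid_scheme \<Rightarrow> 'g \<Rightarrow> 'g set \<Rightarrow> 'g set" where
  "conjsub G g H = (\<lambda>h. g \<otimes>\<^bsub>G\<^esub> h \<otimes>\<^bsub>G\<^esub> inv\<^bsub>G\<^esub> g) ` H"

definition dcos :: "('g, 'b) monoid_scheme \<Rightarrow> 'g set \<Rightarrow> 'g \<Rightarrow> 'g set \<Rightarrow> 'g set" where
  "dcos G J r H = {j \<otimes>\<^bsub>G\<^esub> r \<otimes>\<^bsub>G\<^esub> h | j h. j \<in> J \<and> h \<in> H}"

definition dreps :: "('g, 'b) monoid_scheme \<Rightarrow> 'g set \<Rightarrow> 'g set \<Rightarrow> 'g set \<Rightarrow> 'g set \<Rightarrow> bool" where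
  "dreps G K J H Q \<longleftrightarrow> Q \<subseteq> K \<and> (\<forall>k\<in>K. \<exists>!q. q \<in> Q \<and> k \<in> dcos G J q H)"

definition lco :: "('g, 'b) monoid_scheme \<Rightarrow> 'g \<Rightarrow> 'g set \<Rightarrow> 'g set" where
  "lco G k C = (\<lambda>c. k \<otimes>\<^bsub>G\<^esub> c) ` C"

definition lcosetsK :: "('g, 'b) monoid_scheme \<Rightarrow> 'g set \<Rightarrow> 'g set \<Rightarrow> 'g set set" where
  "lcosetsK G K H = {lco G k H | k. k \<in> K}"

definition subact :: "('g, 'b) monoid_scheme \<Rightarrow> 'g \<Rightarrow> 'g set set \<Rightarrow> 'g set set" where
  "subact G k S = (\<lambda>C. lco G k C) ` S"

definition subreps :: "('g, 'b) monoid_scheme \<Rightarrow> 'g set \<Rightarrow> 'g set \<Rightarrow> 'g set set set \<Rightarrow> bool" where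
  "subreps G K H \<SS> \<longleftrightarrow> \<SS> \<subseteq> Pow (lcosetsK G K H) \<and>
     (\<forall>S'\<in>Pow (lcosetsK G K H). \<exists>!S. S \<in> \<SS> \<and> (\<exists>k\<in>K. subact G k S = S'))"

definition substab :: "('g, 'b) monoid_scheme \<Rightarrow> 'g set \<Rightarrow> 'g set set \<Rightarrow> 'g set" where
  "substab G K S = {k \<in> K. subact G k S = S}"

definition sections :: "('g, 'b) monoid_scheme \<Rightarrow> 'g set \<Rightarrow> 'g set \<Rightarrow> 'g set \<Rightarrow> ('g set \<Rightarrow> 'g set) set" where
  "sections G J K H = {s \<in> lcosetsK G J K \<rightarrow>\<^sub>E lcosetsK G J H. \<forall>C \<in> lcosetsK G J K. s C \<subseteq> C}"

definition secact :: "('g, 'b) monoid_scheme \<Rightarrow> 'g set \<Rightarrow> 'g set \<Rightarrow> 'g \<Rightarrow> ('g set \<Rightarrow> 'g set) \<Rightarrow> ('g set \<Rightarrow> 'g set)" where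
  "secact G J K j s = restrict (\<lambda>C. lco G j (s (lco G (inv\<^bsub>G\<^esub> j) C))) (lcosetsK G J K)"

definition secreps :: "('g, 'b) monoid_scheme \<Rightarrow> 'g set \<Rightarrow> 'g set \<Rightarrow> 'g set \<Rightarrow> ('g set \<Rightarrow> 'g set) set \<Rightarrow> bool" where
  "secreps G J K H \<SS> \<longleftrightarrow> \<SS> \<subseteq> sections G J K H \<and>
     (\<forall>s'\<in>sections G J K H. \<exists>!s. s \<in> \<SS> \<and> (\<exists>j\<in>J. secact G J K j s = s'))"

definition secstab :: "('g, 'b) monoid_scheme \<Rightarrow> 'g set \<Rightarrow> 'g set \<Rightarrow> ('g set \<Rightarrow> 'g set) \<Rightarrow> 'g set" where
  "secstab G J K s = {j \<in> J. secact G J K j s = s}"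

definition subgrp_le :: "('g, 'b) monoid_scheme \<Rightarrow> 'g set \<Rightarrow> 'g set \<Rightarrow> bool" where
  "subgrp_le G H K \<longleftrightarrow> subgroup H G \<and> subgroup K G \<and> H \<subseteq> K"

definition is_tambara :: "('g, 'b) monoid_scheme \<Rightarrow> ('g, 'r) tambara \<Rightarrow> bool" where
  "is_tambara G T \<longleftrightarrow>
   \<comment> \<open>levels are commutative rings\<close>
   (\<forall>H. subgroup H G \<longrightarrow> cring (t_lev T H)) \<and>
   \<comment> \<open>restrictions: functorial ring maps\<close>
   (\<forall>H K. subgrp_le G H K \<longrightarrow> t_res T K H \<in> ring_hom (t_lev T K) (t_lev T H)) \<and>
   (\<forall>H. subgroup H G \<longrightarrow> (\<forall>x\<in>carrier (t_lev T H). t_res T H H x = x)) \<and>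
   (\<forall>H K L. subgrp_le G H K \<and> subgrp_le G K L \<longrightarrow>
      (\<forall>x\<in>carrier (t_lev T L). t_res T K H (t_res T L K x) = t_res T L H x)) \<and>
   \<comment> \<open>transfers: functorial additive maps\<close>
   (\<forall>H K. subgrp_le G H K \<longrightarrow> (\<forall>a\<in>carrier (t_lev T H). t_tr T K H a \<in> carrier (t_lev T K)) \<and>
      (\<forall>a\<in>carrier (t_lev T H). \<forall>b\<in>carrier (t_lev T H).
         t_tr T K H (a \<oplus>\<^bsub>t_lev T H\<^esub> b) = t_tr T K H a \<oplus>\<^bsub>t_lev T K\<^esub> t_tr T K H b)) \<and>
   (\<forall>H. subgroup H G \<longrightarrow> (\<forall>x\<in>carrier (t_lev T H). t_tr T H H x = x)) \<and>
   (\<forall>H K L. subgrp_le G H K \<and> subgrp_le G K L \<longrightarrow>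
      (\<forall>x\<in>carrier (t_lev T H). t_tr T L K (t_tr T K H x) = t_tr T L H x)) \<and>
   \<comment> \<open>norms: functorial multiplicative maps preserving 1 and 0\<close>
   (\<forall>H K. subgrp_le G H K \<longrightarrow> (\<forall>a\<in>carrier (t_lev T H). t_nm T K H a \<in> carrier (t_lev T K)) \<and>
      (\<forall>a\<in>carrier (t_lev T H). \<forall>b\<in>carrier (t_lev T H).
         t_nm T K H (a \<otimes>\<^bsub>t_lev T H\<^esub> b) = t_nm T K H a \<otimes>\<^bsub>t_lev T K\<^esub> t_nm T K H b) \<and>
      t_nm T K H \<one>\<^bsub>t_lev T H\<^esub> = \<one>\<^bsub>t_lev T K\<^esub> \<and>
      t_nm T K H \<zero>\<^bsub>t_lev T H\<^esub> = \<zero>\<^bsub>t_lev T K\<^esub>) \<and>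
   (\<forall>H. subgroup H G \<longrightarrow> (\<forall>x\<in>carrier (t_lev T H). t_nm T H H x = x)) \<and>
   (\<forall>H K L. subgrp_le G H K \<and> subgrp_le G K L \<longrightarrow>
      (\<forall>x\<in>carrier (t_lev T H). t_nm T L K (t_nm T K H x) = t_nm T L H x)) \<and>
   \<comment> \<open>conjugations: ring isomorphisms, functorial, trivial for elements of H\<close>
   (\<forall>g\<in>carrier G. \<forall>H. subgroup H G \<longrightarrow>
      t_cj T g H \<in> ring_hom (t_lev T H) (t_lev T (conjsub G g H))) \<and>
   (\<forall>g\<in>carrier G. \<forall>g'\<in>carrier G. \<forall>H. subgroup H G \<longrightarrow>
      (\<forall>x\<in>carrier (t_lev T H). t_cj T g' (conjsub G g H) (t_cj T g H x) = t_cj T (g' \<otimes>\<^bsub>G\<^esub> g) H x)) \<and>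
   (\<forall>H. subgroup H G \<longrightarrow> (\<forall>h\<in>H. \<forall>x\<in>carrier (t_lev T H). t_cj T h H x = x)) \<and>
   \<comment> \<open>conjugations commute with restrictions, transfers, norms\<close>
   (\<forall>g\<in>carrier G. \<forall>H K. subgrp_le G H K \<longrightarrow>
      (\<forall>x\<in>carrier (t_lev T K). t_cj T g H (t_res T K H x) = t_res T (conjsub G g K) (conjsub G g H) (t_cj T g K x)) \<and>
      (\<forall>a\<in>carrier (t_lev T H). t_cj T g K (t_tr T K H a) = t_tr T (conjsub G g K) (conjsub G g H) (t_cj T g H a)) \<and>
      (\<forall>a\<in>carrier (t_lev T H). t_cj T g K (t_nm T K H a) = t_nm T (conjsub G g K) (conjsub G g H) (t_cj T g H a))) \<and>
   \<comment> \<open>Frobenius reciprocity\<close>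
   (\<forall>H K. subgrp_le G H K \<longrightarrow> (\<forall>a\<in>carrier (t_lev T H). \<forall>b\<in>carrier (t_lev T K).
      t_tr T K H (a \<otimes>\<^bsub>t_lev T H\<^esub> t_res T K H b) = t_tr T K H a \<otimes>\<^bsub>t_lev T K\<^esub> b)) \<and>
   \<comment> \<open>double coset formulas for restriction of transfers and of norms\<close>
   (\<forall>H J K Q. subgrp_le G H K \<and> subgrp_le G J K \<and> dreps G K J H Q \<longrightarrow>
      (\<forall>a\<in>carrier (t_lev T H).
        t_res T K J (t_tr T K H a) =
          (\<Oplus>\<^bsub>t_lev T J\<^esub> q\<in>Q. t_tr T J (J \<inter> conjsub G q H)
               (t_res T (conjsub G q H) (J \<inter> conjsub G q H) (t_cj T q H a))) \<and>
        t_res T K J (t_nm T K H a) =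
          (\<Otimes>\<^bsub>t_lev T J\<^esub> q\<in>Q. t_nm T J (J \<inter> conjsub G q H)
               (t_res T (conjsub G q H) (J \<inter> conjsub G q H) (t_cj T q H a))))) \<and>
   \<comment> \<open>Tambara reciprocity for norms of sums\<close>
   (\<forall>H K \<SS> Qf. subgrp_le G H K \<and> subreps G K H \<SS> \<and>
        (\<forall>S\<in>\<SS>. dreps G K (substab G K S) H (Qf S)) \<longrightarrow>
      (\<forall>a\<in>carrier (t_lev T H). \<forall>b\<in>carrier (t_lev T H).
        t_nm T K H (a \<oplus>\<^bsub>t_lev T H\<^esub> b) =
          (\<Oplus>\<^bsub>t_lev T K\<^esub> S\<in>\<SS>. t_tr T K (substab G K S)
             (\<Otimes>\<^bsub>t_lev T (substab G K S)\<^esub> q\<in>Qf S.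
                t_nm T (substab G K S) (substab G K S \<inter> conjsub G q H)
                  (t_res T (conjsub G q H) (substab G K S \<inter> conjsub G q H)
                     (t_cj T q H (if lco G q H \<in> S then a else b))))))) \<and>
   \<comment> \<open>Tambara reciprocity for norms of transfers\<close>
   (\<forall>H K J \<SS> Qf xf. subgrp_le G H K \<and> subgrp_le G K J \<and> secreps G J K H \<SS> \<and>
        (\<forall>s\<in>\<SS>. dreps G J (secstab G J K s) K (Qf s) \<and>
                 (\<forall>q\<in>Qf s. xf s q \<in> s (lco G q K))) \<longrightarrow>
      (\<forall>a\<in>carrier (t_lev T H).
        t_nm T J K (t_tr T K H a) =
          (\<Oplus>\<^bsub>t_lev T J\<^esub> s\<in>\<SS>. t_tr T J (secstab G J K s)
             (\<Otimes>\<^bsub>t_lev T (secstab G J K s)\<^esub> q\<in>Qf s.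
                t_nm T (secstab G J K s) (secstab G J K s \<inter> conjsub G q K)
                  (t_res T (conjsub G (xf s q) H) (secstab G J K s \<inter> conjsub G q K)
                     (t_cj T (xf s q) H a))))))"

definition tideal :: "('g, 'b) monoid_scheme \<Rightarrow> ('g, 'r) tambara \<Rightarrow> ('g set \<Rightarrow> 'r set) \<Rightarrow> bool" where
  "tideal G T I \<longleftrightarrow>
     (\<forall>H. subgroup H G \<longrightarrow> ideal (I H) (t_lev T H)) \<and>
     (\<forall>H. \<not> subgroup H G \<longrightarrow> I H = {}) \<and>
     (\<forall>H K. subgrp_le G H K \<longrightarrow>
        t_res T K H ` I K \<subseteq> I H \<and> t_tr T K H ` I H \<subseteq> I K \<and> t_nm T K H ` I H \<subseteq> I K) \<and>
     (\<forall>g\<in>carrier G. \<forall>H. subgroup H G \<longrightarrow> t_cj T g H ` I H \<subseteq> I (conjsub G g H))"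

definition tgen :: "('g, 'b) monoid_scheme \<Rightarrow> ('g, 'r) tambara \<Rightarrow> ('g set \<Rightarrow> 'r set) \<Rightarrow> ('g set \<Rightarrow> 'r set)" where
  "tgen G T A = (\<lambda>K. \<Inter>{I K | I. tideal G T I \<and> A \<le> I})"

definition tprinc :: "('g, 'b) monoid_scheme \<Rightarrow> ('g, 'r) tambara \<Rightarrow> 'g set \<Rightarrow> 'r \<Rightarrow> ('g set \<Rightarrow> 'r set)" where
  "tprinc G T H x = tgen G T (\<lambda>K. if K = H then {x} else {})"

definition tprod :: "('g, 'b) monoid_scheme \<Rightarrow> ('g, 'r) tambara \<Rightarrow> ('g set \<Rightarrow> 'r set) \<Rightarrow> ('g set \<Rightarrow> 'r set) \<Rightarrow> ('g set \<Rightarrow> 'r set)" where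
  "tprod G T I J = tgen G T (\<lambda>H. {a \<otimes>\<^bsub>t_lev T H\<^esub> b | a b. a \<in> I H \<and> b \<in> J H})"

text \<open>tpow G T I n is the (n+1)-st power of I\<close>
primrec tpow :: "('g, 'b) monoid_scheme \<Rightarrow> ('g, 'r) tambara \<Rightarrow> ('g set \<Rightarrow> 'r set) \<Rightarrow> nat \<Rightarrow> ('g set \<Rightarrow> 'r set)" where
  "tpow G T I 0 = I"
| "tpow G T I (Suc n) = tprod G T (tpow G T I n) I"

definition trad :: "('g, 'b) monoid_scheme \<Rightarrow> ('g, 'r) tambara \<Rightarrow> ('g set \<Rightarrow> 'r set) \<Rightarrow> ('g set \<Rightarrow> 'r set)" where
  "trad G T I = (\<lambda>H. if subgroup H G
      then {x \<in> carrier (t_lev T H). \<exists>n. tpow G T (tprinc G T H x) n \<le> I} else {})"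

definition tzero :: "('g, 'b) monoid_scheme \<Rightarrow> ('g, 'r) tambara \<Rightarrow> ('g set \<Rightarrow> 'r set)" where
  "tzero G T = (\<lambda>H. if subgroup H G then {\<zero>\<^bsub>t_lev T H\<^esub>} else {})"

definition nilradical :: "('g, 'b) monoid_scheme \<Rightarrow> ('g, 'r) tambara \<Rightarrow> ('g set \<Rightarrow> 'r set)" where
  "nilradical G T = trad G T (tzero G T)"

definition tprime :: "('g, 'b) monoid_scheme \<Rightarrow> ('g, 'r) tambara \<Rightarrow> ('g set \<Rightarrow> 'r set) \<Rightarrow> bool" where
  "tprime G T P \<longleftrightarrow> tideal G T P \<and> \<one>\<^bsub>t_lev T (carrier G)\<^esub> \<notin> P (carrier G) \<and>
     (\<forall>I J. tideal G T I \<longrightarrow> tideal G T J \<longrightarrow> tprod G T I J \<le> P \<longrightarrow> I \<le> P \<or> J \<le> P)"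

definition tspec :: "('g, 'b) monoid_scheme \<Rightarrow> ('g, 'r) tambara \<Rightarrow> ('g set \<Rightarrow> 'r set) set" where
  "tspec G T = {P. tprime G T P}"

definition Vset :: "('g, 'b) monoid_scheme \<Rightarrow> ('g, 'r) tambara \<Rightarrow> 'g set \<Rightarrow> 'r \<Rightarrow> ('g set \<Rightarrow> 'r set) set" where
  "Vset G T H x = {P \<in> tspec G T. x \<in> P H}"

definition spec_top :: "('g, 'b) monoid_scheme \<Rightarrow> ('g, 'r) tambara \<Rightarrow> ('g set \<Rightarrow> 'r set) topology" where
  "spec_top G T = topology_generated_by
     (insert (tspec G T) {tspec G T - Vset G T H x | H x. subgroup H G \<and> x \<in> carrier (t_lev T H)})"

definition irreducible_space :: "'a topology \<Rightarrow> bool" where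
  "irreducible_space Top \<longleftrightarrow>
     (\<forall>U V. openin Top U \<longrightarrow> openin Top V \<longrightarrow> U \<inter> V = {} \<longrightarrow> U = {} \<or> V = {})"

end

theory Submission
  imports Defs
begin

text \<open>
  The nilradical is the intersection of all prime Tambara ideals.  Granting this, the equivalence
  is the classical one.  If the nilradical N is prime, it is a generic point of the spectrum: a
  basic open set D_H(x) containing some prime P has x outside P, hence outside N, so N lies in
  every nonempty open set and any two of them meet.  Conversely, if IJ is contained in N but
  x in I(G/H) and y in J(G/K) are not in N, there are primes avoiding x and avoiding y;
  irreducibility yields a single prime R avoiding both, contradicting that IJ is contained in R.

  That N is the intersection of the primes rests on two facts.  By Zorn's lemma, an element none
  of whose powers vanishes is avoided by a prime (a Tambara ideal maximal among those avoiding
  its powers).  The substantial fact is that an element x of T(G/H) with x^k = 0 generates a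
  nilpotent Tambara ideal.  At each level B, the norms to B of restrictions of conjugates of x
  form a finite set V(B) (norm_conjs B) of at most |G| 2^|G| elements, each with vanishing k-th
  power.  Let F_d (filt d) be the family of ideals generated by transfers of multiples of
  products of at least d elements of V.  The double coset formulas, Frobenius reciprocity and the
  reciprocity formulas for norms of sums and of transfers show that F_d is a Tambara ideal with
  F_d F_e contained in F_(d+e); closure under norms of sums goes by induction on the order of the
  target subgroup.  Since x lies in F_1, the n-th power of the Tambara ideal generated by x lies
  in F_n, and by pigeonhole F_d = 0 as soon as d > |G| 2^|G| (k - 1).
\<close>

section \<open>Commutative rings\<close>

lemma cring_idealI:
  assumes "cring R" "Y \<subseteq> carrier R" "\<zero>\<^bsub>R\<^esub> \<in> Y"
    "\<And>a b. a \<in> Y \<Longrightarrow> b \<in> Y \<Longrightarrow> a \<oplus>\<^bsub>R\<^esub> b \<in> Y"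
    "\<And>a r. a \<in> Y \<Longrightarrow> r \<in> carrier R \<Longrightarrow> r \<otimes>\<^bsub>R\<^esub> a \<in> Y"
  shows "ideal Y R"
proof -
  interpret R: cring R by fact
  show ?thesis
  proof (rule idealI)
    show "ring R" by (rule R.ring_axioms)
    show "subgroup Y (add_monoid R)"
    proof (rule subgroup.intro)
      show "Y \<subseteq> carrier (add_monoid R)" using assms(2) by simp
      show "\<And>x y. x \<in> Y \<Longrightarrow> y \<in> Y \<Longrightarrow> x \<otimes>\<^bsub>add_monoid R\<^esub> y \<in> Y" using assms(4) by simp
      show "\<one>\<^bsub>add_monoid R\<^esub> \<in> Y" using assms(3) by simp
      fix x assume x: "x \<in> Y"
      then have xc: "x \<in> carrier R" using assms(2) by auto
      have "inv\<^bsub>add_monoid R\<^esub> x = \<ominus>\<^bsub>R\<^esub> x" by (simp add: a_inv_def)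
      also have "\<dots> = (\<ominus>\<^bsub>R\<^esub> \<one>\<^bsub>R\<^esub>) \<otimes>\<^bsub>R\<^esub> x" using xc by (simp add: R.l_minus)
      also have "\<dots> \<in> Y" using assms(5)[OF x] by simp
      finally show "inv\<^bsub>add_monoid R\<^esub> x \<in> Y" .
    qed
    show "\<And>a x. a \<in> Y \<Longrightarrow> x \<in> carrier R \<Longrightarrow> x \<otimes>\<^bsub>R\<^esub> a \<in> Y" using assms(5) by blast
    show "\<And>a x. a \<in> Y \<Longrightarrow> x \<in> carrier R \<Longrightarrow> a \<otimes>\<^bsub>R\<^esub> x \<in> Y"
      using assms(2,5) R.m_comm by (metis subsetD)
  qed
qed

lemma mem_set_add_iff: "x \<in> A <+>\<^bsub>R\<^esub> B \<longleftrightarrow> (\<exists>a\<in>A. \<exists>b\<in>B. x = a \<oplus>\<^bsub>R\<^esub> b)"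
  unfolding set_add_def' by blast

lemma finsum_in_ideal:
  assumes "ideal I R" "\<And>i. i \<in> A \<Longrightarrow> f i \<in> I"
  shows "finsum R f A \<in> I"
proof -
  interpret ideal I R by fact
  show ?thesis
  proof (cases "finite A")
    case True
    from True assms(2) show ?thesis
    proof (induction A rule: finite_induct)
      case empty then show ?case by (simp add: finsum_empty)
    next
      case (insert x F)
      have "f \<in> F \<rightarrow> carrier R" using insert.prems a_subset by blast
      then have "finsum R f (insert x F) = f x \<oplus>\<^bsub>R\<^esub> finsum R f F"
        using insert a_subset by (intro finsum_insert) auto
      then show ?case using insert a_closed by auto
    qed
  next
    case False
    then show ?thesis unfolding finsum_def finprod_def by simp
  qed
qed

lemma finprod_in_ideal:
  assumes "cring R" "ideal I R" "finite A" "q \<in> A" "f q \<in> I" "f \<in> A \<rightarrow> carrier R"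
  shows "finprod R f A \<in> I"
proof -
  interpret cring R by fact
  interpret I: ideal I R by fact
  have "finprod R f (insert q (A - {q})) = f q \<otimes>\<^bsub>R\<^esub> finprod R f (A - {q})"
    using assms(3,4,6) by (intro finprod_insert) auto
  moreover have "insert q (A - {q}) = A" using assms(4) by auto
  moreover have "finprod R f (A - {q}) \<in> carrier R" using assms(6) by (intro finprod_closed) auto
  ultimately show ?thesis using I.I_r_closed assms(5) by metis
qed

lemma ideal_vimage:
  assumes R: "cring R" and I: "ideal I S"
    and zero: "f \<zero>\<^bsub>R\<^esub> \<in> I"
    and add: "\<And>a b. a \<in> carrier R \<Longrightarrow> b \<in> carrier R \<Longrightarrow> f (a \<oplus>\<^bsub>R\<^esub> b) = f a \<oplus>\<^bsub>S\<^esub> f b"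
    and mult: "\<And>a b. a \<in> carrier R \<Longrightarrow> b \<in> carrier R \<Longrightarrow> f (a \<otimes>\<^bsub>R\<^esub> b) = f a \<otimes>\<^bsub>S\<^esub> f b"
    and closed: "\<And>a. a \<in> carrier R \<Longrightarrow> f a \<in> carrier S"
  shows "ideal {a \<in> carrier R. f a \<in> I} R"
proof (rule cring_idealI[OF R])
  interpret R: cring R by fact
  interpret I: ideal I S by fact
  show "{a \<in> carrier R. f a \<in> I} \<subseteq> carrier R" by blast
  show "\<zero>\<^bsub>R\<^esub> \<in> {a \<in> carrier R. f a \<in> I}" using zero by simp
  show "a \<oplus>\<^bsub>R\<^esub> b \<in> {a \<in> carrier R. f a \<in> I}"
    if "a \<in> {a \<in> carrier R. f a \<in> I}" "b \<in> {a \<in> carrier R. f a \<in> I}" for a b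
    using that add I.a_closed by auto
  show "r \<otimes>\<^bsub>R\<^esub> a \<in> {a \<in> carrier R. f a \<in> I}"
    if "a \<in> {a \<in> carrier R. f a \<in> I}" "r \<in> carrier R" for a r
    using that mult closed I.I_l_closed by auto
qed

text \<open>The plain preimage of an ideal under an additive map, such as a transfer, need not be
  an ideal.\<close>

lemma ideal_additive_vimage:
  assumes R: "cring R" and I: "ideal I S"
    and zero: "f \<zero>\<^bsub>R\<^esub> \<in> I"
    and add: "\<And>a b. a \<in> carrier R \<Longrightarrow> b \<in> carrier R \<Longrightarrow> f (a \<oplus>\<^bsub>R\<^esub> b) = f a \<oplus>\<^bsub>S\<^esub> f b"
  shows "ideal {a \<in> carrier R. \<forall>r\<in>carrier R. f (r \<otimes>\<^bsub>R\<^esub> a) \<in> I} R"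
proof (rule cring_idealI[OF R])
  interpret R: cring R by fact
  interpret I: ideal I S by fact
  show "{a \<in> carrier R. \<forall>r\<in>carrier R. f (r \<otimes>\<^bsub>R\<^esub> a) \<in> I} \<subseteq> carrier R" by blast
  show "\<zero>\<^bsub>R\<^esub> \<in> {a \<in> carrier R. \<forall>r\<in>carrier R. f (r \<otimes>\<^bsub>R\<^esub> a) \<in> I}" using zero by simp
  show "a \<oplus>\<^bsub>R\<^esub> b \<in> {a \<in> carrier R. \<forall>r\<in>carrier R. f (r \<otimes>\<^bsub>R\<^esub> a) \<in> I}"
    if "a \<in> {a \<in> carrier R. \<forall>r\<in>carrier R. f (r \<otimes>\<^bsub>R\<^esub> a) \<in> I}"
      "b \<in> {a \<in> carrier R. \<forall>r\<in>carrier R. f (r \<otimes>\<^bsub>R\<^esub> a) \<in> I}" for a b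
    using that add I.a_closed by (auto simp: R.r_distr)
  show "s \<otimes>\<^bsub>R\<^esub> a \<in> {a \<in> carrier R. \<forall>r\<in>carrier R. f (r \<otimes>\<^bsub>R\<^esub> a) \<in> I}"
    if "a \<in> {a \<in> carrier R. \<forall>r\<in>carrier R. f (r \<otimes>\<^bsub>R\<^esub> a) \<in> I}" "s \<in> carrier R" for a s
    using that by (auto simp: R.m_assoc[symmetric])
qed

lemma ideal_colon:
  assumes R: "cring R" and I: "ideal I R" and a: "a \<in> carrier R"
  shows "ideal {b \<in> carrier R. a \<otimes>\<^bsub>R\<^esub> b \<in> I} R"
proof (rule cring_idealI[OF R])
  interpret R: cring R by fact
  interpret I: ideal I R by fact
  show "{b \<in> carrier R. a \<otimes>\<^bsub>R\<^esub> b \<in> I} \<subseteq> carrier R" by blast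
  show "\<zero>\<^bsub>R\<^esub> \<in> {b \<in> carrier R. a \<otimes>\<^bsub>R\<^esub> b \<in> I}" using a by simp
  show "b \<oplus>\<^bsub>R\<^esub> c \<in> {b \<in> carrier R. a \<otimes>\<^bsub>R\<^esub> b \<in> I}"
    if "b \<in> {b \<in> carrier R. a \<otimes>\<^bsub>R\<^esub> b \<in> I}" "c \<in> {b \<in> carrier R. a \<otimes>\<^bsub>R\<^esub> b \<in> I}" for b c
    using that a by (auto simp: R.r_distr)
  show "r \<otimes>\<^bsub>R\<^esub> b \<in> {b \<in> carrier R. a \<otimes>\<^bsub>R\<^esub> b \<in> I}"
    if "b \<in> {b \<in> carrier R. a \<otimes>\<^bsub>R\<^esub> b \<in> I}" "r \<in> carrier R" for b r
  proof -
    have "a \<otimes>\<^bsub>R\<^esub> (r \<otimes>\<^bsub>R\<^esub> b) = r \<otimes>\<^bsub>R\<^esub> (a \<otimes>\<^bsub>R\<^esub> b)"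
      using that a by (simp add: R.m_lcomm)
    then show ?thesis using that a I.I_l_closed by auto
  qed
qed

lemma genideal_mult_mem:
  assumes R: "cring R" and I: "ideal I R" and A: "A \<subseteq> carrier R" and B: "B \<subseteq> carrier R"
    and gens: "\<And>a b. a \<in> A \<Longrightarrow> b \<in> B \<Longrightarrow> a \<otimes>\<^bsub>R\<^esub> b \<in> I"
    and a: "a \<in> genideal R A" and b: "b \<in> genideal R B"
  shows "a \<otimes>\<^bsub>R\<^esub> b \<in> I"
proof -
  interpret R: cring R by fact
  have a_carrier: "a \<in> carrier R" by (rule ideal.Icarr[OF R.genideal_ideal[OF A] a])
  have b_carrier: "b \<in> carrier R" by (rule ideal.Icarr[OF R.genideal_ideal[OF B] b])
  have "a' \<otimes>\<^bsub>R\<^esub> b \<in> I" if a': "a' \<in> A" for a'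
  proof -
    have "genideal R B \<subseteq> {b \<in> carrier R. a' \<otimes>\<^bsub>R\<^esub> b \<in> I}"
    proof (rule R.genideal_minimal)
      show "ideal {b \<in> carrier R. a' \<otimes>\<^bsub>R\<^esub> b \<in> I} R" using ideal_colon[OF R I] a' A by blast
      show "B \<subseteq> {b \<in> carrier R. a' \<otimes>\<^bsub>R\<^esub> b \<in> I}" using gens a' B by blast
    qed
    then show ?thesis using b by blast
  qed
  then have "genideal R A \<subseteq> {a \<in> carrier R. b \<otimes>\<^bsub>R\<^esub> a \<in> I}"
  proof (intro R.genideal_minimal)
    show "ideal {a \<in> carrier R. b \<otimes>\<^bsub>R\<^esub> a \<in> I} R" using ideal_colon[OF R I b_carrier] .
    show "A \<subseteq> {a \<in> carrier R. b \<otimes>\<^bsub>R\<^esub> a \<in> I}"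
      using \<open>\<And>a'. a' \<in> A \<Longrightarrow> a' \<otimes>\<^bsub>R\<^esub> b \<in> I\<close> A b_carrier R.m_comm by (auto simp: subset_iff)
  qed
  then show ?thesis using a a_carrier b_carrier R.m_comm by auto
qed

lemma exists_representatives:
  assumes refl: "\<And>x. x \<in> Y \<Longrightarrow> E x x"
    and sym: "\<And>x y. x \<in> Y \<Longrightarrow> y \<in> Y \<Longrightarrow> E x y \<Longrightarrow> E y x"
    and trans: "\<And>x y z. x \<in> Y \<Longrightarrow> y \<in> Y \<Longrightarrow> z \<in> Y \<Longrightarrow> E x y \<Longrightarrow> E y z \<Longrightarrow> E x z"
  shows "\<exists>R. R \<subseteq> Y \<and> (\<forall>x\<in>Y. \<exists>!r. r \<in> R \<and> E r x)"
proof -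
  define cl where "cl x = {y \<in> Y. E y x}" for x
  define c where "c x = (SOME r. r \<in> cl x)" for x
  have c: "c x \<in> Y \<and> E (c x) x" if "x \<in> Y" for x
  proof -
    have "x \<in> cl x" using that refl unfolding cl_def by auto
    then have "c x \<in> cl x" unfolding c_def by (rule someI)
    then show ?thesis unfolding cl_def by auto
  qed
  have cleq: "cl x = cl y" if xy: "x \<in> Y" "y \<in> Y" "E x y" for x y
  proof -
    have yx: "E y x" using sym[OF xy] .
    have "E z x \<longleftrightarrow> E z y" if "z \<in> Y" for z
      using trans[OF that xy(1) xy(2) _ xy(3)] trans[OF that xy(2) xy(1) _ yx] by blast
    then show ?thesis unfolding cl_def by blast
  qed
  show ?thesis
  proof (intro exI conjI ballI)
    show "c ` Y \<subseteq> Y" using c by auto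
    fix x assume x: "x \<in> Y"
    show "\<exists>!r. r \<in> c ` Y \<and> E r x"
    proof (rule ex1I)
      show "c x \<in> c ` Y \<and> E (c x) x" using c x by auto
      fix r assume r: "r \<in> c ` Y \<and> E r x"
      then obtain x' where x': "x' \<in> Y" "r = c x'" by auto
      have cx: "c x' \<in> Y" "E (c x') x'" using c[OF x'(1)] by auto
      have "E (c x') x" using r x' by simp
      then have "E x' x" using trans[OF x'(1) cx(1) x sym[OF cx(1) x'(1) cx(2)]] by simp
      then have "cl x' = cl x" using cleq x x' by blast
      then show "r = c x" using x' unfolding c_def by simp
    qed
  qed
qed

definition list_prod :: "('a, 'm) ring_scheme \<Rightarrow> 'a list \<Rightarrow> 'a" where
  "list_prod R vs = foldr (\<otimes>\<^bsub>R\<^esub>) vs \<one>\<^bsub>R\<^esub>"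

lemma list_prod_Nil [simp]: "list_prod R [] = \<one>\<^bsub>R\<^esub>"
  unfolding list_prod_def by simp

lemma list_prod_Cons [simp]: "list_prod R (v # vs) = v \<otimes>\<^bsub>R\<^esub> list_prod R vs"
  unfolding list_prod_def by simp

lemma list_prod_closed: "cring R \<Longrightarrow> set vs \<subseteq> carrier R \<Longrightarrow> list_prod R vs \<in> carrier R"
  unfolding list_prod_def by (simp add: cring_def ring.axioms monoid.multlist_closed)

lemma list_prod_append:
  assumes "cring R" "set xs \<subseteq> carrier R" "set ys \<subseteq> carrier R"
  shows "list_prod R (xs @ ys) = list_prod R xs \<otimes>\<^bsub>R\<^esub> list_prod R ys"
  using assms(2)
proof (induction xs)
  case Nil
  interpret cring R by fact
  show ?case using list_prod_closed[OF assms(1,3)] by simp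
next
  case (Cons x xs)
  interpret cring R by fact
  show ?case
    using Cons list_prod_closed[OF assms(1)] assms(3) by (simp add: m_assoc)
qed

lemma list_prod_hom:
  assumes "cring R"
    and "\<And>a b. a \<in> carrier R \<Longrightarrow> b \<in> carrier R \<Longrightarrow> f (a \<otimes>\<^bsub>R\<^esub> b) = f a \<otimes>\<^bsub>S\<^esub> f b"
    and "f \<one>\<^bsub>R\<^esub> = \<one>\<^bsub>S\<^esub>" and "set vs \<subseteq> carrier R"
  shows "f (list_prod R vs) = list_prod S (map f vs)"
  using assms(4) by (induction vs) (simp_all add: assms(2,3) list_prod_closed[OF assms(1)])

lemma nat_pow_hom:
  assumes "cring R"
    and "\<And>a b. a \<in> carrier R \<Longrightarrow> b \<in> carrier R \<Longrightarrow> f (a \<otimes>\<^bsub>R\<^esub> b) = f a \<otimes>\<^bsub>S\<^esub> f b"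
    and "f \<one>\<^bsub>R\<^esub> = \<one>\<^bsub>S\<^esub>" and "a \<in> carrier R"
  shows "f (a [^]\<^bsub>R\<^esub> (n::nat)) = f a [^]\<^bsub>S\<^esub> n"
proof -
  interpret cring R by fact
  show ?thesis by (induction n) (simp_all add: assms(2-4))
qed

lemma finprod_eq_list_prod:
  assumes "cring R" and "distinct qs" and "f \<in> set qs \<rightarrow> carrier R"
  shows "finprod R f (set qs) = list_prod R (map f qs)"
  using assms(2,3)
proof (induction qs)
  case Nil
  interpret cring R by fact
  show ?case by simp
next
  case (Cons q qs)
  interpret cring R by fact
  have "finprod R f (insert q (set qs)) = f q \<otimes>\<^bsub>R\<^esub> finprod R f (set qs)"
    using Cons.prems by (intro finprod_insert) auto
  then show ?case using Cons by simp
qed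

lemma list_prod_eq_zero:
  assumes R: "cring R" and vs: "set vs \<subseteq> carrier R" and v: "v \<in> carrier R"
    and nil: "v [^]\<^bsub>R\<^esub> (k::nat) = \<zero>\<^bsub>R\<^esub>" and count: "k \<le> count_list vs v"
  shows "list_prod R vs = \<zero>\<^bsub>R\<^esub>"
proof -
  interpret cring R by fact
  have "v [^]\<^bsub>R\<^esub> (j::nat) \<otimes>\<^bsub>R\<^esub> list_prod R ws = \<zero>\<^bsub>R\<^esub>"
    if "set ws \<subseteq> carrier R" "k \<le> j + count_list ws v" for ws j
    using that
  proof (induction ws arbitrary: j)
    case Nil
    then have "v [^]\<^bsub>R\<^esub> j = v [^]\<^bsub>R\<^esub> k \<otimes>\<^bsub>R\<^esub> v [^]\<^bsub>R\<^esub> (j - k)"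
      using nat_pow_mult[OF v, of k "j - k"] by simp
    then show ?case using nil v by simp
  next
    case (Cons w ws)
    have w: "w \<in> carrier R" and ws: "set ws \<subseteq> carrier R" using Cons.prems by auto
    have p: "list_prod R ws \<in> carrier R" using list_prod_closed[OF R ws] .
    show ?case
    proof (cases "w = v")
      case True
      then have "v [^]\<^bsub>R\<^esub> j \<otimes>\<^bsub>R\<^esub> list_prod R (w # ws) = v [^]\<^bsub>R\<^esub> (Suc j) \<otimes>\<^bsub>R\<^esub> list_prod R ws"
        using v p by (simp add: m_assoc)
      also have "\<dots> = \<zero>\<^bsub>R\<^esub>" by (rule Cons.IH) (use Cons.prems True ws in simp_all)
      finally show ?thesis .
    next
      case False
      then have "v [^]\<^bsub>R\<^esub> j \<otimes>\<^bsub>R\<^esub> list_prod R (w # ws) = w \<otimes>\<^bsub>R\<^esub> (v [^]\<^bsub>R\<^esub> j \<otimes>\<^bsub>R\<^esub> list_prod R ws)"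
        using v w p by (simp add: m_lcomm)
      also have "\<dots> = \<zero>\<^bsub>R\<^esub>" using Cons False w ws by simp
      finally show ?thesis .
    qed
  qed
  from this[of vs 0] show ?thesis using vs count list_prod_closed[OF R vs] by simp
qed

lemma pigeonhole_count_list:
  assumes "set vs \<subseteq> V" "finite V" "card V \<le> N" "N * (k - 1) + 1 \<le> length vs"
  shows "\<exists>v\<in>set vs. k \<le> count_list vs v"
proof (rule ccontr)
  assume "\<not> ?thesis"
  then have "count_list vs v \<le> k - 1" for v
    by (cases "v \<in> set vs") (auto simp: count_list_0_iff)
  then have "length vs \<le> card V * (k - 1)"
    using sum_count_set[OF assms(1,2)] sum_mono[of V "count_list vs" "\<lambda>_. k - 1"] by simp
  also have "\<dots> \<le> N * (k - 1)" using assms(3) by simp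
  finally show False using assms(4) by simp
qed


section \<open>Conjugate subgroups, cosets and orbit representatives\<close>

context group
begin

lemma subgrp_le_refl: "subgroup H G \<Longrightarrow> subgrp_le G H H" unfolding subgrp_le_def by auto

lemma subgrp_le_trans: "subgrp_le G H K \<Longrightarrow> subgrp_le G K M \<Longrightarrow> subgrp_le G H M" unfolding subgrp_le_def by auto

lemma subgrp_leI: "subgroup H G \<Longrightarrow> subgroup K G \<Longrightarrow> H \<subseteq> K \<Longrightarrow> subgrp_le G H K" unfolding subgrp_le_def by auto

lemma subgrp_leD: "subgrp_le G H K \<Longrightarrow> subgroup H G \<and> subgroup K G \<and> H \<subseteq> K" unfolding subgrp_le_def by auto

lemma subgrp_le_Int_left: "subgroup A G \<Longrightarrow> subgroup B G \<Longrightarrow> subgrp_le G (A \<inter> B) A"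
  unfolding subgrp_le_def using subgroups_Inter_pair by blast

lemma subgrp_le_Int_right: "subgroup A G \<Longrightarrow> subgroup B G \<Longrightarrow> subgrp_le G (A \<inter> B) B"
  unfolding subgrp_le_def using subgroups_Inter_pair by blast

lemma inv_mult_cancel_left: "a \<in> carrier G \<Longrightarrow> b \<in> carrier G \<Longrightarrow> inv\<^bsub>G\<^esub> a \<otimes>\<^bsub>G\<^esub> (a \<otimes>\<^bsub>G\<^esub> b) = b"
  by (simp add: m_assoc[symmetric])

lemma mult_inv_cancel_left: "a \<in> carrier G \<Longrightarrow> b \<in> carrier G \<Longrightarrow> a \<otimes>\<^bsub>G\<^esub> (inv\<^bsub>G\<^esub> a \<otimes>\<^bsub>G\<^esub> b) = b"
  by (simp add: m_assoc[symmetric])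

lemmas group_cancel_simps = m_assoc inv_mult_cancel_left mult_inv_cancel_left inv_mult_group

lemma conjsub_carrier: "H \<subseteq> carrier G \<Longrightarrow> g \<in> carrier G \<Longrightarrow> conjsub G g H \<subseteq> carrier G"
  unfolding conjsub_def by auto

lemma conjsub_comp: "H \<subseteq> carrier G \<Longrightarrow> g \<in> carrier G \<Longrightarrow> g' \<in> carrier G \<Longrightarrow>
   conjsub G g' (conjsub G g H) = conjsub G (g' \<otimes>\<^bsub>G\<^esub> g) H"
  unfolding conjsub_def image_image
  by (intro image_cong refl) (auto simp: inv_mult_group m_assoc subsetD)

lemma conjsub_one: "H \<subseteq> carrier G \<Longrightarrow> conjsub G \<one>\<^bsub>G\<^esub> H = H"
  unfolding conjsub_def by (auto simp: subsetD image_iff)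

lemma mem_conjsub: "H \<subseteq> carrier G \<Longrightarrow> g \<in> carrier G \<Longrightarrow>
   y \<in> conjsub G g H \<longleftrightarrow> y \<in> carrier G \<and> inv\<^bsub>G\<^esub> g \<otimes>\<^bsub>G\<^esub> y \<otimes>\<^bsub>G\<^esub> g \<in> H"
proof
  assume "H \<subseteq> carrier G" "g \<in> carrier G" "y \<in> conjsub G g H"
  then obtain h where h: "h \<in> H" "y = g \<otimes>\<^bsub>G\<^esub> h \<otimes>\<^bsub>G\<^esub> inv\<^bsub>G\<^esub> g" unfolding conjsub_def by auto
  with \<open>H \<subseteq> carrier G\<close> \<open>g \<in> carrier G\<close> have hc: "h \<in> carrier G" by auto
  have "inv\<^bsub>G\<^esub> g \<otimes>\<^bsub>G\<^esub> y \<otimes>\<^bsub>G\<^esub> g = h"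
    using h(2) hc \<open>g \<in> carrier G\<close> by (metis inv_closed l_inv m_assoc m_closed r_inv r_one l_one)
  then show "y \<in> carrier G \<and> inv\<^bsub>G\<^esub> g \<otimes>\<^bsub>G\<^esub> y \<otimes>\<^bsub>G\<^esub> g \<in> H"
    using h hc \<open>g \<in> carrier G\<close> by auto
next
  assume a: "H \<subseteq> carrier G" "g \<in> carrier G" "y \<in> carrier G \<and> inv\<^bsub>G\<^esub> g \<otimes>\<^bsub>G\<^esub> y \<otimes>\<^bsub>G\<^esub> g \<in> H"
  have "y = g \<otimes>\<^bsub>G\<^esub> (inv\<^bsub>G\<^esub> g \<otimes>\<^bsub>G\<^esub> y \<otimes>\<^bsub>G\<^esub> g) \<otimes>\<^bsub>G\<^esub> inv\<^bsub>G\<^esub> g"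
    using a by (metis inv_closed l_inv m_assoc m_closed r_inv r_one l_one)
  then show "y \<in> conjsub G g H" unfolding conjsub_def using a by blast
qed

lemma conjsub_subgroup: "subgroup H G \<Longrightarrow> g \<in> carrier G \<Longrightarrow> subgroup (conjsub G g H) G"
proof -
  assume H: "subgroup H G" and g: "g \<in> carrier G"
  have Hc: "H \<subseteq> carrier G" using H subgroup.subset by blast
  show ?thesis
  proof (rule subgroupI)
    show "conjsub G g H \<subseteq> carrier G" using conjsub_carrier[OF Hc g] .
    show "conjsub G g H \<noteq> {}" unfolding conjsub_def using subgroup.one_closed[OF H] by blast
  next
    fix a assume "a \<in> conjsub G g H"
    then have a: "a \<in> carrier G" "inv\<^bsub>G\<^esub> g \<otimes>\<^bsub>G\<^esub> a \<otimes>\<^bsub>G\<^esub> g \<in> H" using mem_conjsub[OF Hc g] by auto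
    have "inv\<^bsub>G\<^esub> g \<otimes>\<^bsub>G\<^esub> inv\<^bsub>G\<^esub> a \<otimes>\<^bsub>G\<^esub> g = inv\<^bsub>G\<^esub> (inv\<^bsub>G\<^esub> g \<otimes>\<^bsub>G\<^esub> a \<otimes>\<^bsub>G\<^esub> g)"
      using a g by (simp add: inv_mult_group m_assoc)
    then show "inv\<^bsub>G\<^esub> a \<in> conjsub G g H"
      using mem_conjsub[OF Hc g] a g subgroup.m_inv_closed[OF H] by auto
  next
    fix a b assume "a \<in> conjsub G g H" "b \<in> conjsub G g H"
    then have a: "a \<in> carrier G" "inv\<^bsub>G\<^esub> g \<otimes>\<^bsub>G\<^esub> a \<otimes>\<^bsub>G\<^esub> g \<in> H"
      and b: "b \<in> carrier G" "inv\<^bsub>G\<^esub> g \<otimes>\<^bsub>G\<^esub> b \<otimes>\<^bsub>G\<^esub> g \<in> H" using mem_conjsub[OF Hc g] by auto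
    have "inv\<^bsub>G\<^esub> g \<otimes>\<^bsub>G\<^esub> (a \<otimes>\<^bsub>G\<^esub> b) \<otimes>\<^bsub>G\<^esub> g =
          (inv\<^bsub>G\<^esub> g \<otimes>\<^bsub>G\<^esub> a \<otimes>\<^bsub>G\<^esub> g) \<otimes>\<^bsub>G\<^esub> (inv\<^bsub>G\<^esub> g \<otimes>\<^bsub>G\<^esub> b \<otimes>\<^bsub>G\<^esub> g)"
      using a b g by (simp add: m_assoc) (metis inv_closed m_assoc m_closed r_inv l_one)
    then show "a \<otimes>\<^bsub>G\<^esub> b \<in> conjsub G g H"
      using mem_conjsub[OF Hc g] a b g subgroup.m_closed[OF H] by auto
  qed
qed

lemma conjsub_mono: "A \<subseteq> B \<Longrightarrow> conjsub G g A \<subseteq> conjsub G g B"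
  unfolding conjsub_def by auto

lemma conjsub_self: "subgroup H G \<Longrightarrow> h \<in> H \<Longrightarrow> conjsub G h H = H"
proof -
  assume H: "subgroup H G" and h: "h \<in> H"
  have Hc: "H \<subseteq> carrier G" using H subgroup.subset by blast
  have hc: "h \<in> carrier G" using h Hc by auto
  have "inv\<^bsub>G\<^esub> h \<in> H" using subgroup.m_inv_closed[OF H h] .
  have "y \<in> conjsub G h H \<longleftrightarrow> y \<in> H" for y
  proof (cases "y \<in> carrier G")
    case True
    have "inv\<^bsub>G\<^esub> h \<otimes>\<^bsub>G\<^esub> y \<otimes>\<^bsub>G\<^esub> h \<in> H \<longleftrightarrow> y \<in> H"
    proof
      assume "inv\<^bsub>G\<^esub> h \<otimes>\<^bsub>G\<^esub> y \<otimes>\<^bsub>G\<^esub> h \<in> H"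
      then have "h \<otimes>\<^bsub>G\<^esub> (inv\<^bsub>G\<^esub> h \<otimes>\<^bsub>G\<^esub> y \<otimes>\<^bsub>G\<^esub> h) \<otimes>\<^bsub>G\<^esub> inv\<^bsub>G\<^esub> h \<in> H"
        using h \<open>inv\<^bsub>G\<^esub> h \<in> H\<close> subgroup.m_closed[OF H] by blast
      moreover have "h \<otimes>\<^bsub>G\<^esub> (inv\<^bsub>G\<^esub> h \<otimes>\<^bsub>G\<^esub> y \<otimes>\<^bsub>G\<^esub> h) \<otimes>\<^bsub>G\<^esub> inv\<^bsub>G\<^esub> h = y"
        using True hc by (metis inv_closed l_inv m_assoc m_closed r_inv r_one l_one)
      ultimately show "y \<in> H" by simp
    next
      assume "y \<in> H" then show "inv\<^bsub>G\<^esub> h \<otimes>\<^bsub>G\<^esub> y \<otimes>\<^bsub>G\<^esub> h \<in> H"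
        using h \<open>inv\<^bsub>G\<^esub> h \<in> H\<close> subgroup.m_closed[OF H] by blast
    qed
    then show ?thesis using mem_conjsub[OF Hc hc] True by blast
  next
    case False then show ?thesis using mem_conjsub[OF Hc hc] Hc by blast
  qed
  then show ?thesis by blast
qed

lemma conjsub_le: "subgrp_le G H K \<Longrightarrow> g \<in> carrier G \<Longrightarrow> subgrp_le G (conjsub G g H) (conjsub G g K)"
  unfolding subgrp_le_def using conjsub_subgroup conjsub_mono by blast

lemma lco_mult: "A \<subseteq> carrier G \<Longrightarrow> a \<in> carrier G \<Longrightarrow> b \<in> carrier G \<Longrightarrow>
   lco G a (lco G b A) = lco G (a \<otimes>\<^bsub>G\<^esub> b) A"
proof -
  assume A: "A \<subseteq> carrier G" and a: "a \<in> carrier G" and b: "b \<in> carrier G"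
  have "a \<otimes>\<^bsub>G\<^esub> (b \<otimes>\<^bsub>G\<^esub> c) = (a \<otimes>\<^bsub>G\<^esub> b) \<otimes>\<^bsub>G\<^esub> c" if "c \<in> A" for c
  proof -
    have "c \<in> carrier G" using A that by auto
    then show ?thesis using a b by (simp add: m_assoc)
  qed
  then show ?thesis unfolding lco_def image_image by (intro image_cong refl) simp
qed

lemma lco_one: "A \<subseteq> carrier G \<Longrightarrow> lco G \<one>\<^bsub>G\<^esub> A = A"
proof -
  assume A: "A \<subseteq> carrier G"
  have "\<one>\<^bsub>G\<^esub> \<otimes>\<^bsub>G\<^esub> c = c" if "c \<in> A" for c
    using A that by auto
  then show ?thesis unfolding lco_def by simp
qed

lemma lco_carrier: "A \<subseteq> carrier G \<Longrightarrow> a \<in> carrier G \<Longrightarrow> lco G a A \<subseteq> carrier G"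
  unfolding lco_def by auto

lemma lcosetsK_carrier: "K \<subseteq> carrier G \<Longrightarrow> H \<subseteq> carrier G \<Longrightarrow> C \<in> lcosetsK G K H \<Longrightarrow> C \<subseteq> carrier G"
  unfolding lcosetsK_def using lco_carrier[of H] by auto

lemma lco_lcosetsK: "subgroup K G \<Longrightarrow> H \<subseteq> carrier G \<Longrightarrow> k \<in> K \<Longrightarrow> C \<in> lcosetsK G K H \<Longrightarrow> lco G k C \<in> lcosetsK G K H"
proof -
  assume K: "subgroup K G" and H: "H \<subseteq> carrier G" and k: "k \<in> K" and C: "C \<in> lcosetsK G K H"
  then obtain k0 where k0: "k0 \<in> K" "C = lco G k0 H" unfolding lcosetsK_def by auto
  have K_carrier: "K \<subseteq> carrier G" using K by (rule subgroup.subset)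
  have "lco G k C = lco G (k \<otimes>\<^bsub>G\<^esub> k0) H" unfolding k0(2)
    by (rule lco_mult[OF H]) (use k k0 K_carrier in auto)
  moreover have "k \<otimes>\<^bsub>G\<^esub> k0 \<in> K" using subgroup.m_closed[OF K k k0(1)] .
  ultimately show ?thesis unfolding lcosetsK_def by blast
qed

lemma action_orbit_representatives:
  assumes K: "subgroup K G"
    and one: "\<And>x. x \<in> \<Omega> \<Longrightarrow> f \<one>\<^bsub>G\<^esub> x = x"
    and mult: "\<And>a b x. a \<in> K \<Longrightarrow> b \<in> K \<Longrightarrow> x \<in> \<Omega> \<Longrightarrow> f a (f b x) = f (a \<otimes>\<^bsub>G\<^esub> b) x"
  shows "\<exists>R. R \<subseteq> \<Omega> \<and> (\<forall>x\<in>\<Omega>. \<exists>!r. r \<in> R \<and> (\<exists>k\<in>K. f k r = x))"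
proof (rule exists_representatives)
  show "\<exists>k\<in>K. f k x = x" if "x \<in> \<Omega>" for x using one[OF that] subgroup.one_closed[OF K] by blast
next
  fix x y assume x: "x \<in> \<Omega>" and "\<exists>k\<in>K. f k x = y"
  then obtain k where k: "k \<in> K" "f k x = y" by blast
  have "inv\<^bsub>G\<^esub> k \<in> K" "inv\<^bsub>G\<^esub> k \<otimes>\<^bsub>G\<^esub> k = \<one>\<^bsub>G\<^esub>"
    using subgroup.m_inv_closed[OF K k(1)] k(1) subgroup.subset[OF K] by auto
  then show "\<exists>k\<in>K. f k y = x" using mult[OF _ k(1) x] one[OF x] k(2) by metis
next
  fix x y z assume x: "x \<in> \<Omega>" and "\<exists>k\<in>K. f k x = y" "\<exists>k\<in>K. f k y = z"
  then show "\<exists>k\<in>K. f k x = z" using mult[OF _ _ x] subgroup.m_closed[OF K] by metis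
qed

lemma action_stabilizer_subgroup:
  assumes K: "subgroup K G"
    and one: "f \<one>\<^bsub>G\<^esub> x = x"
    and mult: "\<And>a b. a \<in> K \<Longrightarrow> b \<in> K \<Longrightarrow> f a (f b x) = f (a \<otimes>\<^bsub>G\<^esub> b) x"
  shows "subgroup {k \<in> K. f k x = x} G"
proof (rule subgroupI)
  show "{k \<in> K. f k x = x} \<subseteq> carrier G" using subgroup.subset[OF K] by auto
  show "{k \<in> K. f k x = x} \<noteq> {}" using subgroup.one_closed[OF K] one by blast
next
  fix a assume "a \<in> {k \<in> K. f k x = x}"
  then have a: "a \<in> K" "f a x = x" by auto
  have "inv\<^bsub>G\<^esub> a \<in> K" "inv\<^bsub>G\<^esub> a \<otimes>\<^bsub>G\<^esub> a = \<one>\<^bsub>G\<^esub>"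
    using subgroup.m_inv_closed[OF K a(1)] a(1) subgroup.subset[OF K] by auto
  then show "inv\<^bsub>G\<^esub> a \<in> {k \<in> K. f k x = x}" using mult[OF _ a(1)] a(2) one by auto
next
  fix a b assume "a \<in> {k \<in> K. f k x = x}" "b \<in> {k \<in> K. f k x = x}"
  then have "a \<in> K" "b \<in> K" "f a (f b x) = x" by auto
  then show "a \<otimes>\<^bsub>G\<^esub> b \<in> {k \<in> K. f k x = x}" using mult subgroup.m_closed[OF K] by auto
qed

lemma dreps_exists:
  assumes "subgrp_le G J K" "subgrp_le G H K"
  shows "\<exists>Q. dreps G K J H Q"
proof -
  have J: "subgroup J G" and K: "subgroup K G" and H: "subgroup H G" and JK: "J \<subseteq> K" and HK: "H \<subseteq> K"
    using assms unfolding subgrp_le_def by auto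
  have K_carrier: "K \<subseteq> carrier G" using K subgroup.subset by blast
  have J_carrier: "J \<subseteq> carrier G" and Hc: "H \<subseteq> carrier G" using J H subgroup.subset by auto
  define E where "E q k = (k \<in> dcos G J q H)" for q k
  have "\<exists>R. R \<subseteq> K \<and> (\<forall>x\<in>K. \<exists>!r. r \<in> R \<and> E r x)"
  proof (rule exists_representatives)
    fix x assume x: "x \<in> K"
    have "x = \<one>\<^bsub>G\<^esub> \<otimes>\<^bsub>G\<^esub> x \<otimes>\<^bsub>G\<^esub> \<one>\<^bsub>G\<^esub>" using x K_carrier by auto
    then show "E x x" unfolding E_def dcos_def using subgroup.one_closed[OF J] subgroup.one_closed[OF H] by blast
  next
    fix x y assume x: "x \<in> K" and y: "y \<in> K" and "E x y"
    then obtain j h where jh: "j \<in> J" "h \<in> H" "y = j \<otimes>\<^bsub>G\<^esub> x \<otimes>\<^bsub>G\<^esub> h" unfolding E_def dcos_def by auto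
    have c: "j \<in> carrier G" "h \<in> carrier G" "x \<in> carrier G" using jh x J_carrier Hc K_carrier by auto
    have "x = inv\<^bsub>G\<^esub> j \<otimes>\<^bsub>G\<^esub> y \<otimes>\<^bsub>G\<^esub> inv\<^bsub>G\<^esub> h"
      using c jh(3) by (metis inv_closed l_inv m_assoc m_closed r_inv r_one l_one)
    then show "E y x" unfolding E_def dcos_def
      using subgroup.m_inv_closed[OF J jh(1)] subgroup.m_inv_closed[OF H jh(2)] by blast
  next
    fix x y z assume x: "x \<in> K" and y: "y \<in> K" and z: "z \<in> K" and "E x y" "E y z"
    then obtain j h j' h' where jh: "j \<in> J" "h \<in> H" "y = j \<otimes>\<^bsub>G\<^esub> x \<otimes>\<^bsub>G\<^esub> h"
      and jh': "j' \<in> J" "h' \<in> H" "z = j' \<otimes>\<^bsub>G\<^esub> y \<otimes>\<^bsub>G\<^esub> h'" unfolding E_def dcos_def by auto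
    have c: "j \<in> carrier G" "h \<in> carrier G" "x \<in> carrier G" "j' \<in> carrier G" "h' \<in> carrier G"
      using jh jh' x J_carrier Hc K_carrier by auto
    have "z = (j' \<otimes>\<^bsub>G\<^esub> j) \<otimes>\<^bsub>G\<^esub> x \<otimes>\<^bsub>G\<^esub> (h \<otimes>\<^bsub>G\<^esub> h')"
      using c jh(3) jh'(3) by (simp add: m_assoc)
    then show "E x z" unfolding E_def dcos_def
      using subgroup.m_closed[OF J jh'(1) jh(1)] subgroup.m_closed[OF H jh(2) jh'(2)] by blast
  qed
  then show ?thesis unfolding dreps_def E_def by blast
qed

lemma dreps_finite:
  assumes "finite (carrier G)" "dreps G K J H Q" "subgroup K G"
  shows "finite Q"
  using finite_subset[OF _ assms(1)] subgroup.subset[OF assms(3)] assms(2) unfolding dreps_def by blast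

lemma dreps_nonempty: "dreps G K J H Q \<Longrightarrow> subgroup K G \<Longrightarrow> Q \<noteq> {}"
proof -
  assume d: "dreps G K J H Q" and K: "subgroup K G"
  have "\<one>\<^bsub>G\<^esub> \<in> K" using subgroup.one_closed[OF K] .
  with d obtain q where "q \<in> Q" unfolding dreps_def by blast
  then show ?thesis by auto
qed

lemma dreps_subset: "dreps G K J H Q \<Longrightarrow> Q \<subseteq> K"
  unfolding dreps_def by (elim conjE)

lemma subact_mult: "(\<And>C. C \<in> S \<Longrightarrow> C \<subseteq> carrier G) \<Longrightarrow> a \<in> carrier G \<Longrightarrow> b \<in> carrier G \<Longrightarrow>
   subact G a (subact G b S) = subact G (a \<otimes>\<^bsub>G\<^esub> b) S"
proof -
  assume S: "\<And>C. C \<in> S \<Longrightarrow> C \<subseteq> carrier G" and a: "a \<in> carrier G" and b: "b \<in> carrier G"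
  have "lco G a (lco G b C) = lco G (a \<otimes>\<^bsub>G\<^esub> b) C" if "C \<in> S" for C
    using lco_mult[OF S[OF that] a b] .
  then show ?thesis unfolding subact_def image_image by (intro image_cong refl) simp
qed

lemma subact_one: "(\<And>C. C \<in> S \<Longrightarrow> C \<subseteq> carrier G) \<Longrightarrow> subact G \<one>\<^bsub>G\<^esub> S = S"
proof -
  assume S: "\<And>C. C \<in> S \<Longrightarrow> C \<subseteq> carrier G"
  have "lco G \<one>\<^bsub>G\<^esub> C = C" if "C \<in> S" for C using lco_one[OF S[OF that]] .
  then show ?thesis unfolding subact_def by simp
qed

lemma subact_actionD:
  assumes "subgroup K G" "H \<subseteq> carrier G" "S \<subseteq> lcosetsK G K H"
  shows "subact G \<one>\<^bsub>G\<^esub> S = S" "\<And>a b. a \<in> K \<Longrightarrow> b \<in> K \<Longrightarrow> subact G a (subact G b S) = subact G (a \<otimes>\<^bsub>G\<^esub> b) S"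
proof -
  have C: "C \<subseteq> carrier G" if "C \<in> S" for C
    using that assms lcosetsK_carrier[OF subgroup.subset] by blast
  show "subact G \<one>\<^bsub>G\<^esub> S = S" using subact_one[OF C] .
  show "subact G a (subact G b S) = subact G (a \<otimes>\<^bsub>G\<^esub> b) S" if "a \<in> K" "b \<in> K" for a b
    using subact_mult[OF C] that subgroup.subset[OF assms(1)] by blast
qed

lemma substab_subgroup:
  assumes K: "subgroup K G" and H: "H \<subseteq> carrier G" and S: "S \<subseteq> lcosetsK G K H"
  shows "subgroup (substab G K S) G" "substab G K S \<subseteq> K"
proof -
  show "subgroup (substab G K S) G" unfolding substab_def
    using action_stabilizer_subgroup[where f="subact G", OF K subact_actionD[OF K H S]] .
  show "substab G K S \<subseteq> K" unfolding substab_def by blast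
qed

lemma subreps_exists:
  assumes K: "subgroup K G" and H: "H \<subseteq> carrier G"
  shows "\<exists>\<SS>. subreps G K H \<SS>"
proof -
  have "\<exists>R. R \<subseteq> Pow (lcosetsK G K H) \<and>
      (\<forall>S'\<in>Pow (lcosetsK G K H). \<exists>!S. S \<in> R \<and> (\<exists>k\<in>K. subact G k S = S'))"
  proof (rule action_orbit_representatives[OF K])
    show "subact G \<one>\<^bsub>G\<^esub> S = S" if "S \<in> Pow (lcosetsK G K H)" for S
      using subact_actionD(1)[OF K H] that by blast
    show "subact G a (subact G b S) = subact G (a \<otimes>\<^bsub>G\<^esub> b) S"
      if "a \<in> K" "b \<in> K" "S \<in> Pow (lcosetsK G K H)" for a b S
      using subact_actionD(2)[OF K H] that by blast
  qed
  then show ?thesis unfolding subreps_def .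
qed

lemma subreps_subset: "subreps G K H \<SS> \<Longrightarrow> S \<in> \<SS> \<Longrightarrow> S \<subseteq> lcosetsK G K H"
proof -
  assume a: "subreps G K H \<SS>" "S \<in> \<SS>"
  have "\<SS> \<subseteq> Pow (lcosetsK G K H)" using a(1) unfolding subreps_def by (rule conjunct1)
  then show ?thesis using a(2) by blast
qed

lemma sections_D: "s \<in> sections G J K H \<Longrightarrow> C \<in> lcosetsK G J K \<Longrightarrow> s C \<in> lcosetsK G J H \<and> s C \<subseteq> C"
  unfolding sections_def by auto

lemma sections_ext: "s \<in> sections G J K H \<Longrightarrow> C \<notin> lcosetsK G J K \<Longrightarrow> s C = undefined"
  unfolding sections_def PiE_def extensional_def by auto

lemma secact_app: "C \<in> lcosetsK G J K \<Longrightarrow> secact G J K j s C = lco G j (s (lco G (inv\<^bsub>G\<^esub> j) C))"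
  unfolding secact_def by simp

lemma secact_app_out: "C \<notin> lcosetsK G J K \<Longrightarrow> secact G J K j s C = undefined"
  unfolding secact_def by simp

context
  fixes J K H
  assumes J: "subgroup J G" and KJ: "K \<subseteq> J" and Hc: "H \<subseteq> carrier G"
begin

lemma J_carrier: "J \<subseteq> carrier G" using J by (rule subgroup.subset)
lemma K_carrier: "K \<subseteq> carrier G" using KJ J_carrier by auto

lemma lcosets_K_carrier: "C \<in> lcosetsK G J K \<Longrightarrow> C \<subseteq> carrier G"
  using lcosetsK_carrier[OF J_carrier K_carrier] .

lemma lcosets_H_carrier: "C \<in> lcosetsK G J H \<Longrightarrow> C \<subseteq> carrier G"
  using lcosetsK_carrier[OF J_carrier Hc] .

lemma secact_one:
  assumes s: "s \<in> sections G J K H"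
  shows "secact G J K \<one>\<^bsub>G\<^esub> s = s"
proof
  fix C show "secact G J K \<one>\<^bsub>G\<^esub> s C = s C"
  proof (cases "C \<in> lcosetsK G J K")
    case True
    have "s C \<in> lcosetsK G J H" using sections_D[OF s True] by auto
    then show ?thesis using secact_app[OF True] lco_one[OF lcosets_K_carrier[OF True]] lco_one[OF lcosets_H_carrier] by simp
  next
    case False
    then show ?thesis using secact_app_out[OF False] sections_ext[OF s False] by simp
  qed
qed

lemma secact_mult:
  assumes s: "s \<in> sections G J K H" and a: "a \<in> J" and b: "b \<in> J"
  shows "secact G J K a (secact G J K b s) = secact G J K (a \<otimes>\<^bsub>G\<^esub> b) s"
proof
  fix C show "secact G J K a (secact G J K b s) C = secact G J K (a \<otimes>\<^bsub>G\<^esub> b) s C"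
  proof (cases "C \<in> lcosetsK G J K")
    case True
    have ac: "a \<in> carrier G" and bc: "b \<in> carrier G" using a b J_carrier by auto
    have ia: "inv\<^bsub>G\<^esub> a \<in> J" using subgroup.m_inv_closed[OF J a] .
    have ib: "inv\<^bsub>G\<^esub> b \<in> J" using subgroup.m_inv_closed[OF J b] .
    have C': "lco G (inv\<^bsub>G\<^esub> a) C \<in> lcosetsK G J K" using lco_lcosetsK[OF J K_carrier ia True] .
    have e1: "secact G J K a (secact G J K b s) C = lco G a (lco G b (s (lco G (inv\<^bsub>G\<^esub> b) (lco G (inv\<^bsub>G\<^esub> a) C))))"
      using secact_app[OF True] secact_app[OF C'] by simp
    have C'': "lco G (inv\<^bsub>G\<^esub> b) (lco G (inv\<^bsub>G\<^esub> a) C) \<in> lcosetsK G J K"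
      using lco_lcosetsK[OF J K_carrier ib C'] .
    have e2: "lco G (inv\<^bsub>G\<^esub> b) (lco G (inv\<^bsub>G\<^esub> a) C) = lco G (inv\<^bsub>G\<^esub> (a \<otimes>\<^bsub>G\<^esub> b)) C"
      using lco_mult[OF lcosets_K_carrier[OF True]] ac bc by (simp add: inv_mult_group)
    have e3: "lco G a (lco G b Z) = lco G (a \<otimes>\<^bsub>G\<^esub> b) Z" if "Z \<in> lcosetsK G J H" for Z
      using lco_mult[OF lcosets_H_carrier[OF that] ac bc] .
    have "s (lco G (inv\<^bsub>G\<^esub> b) (lco G (inv\<^bsub>G\<^esub> a) C)) \<in> lcosetsK G J H" using sections_D[OF s C''] by auto
    then show ?thesis using e1 e2 e3 secact_app[OF True] by simp
  next
    case False
    then show ?thesis using secact_app_out[OF False] by simp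
  qed
qed

lemma secstab_subgroup:
  assumes s: "s \<in> sections G J K H"
  shows "subgroup (secstab G J K s) G" "secstab G J K s \<subseteq> J"
proof -
  show "subgroup (secstab G J K s) G" unfolding secstab_def
    using action_stabilizer_subgroup[where f="secact G J K", OF J secact_one[OF s] secact_mult[OF s]] .
  show "secstab G J K s \<subseteq> J" unfolding secstab_def by blast
qed

lemma secreps_exists: "\<exists>\<SS>. secreps G J K H \<SS>"
proof -
  have "\<exists>R. R \<subseteq> sections G J K H \<and>
      (\<forall>s'\<in>sections G J K H. \<exists>!s. s \<in> R \<and> (\<exists>j\<in>J. secact G J K j s = s'))"
    by (rule action_orbit_representatives[where f="secact G J K", OF J secact_one secact_mult])
  then show ?thesis unfolding secreps_def .
qed

end

lemma secreps_subset: "secreps G J K H \<SS> \<Longrightarrow> s \<in> \<SS> \<Longrightarrow> s \<in> sections G J K H"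
proof -
  assume a: "secreps G J K H \<SS>" "s \<in> \<SS>"
  have "\<SS> \<subseteq> sections G J K H" using a(1) unfolding secreps_def by (rule conjunct1)
  then show ?thesis using a(2) by blast
qed

lemma lco_self: "subgroup K G \<Longrightarrow> k \<in> K \<Longrightarrow> lco G k K = K"
proof -
  assume K: "subgroup K G" and k: "k \<in> K"
  have K_carrier: "K \<subseteq> carrier G" using K by (rule subgroup.subset)
  have kc: "k \<in> carrier G" using k K_carrier by auto
  show ?thesis
  proof
    show "lco G k K \<subseteq> K" unfolding lco_def using subgroup.m_closed[OF K k] by auto
    show "K \<subseteq> lco G k K"
    proof
      fix y assume y: "y \<in> K"
      have yc: "y \<in> carrier G" using y K_carrier by auto
      have "y = k \<otimes>\<^bsub>G\<^esub> (inv\<^bsub>G\<^esub> k \<otimes>\<^bsub>G\<^esub> y)" using kc yc by (simp add: mult_inv_cancel_left)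
      moreover have "inv\<^bsub>G\<^esub> k \<otimes>\<^bsub>G\<^esub> y \<in> K" using subgroup.m_closed[OF K subgroup.m_inv_closed[OF K k] y] .
      ultimately show "y \<in> lco G k K" unfolding lco_def by blast
    qed
  qed
qed

lemma secstab_incl:
  assumes J: "subgroup J G" and KJ: "K \<subseteq> J" and K: "subgroup K G" and H: "subgroup H G"
    and s: "s \<in> sections G J K H" and q: "q \<in> J" and x: "x \<in> s (lco G q K)"
    and j: "j \<in> secstab G J K s" and jq: "j \<in> conjsub G q K"
  shows "j \<in> conjsub G x H"
proof -
  have J_carrier: "J \<subseteq> carrier G" using J by (rule subgroup.subset)
  have K_carrier: "K \<subseteq> carrier G" and Hc: "H \<subseteq> carrier G" using K H subgroup.subset by auto
  have jJ: "j \<in> J" and js: "secact G J K j s = s" using j unfolding secstab_def by auto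
  have jc: "j \<in> carrier G" and qc: "q \<in> carrier G" using jJ q J_carrier by auto
  define C where "C = lco G q K"
  have C: "C \<in> lcosetsK G J K" unfolding C_def lcosetsK_def using q by blast
  define k where "k = inv\<^bsub>G\<^esub> q \<otimes>\<^bsub>G\<^esub> j \<otimes>\<^bsub>G\<^esub> q"
  have kK: "k \<in> K" using jq mem_conjsub[OF K_carrier qc] unfolding k_def by blast
  have kc: "k \<in> carrier G" using kK K_carrier by auto
  have e1: "inv\<^bsub>G\<^esub> j \<otimes>\<^bsub>G\<^esub> q = q \<otimes>\<^bsub>G\<^esub> inv\<^bsub>G\<^esub> k"
    unfolding k_def using jc qc by (simp add: group_cancel_simps)
  have "lco G (inv\<^bsub>G\<^esub> j) C = lco G (inv\<^bsub>G\<^esub> j \<otimes>\<^bsub>G\<^esub> q) K"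
    unfolding C_def using lco_mult[OF K_carrier] jc qc by simp
  also have "\<dots> = lco G q (lco G (inv\<^bsub>G\<^esub> k) K)" unfolding e1 using lco_mult[OF K_carrier] qc kc by simp
  also have "\<dots> = C" unfolding C_def using lco_self[OF K subgroup.m_inv_closed[OF K kK]] by simp
  finally have invC: "lco G (inv\<^bsub>G\<^esub> j) C = C" .
  have "s C = secact G J K j s C" using js by simp
  also have "\<dots> = lco G j (s C)" using secact_app[OF C] invC by simp
  finally have sC: "s C = lco G j (s C)" .
  have "s C \<in> lcosetsK G J H" using sections_D[OF s C] by blast
  then obtain y where y: "y \<in> J" "s C = lco G y H" unfolding lcosetsK_def by blast
  have yc: "y \<in> carrier G" using y J_carrier by auto
  have xC: "x \<in> s C" using x unfolding C_def .
  then obtain h0 where h0: "h0 \<in> H" "x = y \<otimes>\<^bsub>G\<^esub> h0" using y(2) unfolding lco_def by blast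
  have "j \<otimes>\<^bsub>G\<^esub> x \<in> lco G j (s C)" using xC unfolding lco_def by blast
  then have "j \<otimes>\<^bsub>G\<^esub> x \<in> lco G y H" using sC y(2) by simp
  then obtain h1 where h1: "h1 \<in> H" "j \<otimes>\<^bsub>G\<^esub> x = y \<otimes>\<^bsub>G\<^esub> h1" unfolding lco_def by blast
  have h0c: "h0 \<in> carrier G" and h1c: "h1 \<in> carrier G" using h0 h1 Hc by auto
  have xc: "x \<in> carrier G" using h0 yc h0c by simp
  have "inv\<^bsub>G\<^esub> x \<otimes>\<^bsub>G\<^esub> j \<otimes>\<^bsub>G\<^esub> x = inv\<^bsub>G\<^esub> x \<otimes>\<^bsub>G\<^esub> (j \<otimes>\<^bsub>G\<^esub> x)"
    using xc jc by (simp add: m_assoc)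
  also have "\<dots> = inv\<^bsub>G\<^esub> x \<otimes>\<^bsub>G\<^esub> (y \<otimes>\<^bsub>G\<^esub> h1)" using h1(2) by simp
  also have "\<dots> = inv\<^bsub>G\<^esub> h0 \<otimes>\<^bsub>G\<^esub> h1" using h0(2) yc h0c h1c by (simp add: group_cancel_simps)
  finally have "inv\<^bsub>G\<^esub> x \<otimes>\<^bsub>G\<^esub> j \<otimes>\<^bsub>G\<^esub> x \<in> H"
    using subgroup.m_closed[OF H subgroup.m_inv_closed[OF H h0(1)] h1(1)] by simp
  then show ?thesis using mem_conjsub[OF Hc xc] jc by blast
qed

lemma sections_xf_carrier:
  assumes J: "subgroup J G" and KJ: "K \<subseteq> J" and K: "subgroup K G" and H: "subgroup H G"
    and s: "s \<in> sections G J K H" and q: "q \<in> J" and x: "x \<in> s (lco G q K)"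
  shows "x \<in> carrier G"
proof -
  have J_carrier: "J \<subseteq> carrier G" using J by (rule subgroup.subset)
  have Hc: "H \<subseteq> carrier G" using H subgroup.subset by auto
  have C: "lco G q K \<in> lcosetsK G J K" unfolding lcosetsK_def using q by blast
  have "s (lco G q K) \<in> lcosetsK G J H" using sections_D[OF s C] by blast
  then show ?thesis using x lcosetsK_carrier[OF J_carrier Hc] by blast
qed

lemma sections_nonempty:
  assumes J: "subgroup J G" and KJ: "K \<subseteq> J" and K: "subgroup K G" and H: "subgroup H G"
    and s: "s \<in> sections G J K H" and q: "q \<in> J"
  shows "s (lco G q K) \<noteq> {}"
proof -
  have C: "lco G q K \<in> lcosetsK G J K" unfolding lcosetsK_def using q by blast
  have "s (lco G q K) \<in> lcosetsK G J H" using sections_D[OF s C] by blast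
  then obtain y where "s (lco G q K) = lco G y H" unfolding lcosetsK_def by blast
  then show ?thesis unfolding lco_def using subgroup.one_closed[OF H] by blast
qed

lemma secstab_Int_conjsub_le:
  assumes J: "subgroup J G" and KJ: "K \<subseteq> J" and K: "subgroup K G" and H: "subgroup H G"
    and s: "s \<in> sections G J K H" and q: "q \<in> J" and x: "x \<in> s (lco G q K)"
  shows "subgrp_le G (secstab G J K s \<inter> conjsub G q K) (conjsub G x H)"
    and "subgrp_le G (secstab G J K s \<inter> conjsub G q K) (secstab G J K s)"
proof -
  have qc: "q \<in> carrier G" using q subgroup.subset[OF J] by auto
  have xc: "x \<in> carrier G" using sections_xf_carrier[OF assms] .
  have St: "subgroup (secstab G J K s) G" using secstab_subgroup[OF J KJ subgroup.subset[OF H] s] by blast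
  have A: "subgroup (secstab G J K s \<inter> conjsub G q K) G"
    using subgroups_Inter_pair[OF St conjsub_subgroup[OF K qc]] .
  show "subgrp_le G (secstab G J K s \<inter> conjsub G q K) (conjsub G x H)"
    using secstab_incl[OF assms] A conjsub_subgroup[OF H xc] unfolding subgrp_le_def by blast
  show "subgrp_le G (secstab G J K s \<inter> conjsub G q K) (secstab G J K s)"
    using A St unfolding subgrp_le_def by blast
qed

lemma subreps_dreps_exist:
  assumes K: "subgroup K G" and H: "subgroup H G" and HK: "H \<subseteq> K"
  obtains SS Qf where "subreps G K H SS" "\<forall>S\<in>SS. dreps G K (substab G K S) H (Qf S)"
proof -
  have Hc: "H \<subseteq> carrier G" using subgroup.subset[OF H] .
  obtain SS where SS: "subreps G K H SS" using subreps_exists[OF K Hc] by blast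
  have "\<exists>Q. dreps G K (substab G K S) H Q" if "S \<in> SS" for S
    using substab_subgroup[OF K Hc subreps_subset[OF SS that]] K H HK
    by (intro dreps_exists) (auto simp: subgrp_le_def)
  then obtain Qf where "\<forall>S\<in>SS. dreps G K (substab G K S) H (Qf S)" by metis
  then show ?thesis using that SS by blast
qed

lemma secreps_dreps_exist:
  assumes J: "subgroup J G" and K: "subgroup K G" and KJ: "K \<subseteq> J" and H: "subgroup H G"
  obtains SS Qf xf where "secreps G J K H SS"
    "\<forall>s\<in>SS. dreps G J (secstab G J K s) K (Qf s) \<and> (\<forall>q\<in>Qf s. xf s q \<in> s (lco G q K))"
proof -
  have Hc: "H \<subseteq> carrier G" using subgroup.subset[OF H] .
  obtain SS where SS: "secreps G J K H SS" using secreps_exists[OF J KJ Hc] by blast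
  have "\<exists>Q x. dreps G J (secstab G J K s) K Q \<and> (\<forall>q\<in>Q. x q \<in> s (lco G q K))" if s: "s \<in> SS" for s
  proof -
    have sec: "s \<in> sections G J K H" using secreps_subset[OF SS s] .
    obtain Q where Q: "dreps G J (secstab G J K s) K Q"
      using secstab_subgroup[OF J KJ Hc sec] J K KJ
      by (metis dreps_exists subgrp_le_def)
    have "\<exists>x. x \<in> s (lco G q K)" if "q \<in> Q" for q
      using sections_nonempty[OF J KJ K H sec] dreps_subset[OF Q] that by blast
    then obtain x where "\<forall>q\<in>Q. x q \<in> s (lco G q K)" by metis
    then show ?thesis using Q by blast
  qed
  then obtain Qf xf where "\<forall>s\<in>SS. dreps G J (secstab G J K s) K (Qf s) \<and> (\<forall>q\<in>Qf s. xf s q \<in> s (lco G q K))"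
    by metis
  then show ?thesis using that SS by blast
qed

end

section \<open>Tambara functors and Tambara ideals\<close>

locale tambara_functor = G: group G for G :: "('g,'b) monoid_scheme" and T :: "('g,'r) tambara" +
  assumes finite_G: "finite (carrier G)" and tambara: "is_tambara G T"
begin

abbreviation "L \<equiv> t_lev T"
abbreviation "res \<equiv> t_res T"
abbreviation "tr \<equiv> t_tr T"
abbreviation "nm \<equiv> t_nm T"
abbreviation "cj \<equiv> t_cj T"
abbreviation "sg H \<equiv> subgroup H G"

lemmas tambara_axioms = tambara[unfolded is_tambara_def]

lemma cring_L: "sg H \<Longrightarrow> cring (L H)"
  using tambara_axioms by (elim conjE) (simp only:)

lemma res_hom: "subgrp_le G H K \<Longrightarrow> res K H \<in> ring_hom (L K) (L H)"
  using tambara_axioms by (elim conjE) (simp only:)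

lemma res_id: "sg H \<Longrightarrow> x \<in> carrier (L H) \<Longrightarrow> res H H x = x"
  using tambara_axioms by (elim conjE) (simp only:)

lemma res_trans: "subgrp_le G H K \<Longrightarrow> subgrp_le G K M \<Longrightarrow> x \<in> carrier (L M) \<Longrightarrow> res K H (res M K x) = res M H x"
  using tambara_axioms by (elim conjE) (simp only:)

lemma tr_carrier: "subgrp_le G H K \<Longrightarrow> a \<in> carrier (L H) \<Longrightarrow> tr K H a \<in> carrier (L K)"
  using tambara_axioms by (elim conjE) (simp only:)

lemma tr_add: "subgrp_le G H K \<Longrightarrow> a \<in> carrier (L H) \<Longrightarrow> b \<in> carrier (L H) \<Longrightarrow> tr K H (a \<oplus>\<^bsub>L H\<^esub> b) = tr K H a \<oplus>\<^bsub>L K\<^esub> tr K H b"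
  using tambara_axioms by (elim conjE) (simp only:)

lemma tr_id: "sg H \<Longrightarrow> x \<in> carrier (L H) \<Longrightarrow> tr H H x = x"
  using tambara_axioms by (elim conjE) (simp only:)

lemma tr_trans: "subgrp_le G H K \<Longrightarrow> subgrp_le G K M \<Longrightarrow> x \<in> carrier (L H) \<Longrightarrow> tr M K (tr K H x) = tr M H x"
  using tambara_axioms by (elim conjE) (simp only:)

lemma nm_carrier: "subgrp_le G H K \<Longrightarrow> a \<in> carrier (L H) \<Longrightarrow> nm K H a \<in> carrier (L K)"
  using tambara_axioms by (elim conjE) (simp only:)

lemma nm_mult: "subgrp_le G H K \<Longrightarrow> a \<in> carrier (L H) \<Longrightarrow> b \<in> carrier (L H) \<Longrightarrow> nm K H (a \<otimes>\<^bsub>L H\<^esub> b) = nm K H a \<otimes>\<^bsub>L K\<^esub> nm K H b"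
  using tambara_axioms by (elim conjE) (simp only:)

lemma nm_one: "subgrp_le G H K \<Longrightarrow> nm K H \<one>\<^bsub>L H\<^esub> = \<one>\<^bsub>L K\<^esub>"
  using tambara_axioms by (elim conjE) (simp only:)

lemma nm_zero: "subgrp_le G H K \<Longrightarrow> nm K H \<zero>\<^bsub>L H\<^esub> = \<zero>\<^bsub>L K\<^esub>"
  using tambara_axioms by (elim conjE) (simp only:)

lemma nm_id: "sg H \<Longrightarrow> x \<in> carrier (L H) \<Longrightarrow> nm H H x = x"
  using tambara_axioms by (elim conjE) (simp only:)

lemma nm_trans: "subgrp_le G H K \<Longrightarrow> subgrp_le G K M \<Longrightarrow> x \<in> carrier (L H) \<Longrightarrow> nm M K (nm K H x) = nm M H x"
  using tambara_axioms by (elim conjE) (simp only:)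

lemma cj_hom: "g \<in> carrier G \<Longrightarrow> sg H \<Longrightarrow> cj g H \<in> ring_hom (L H) (L (conjsub G g H))"
  using tambara_axioms by (elim conjE) (simp only:)

lemma cj_comp: "g \<in> carrier G \<Longrightarrow> g' \<in> carrier G \<Longrightarrow> sg H \<Longrightarrow> x \<in> carrier (L H) \<Longrightarrow>
   cj g' (conjsub G g H) (cj g H x) = cj (g' \<otimes>\<^bsub>G\<^esub> g) H x"
  using tambara_axioms by (elim conjE) (simp only:)

lemma cj_inner: "sg H \<Longrightarrow> h \<in> H \<Longrightarrow> x \<in> carrier (L H) \<Longrightarrow> cj h H x = x"
  using tambara_axioms by (elim conjE) (simp only:)

lemma cj_res: "g \<in> carrier G \<Longrightarrow> subgrp_le G H K \<Longrightarrow> x \<in> carrier (L K) \<Longrightarrow>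
   cj g H (res K H x) = res (conjsub G g K) (conjsub G g H) (cj g K x)"
  using tambara_axioms by (elim conjE) (simp only:)

lemma cj_tr: "g \<in> carrier G \<Longrightarrow> subgrp_le G H K \<Longrightarrow> a \<in> carrier (L H) \<Longrightarrow>
   cj g K (tr K H a) = tr (conjsub G g K) (conjsub G g H) (cj g H a)"
  using tambara_axioms by (elim conjE) (simp only:)

lemma cj_nm: "g \<in> carrier G \<Longrightarrow> subgrp_le G H K \<Longrightarrow> a \<in> carrier (L H) \<Longrightarrow>
   cj g K (nm K H a) = nm (conjsub G g K) (conjsub G g H) (cj g H a)"
  using tambara_axioms by (elim conjE) (simp only:)

lemma tr_frobenius: "subgrp_le G H K \<Longrightarrow> a \<in> carrier (L H) \<Longrightarrow> b \<in> carrier (L K) \<Longrightarrow>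
   tr K H (a \<otimes>\<^bsub>L H\<^esub> res K H b) = tr K H a \<otimes>\<^bsub>L K\<^esub> b"
  using tambara_axioms by (elim conjE) (simp only:)

lemma res_tr_double_coset: "subgrp_le G H K \<Longrightarrow> subgrp_le G J K \<Longrightarrow> dreps G K J H Q \<Longrightarrow> a \<in> carrier (L H) \<Longrightarrow>
        res K J (tr K H a) =
          (\<Oplus>\<^bsub>L J\<^esub> q\<in>Q. tr J (J \<inter> conjsub G q H)
               (res (conjsub G q H) (J \<inter> conjsub G q H) (cj q H a)))"
  using tambara_axioms by (elim conjE) (simp only:)

lemma res_nm_double_coset: "subgrp_le G H K \<Longrightarrow> subgrp_le G J K \<Longrightarrow> dreps G K J H Q \<Longrightarrow> a \<in> carrier (L H) \<Longrightarrow>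
        res K J (nm K H a) =
          (\<Otimes>\<^bsub>L J\<^esub> q\<in>Q. nm J (J \<inter> conjsub G q H)
               (res (conjsub G q H) (J \<inter> conjsub G q H) (cj q H a)))"
  using tambara_axioms by (elim conjE) (simp only:)

lemma nm_add_reciprocity: "subgrp_le G H K \<Longrightarrow> subreps G K H \<SS> \<Longrightarrow>
        (\<forall>S\<in>\<SS>. dreps G K (substab G K S) H (Qf S)) \<Longrightarrow>
      a\<in>carrier (L H) \<Longrightarrow> b\<in>carrier (L H) \<Longrightarrow>
        nm K H (a \<oplus>\<^bsub>L H\<^esub> b) =
          (\<Oplus>\<^bsub>L K\<^esub> S\<in>\<SS>. tr K (substab G K S)
             (\<Otimes>\<^bsub>L (substab G K S)\<^esub> q\<in>Qf S.
                nm (substab G K S) (substab G K S \<inter> conjsub G q H)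
                  (res (conjsub G q H) (substab G K S \<inter> conjsub G q H)
                     (cj q H (if lco G q H \<in> S then a else b)))))"
  using tambara_axioms by (elim conjE) (simp only:)

lemma nm_tr_reciprocity: "subgrp_le G H K \<Longrightarrow> subgrp_le G K J \<Longrightarrow> secreps G J K H \<SS> \<Longrightarrow>
        (\<forall>s\<in>\<SS>. dreps G J (secstab G J K s) K (Qf s) \<and>
                 (\<forall>q\<in>Qf s. xf s q \<in> s (lco G q K))) \<Longrightarrow>
      a\<in>carrier (L H) \<Longrightarrow>
        nm J K (tr K H a) =
          (\<Oplus>\<^bsub>L J\<^esub> s\<in>\<SS>. tr J (secstab G J K s)
             (\<Otimes>\<^bsub>L (secstab G J K s)\<^esub> q\<in>Qf s.
                nm (secstab G J K s) (secstab G J K s \<inter> conjsub G q K)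
                  (res (conjsub G (xf s q) H) (secstab G J K s \<inter> conjsub G q K)
                     (cj (xf s q) H a))))"
  using tambara_axioms by (elim conjE) (simp only:)


lemma res_carrier: "subgrp_le G H K \<Longrightarrow> x \<in> carrier (L K) \<Longrightarrow> res K H x \<in> carrier (L H)"
  using ring_hom_closed[OF res_hom] .

lemma res_add: "subgrp_le G H K \<Longrightarrow> x \<in> carrier (L K) \<Longrightarrow> y \<in> carrier (L K) \<Longrightarrow>
   res K H (x \<oplus>\<^bsub>L K\<^esub> y) = res K H x \<oplus>\<^bsub>L H\<^esub> res K H y"
  using ring_hom_add[OF res_hom] .

lemma res_mult: "subgrp_le G H K \<Longrightarrow> x \<in> carrier (L K) \<Longrightarrow> y \<in> carrier (L K) \<Longrightarrow>
   res K H (x \<otimes>\<^bsub>L K\<^esub> y) = res K H x \<otimes>\<^bsub>L H\<^esub> res K H y"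
  using ring_hom_mult[OF res_hom] .

lemma res_one: "subgrp_le G H K \<Longrightarrow> res K H \<one>\<^bsub>L K\<^esub> = \<one>\<^bsub>L H\<^esub>"
  using ring_hom_one[OF res_hom] .

lemma res_zero: "subgrp_le G H K \<Longrightarrow> res K H \<zero>\<^bsub>L K\<^esub> = \<zero>\<^bsub>L H\<^esub>"
  using ring_hom_zero[OF res_hom] cring_L G.subgrp_leD cring.axioms(1) by metis

lemma cj_carrier: "g \<in> carrier G \<Longrightarrow> sg H \<Longrightarrow> x \<in> carrier (L H) \<Longrightarrow> cj g H x \<in> carrier (L (conjsub G g H))"
  using ring_hom_closed[OF cj_hom] .

lemma cj_add: "g \<in> carrier G \<Longrightarrow> sg H \<Longrightarrow> x \<in> carrier (L H) \<Longrightarrow> y \<in> carrier (L H) \<Longrightarrow>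
   cj g H (x \<oplus>\<^bsub>L H\<^esub> y) = cj g H x \<oplus>\<^bsub>L (conjsub G g H)\<^esub> cj g H y"
  using ring_hom_add[OF cj_hom] .

lemma cj_mult: "g \<in> carrier G \<Longrightarrow> sg H \<Longrightarrow> x \<in> carrier (L H) \<Longrightarrow> y \<in> carrier (L H) \<Longrightarrow>
   cj g H (x \<otimes>\<^bsub>L H\<^esub> y) = cj g H x \<otimes>\<^bsub>L (conjsub G g H)\<^esub> cj g H y"
  using ring_hom_mult[OF cj_hom] .

lemma cj_one: "g \<in> carrier G \<Longrightarrow> sg H \<Longrightarrow> cj g H \<one>\<^bsub>L H\<^esub> = \<one>\<^bsub>L (conjsub G g H)\<^esub>"
  using ring_hom_one[OF cj_hom] .

lemma cj_zero: "g \<in> carrier G \<Longrightarrow> sg H \<Longrightarrow> cj g H \<zero>\<^bsub>L H\<^esub> = \<zero>\<^bsub>L (conjsub G g H)\<^esub>"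
  using ring_hom_zero[OF cj_hom] cring_L G.conjsub_subgroup cring.axioms(1) by metis

lemma tr_zero:
  assumes "subgrp_le G H K"
  shows "tr K H \<zero>\<^bsub>L H\<^esub> = \<zero>\<^bsub>L K\<^esub>"
proof -
  interpret H: cring "L H" using cring_L G.subgrp_leD[OF assms] by blast
  interpret K: cring "L K" using cring_L G.subgrp_leD[OF assms] by blast
  have t: "tr K H \<zero>\<^bsub>L H\<^esub> \<in> carrier (L K)" using tr_carrier[OF assms] by simp
  have "tr K H \<zero>\<^bsub>L H\<^esub> \<oplus>\<^bsub>L K\<^esub> tr K H \<zero>\<^bsub>L H\<^esub> = tr K H \<zero>\<^bsub>L H\<^esub> \<oplus>\<^bsub>L K\<^esub> \<zero>\<^bsub>L K\<^esub>"
    using tr_add[OF assms H.zero_closed H.zero_closed] t by simp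
  then show ?thesis by (rule K.add.l_cancel[OF _ t K.zero_closed t])
qed

lemma nm_res_cj_carrier:
  assumes "g \<in> carrier G" "sg H" "subgrp_le G A (conjsub G g H)" "subgrp_le G A B" "a \<in> carrier (L H)"
  shows "nm B A (res (conjsub G g H) A (cj g H a)) \<in> carrier (L B)"
  using assms by (intro nm_carrier res_carrier cj_carrier)

lemma nm_cj_inner:
  assumes HK: "subgrp_le G H K" and q: "q \<in> K" and a: "a \<in> carrier (L H)"
  shows "nm K (conjsub G q H) (cj q H a) = nm K H a"
proof -
  have K: "sg K" and H: "sg H" using G.subgrp_leD[OF HK] by auto
  have qc: "q \<in> carrier G" using q subgroup.subset[OF K] by auto
  have "cj q K (nm K H a) = nm (conjsub G q K) (conjsub G q H) (cj q H a)" using cj_nm[OF qc HK a] .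
  moreover have "cj q K (nm K H a) = nm K H a" using cj_inner[OF K q nm_carrier[OF HK a]] .
  ultimately show ?thesis using G.conjsub_self[OF K q] by simp
qed

definition tcarrier :: "'g set \<Rightarrow> 'r set" where
  "tcarrier H = (if sg H then carrier (L H) else {})"

lemma tidealI:
  assumes "\<And>H. sg H \<Longrightarrow> ideal (I H) (L H)"
    and "\<And>H. \<not> sg H \<Longrightarrow> I H = {}"
    and "\<And>H K x. subgrp_le G H K \<Longrightarrow> x \<in> I K \<Longrightarrow> res K H x \<in> I H"
    and "\<And>H K x. subgrp_le G H K \<Longrightarrow> x \<in> I H \<Longrightarrow> tr K H x \<in> I K"
    and "\<And>H K x. subgrp_le G H K \<Longrightarrow> x \<in> I H \<Longrightarrow> nm K H x \<in> I K"
    and "\<And>g H x. g \<in> carrier G \<Longrightarrow> sg H \<Longrightarrow> x \<in> I H \<Longrightarrow> cj g H x \<in> I (conjsub G g H)"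
  shows "tideal G T I"
  unfolding tideal_def using assms by blast

lemma tideal_ideal: "tideal G T I \<Longrightarrow> sg H \<Longrightarrow> ideal (I H) (L H)"
  by (simp add: tideal_def)

lemma tideal_empty: "tideal G T I \<Longrightarrow> \<not> sg H \<Longrightarrow> I H = {}"
  by (simp add: tideal_def)

lemma tideal_res: "tideal G T I \<Longrightarrow> subgrp_le G H K \<Longrightarrow> x \<in> I K \<Longrightarrow> res K H x \<in> I H"
  unfolding tideal_def by blast

lemma tideal_tr: "tideal G T I \<Longrightarrow> subgrp_le G H K \<Longrightarrow> x \<in> I H \<Longrightarrow> tr K H x \<in> I K"
  unfolding tideal_def by blast

lemma tideal_nm: "tideal G T I \<Longrightarrow> subgrp_le G H K \<Longrightarrow> x \<in> I H \<Longrightarrow> nm K H x \<in> I K"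
  unfolding tideal_def by blast

lemma tideal_cj: "tideal G T I \<Longrightarrow> g \<in> carrier G \<Longrightarrow> sg H \<Longrightarrow> x \<in> I H \<Longrightarrow> cj g H x \<in> I (conjsub G g H)"
  unfolding tideal_def by blast

lemma tideal_carrier:
  assumes "tideal G T I" "x \<in> I H"
  shows "sg H \<and> x \<in> carrier (L H)"
proof -
  have H: "sg H" using tideal_empty[OF assms(1)] assms(2) by blast
  then show ?thesis using ideal.Icarr[OF tideal_ideal[OF assms(1) H] assms(2)] by simp
qed

lemma tideal_zero: "tideal G T I \<Longrightarrow> sg H \<Longrightarrow> \<zero>\<^bsub>L H\<^esub> \<in> I H"
  using additive_subgroup.zero_closed[OF ideal.axioms(1)[OF tideal_ideal]] by blast

lemma tideal_add: "tideal G T I \<Longrightarrow> a \<in> I H \<Longrightarrow> b \<in> I H \<Longrightarrow> a \<oplus>\<^bsub>L H\<^esub> b \<in> I H"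
  using additive_subgroup.a_closed[OF ideal.axioms(1)[OF tideal_ideal]] tideal_carrier by blast

lemma tideal_l_mult: "tideal G T I \<Longrightarrow> a \<in> I H \<Longrightarrow> r \<in> carrier (L H) \<Longrightarrow> r \<otimes>\<^bsub>L H\<^esub> a \<in> I H"
  using ideal.I_l_closed[OF tideal_ideal] tideal_carrier by blast

lemma tideal_r_mult: "tideal G T I \<Longrightarrow> a \<in> I H \<Longrightarrow> r \<in> carrier (L H) \<Longrightarrow> a \<otimes>\<^bsub>L H\<^esub> r \<in> I H"
  using ideal.I_r_closed[OF tideal_ideal] tideal_carrier by blast

lemma tideal_nm_res_cj:
  assumes I: "tideal G T I" and "g \<in> carrier G" "sg H" "subgrp_le G A (conjsub G g H)" "subgrp_le G A B"
    and "a \<in> I H"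
  shows "nm B A (res (conjsub G g H) A (cj g H a)) \<in> I B"
  using assms by (intro tideal_nm[OF I] tideal_res[OF I] tideal_cj[OF I])

lemma tcarrier_tideal: "tideal G T tcarrier"
proof (rule tidealI)
  fix H assume "sg H"
  then show "ideal (tcarrier H) (L H)" unfolding tcarrier_def
    using cring_L cring.axioms(1) ring.oneideal by auto
next
  fix H assume "\<not> sg H" then show "tcarrier H = {}" unfolding tcarrier_def by simp
next
  fix H K x assume "subgrp_le G H K" "x \<in> tcarrier K" then show "res K H x \<in> tcarrier H"
    unfolding tcarrier_def using res_carrier G.subgrp_leD by auto
next
  fix H K x assume "subgrp_le G H K" "x \<in> tcarrier H" then show "tr K H x \<in> tcarrier K"
    unfolding tcarrier_def using tr_carrier G.subgrp_leD by auto
next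
  fix H K x assume "subgrp_le G H K" "x \<in> tcarrier H" then show "nm K H x \<in> tcarrier K"
    unfolding tcarrier_def using nm_carrier G.subgrp_leD by auto
next
  fix g H x assume "g \<in> carrier G" "sg H" "x \<in> tcarrier H" then show "cj g H x \<in> tcarrier (conjsub G g H)"
    unfolding tcarrier_def using cj_carrier G.conjsub_subgroup by auto
qed

lemma tzero_tideal: "tideal G T (tzero G T)"
proof (rule tidealI)
  fix H assume "sg H" then show "ideal (tzero G T H) (L H)" unfolding tzero_def
    using cring_L cring.axioms(1) ring.zeroideal by auto
next
  fix H assume "\<not> sg H" then show "tzero G T H = {}" unfolding tzero_def by simp
next
  fix H K x assume "subgrp_le G H K" "x \<in> tzero G T K" then show "res K H x \<in> tzero G T H"
    unfolding tzero_def using res_zero G.subgrp_leD by auto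
next
  fix H K x assume "subgrp_le G H K" "x \<in> tzero G T H" then show "tr K H x \<in> tzero G T K"
    unfolding tzero_def using tr_zero G.subgrp_leD by auto
next
  fix H K x assume "subgrp_le G H K" "x \<in> tzero G T H" then show "nm K H x \<in> tzero G T K"
    unfolding tzero_def using nm_zero G.subgrp_leD by auto
next
  fix g H x assume "g \<in> carrier G" "sg H" "x \<in> tzero G T H" then show "cj g H x \<in> tzero G T (conjsub G g H)"
    unfolding tzero_def using cj_zero G.conjsub_subgroup by auto
qed

lemma tideal_Inter:
  assumes ne: "\<II> \<noteq> {}" and all: "\<And>I. I \<in> \<II> \<Longrightarrow> tideal G T I"
  shows "tideal G T (\<lambda>H. \<Inter>I\<in>\<II>. I H)"
proof (rule tidealI)
  fix H assume H: "sg H"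
  interpret ring "L H" using cring_L[OF H] cring.axioms(1) by blast
  show "ideal (\<Inter>I\<in>\<II>. I H) (L H)"
    using ne all tideal_ideal[OF _ H] by (intro i_Intersect) auto
next
  show "(\<Inter>I\<in>\<II>. I H) = {}" if "\<not> sg H" for H
    using ne all tideal_empty that by blast
next
  show "res K H x \<in> (\<Inter>I\<in>\<II>. I H)" if "subgrp_le G H K" "x \<in> (\<Inter>I\<in>\<II>. I K)" for H K x
    using that all tideal_res by blast
next
  show "tr K H x \<in> (\<Inter>I\<in>\<II>. I K)" if "subgrp_le G H K" "x \<in> (\<Inter>I\<in>\<II>. I H)" for H K x
    using that all tideal_tr by blast
next
  show "nm K H x \<in> (\<Inter>I\<in>\<II>. I K)" if "subgrp_le G H K" "x \<in> (\<Inter>I\<in>\<II>. I H)" for H K x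
    using that all tideal_nm by blast
next
  show "cj g H x \<in> (\<Inter>I\<in>\<II>. I (conjsub G g H))" if "g \<in> carrier G" "sg H" "x \<in> (\<Inter>I\<in>\<II>. I H)" for g H x
    using that all tideal_cj by blast
qed

lemma tideal_chain_Union:
  assumes ne: "\<C> \<noteq> {}" and all: "\<And>I. I \<in> \<C> \<Longrightarrow> tideal G T I"
    and chain: "\<And>I J. I \<in> \<C> \<Longrightarrow> J \<in> \<C> \<Longrightarrow> I \<le> J \<or> J \<le> I"
  shows "tideal G T (\<lambda>H. \<Union>I\<in>\<C>. I H)"
proof (rule tidealI)
  fix H assume H: "sg H"
  show "ideal (\<Union>I\<in>\<C>. I H) (L H)"
  proof (rule cring_idealI[OF cring_L[OF H]])
    show "(\<Union>I\<in>\<C>. I H) \<subseteq> carrier (L H)" using all tideal_carrier by blast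
    show "\<zero>\<^bsub>L H\<^esub> \<in> (\<Union>I\<in>\<C>. I H)" using ne all tideal_zero H by blast
    show "r \<otimes>\<^bsub>L H\<^esub> a \<in> (\<Union>I\<in>\<C>. I H)" if "a \<in> (\<Union>I\<in>\<C>. I H)" "r \<in> carrier (L H)" for a r
      using that all tideal_l_mult by blast
    fix a b assume "a \<in> (\<Union>I\<in>\<C>. I H)" "b \<in> (\<Union>I\<in>\<C>. I H)"
    then obtain I J where IJ: "I \<in> \<C>" "J \<in> \<C>" "a \<in> I H" "b \<in> J H" by blast
    then have "a \<in> J H \<and> b \<in> J H \<or> a \<in> I H \<and> b \<in> I H"
      using chain[OF IJ(1,2)] unfolding le_fun_def by blast
    then show "a \<oplus>\<^bsub>L H\<^esub> b \<in> (\<Union>I\<in>\<C>. I H)" using IJ(1,2) all tideal_add by blast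
  qed
next
  show "(\<Union>I\<in>\<C>. I H) = {}" if "\<not> sg H" for H using that all tideal_empty by blast
next
  show "res K H x \<in> (\<Union>I\<in>\<C>. I H)" if "subgrp_le G H K" "x \<in> (\<Union>I\<in>\<C>. I K)" for H K x
    using that all tideal_res by blast
next
  show "tr K H x \<in> (\<Union>I\<in>\<C>. I K)" if "subgrp_le G H K" "x \<in> (\<Union>I\<in>\<C>. I H)" for H K x
    using that all tideal_tr by blast
next
  show "nm K H x \<in> (\<Union>I\<in>\<C>. I K)" if "subgrp_le G H K" "x \<in> (\<Union>I\<in>\<C>. I H)" for H K x
    using that all tideal_nm by blast
next
  show "cj g H x \<in> (\<Union>I\<in>\<C>. I (conjsub G g H))" if "g \<in> carrier G" "sg H" "x \<in> (\<Union>I\<in>\<C>. I H)" for g H x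
    using that all tideal_cj by blast
qed

lemma tgen_eq: "tgen G T A = (\<lambda>K. \<Inter>I\<in>{I. tideal G T I \<and> A \<le> I}. I K)"
  unfolding tgen_def by (rule ext) blast

lemma tgen_tideal: "A \<le> tcarrier \<Longrightarrow> tideal G T (tgen G T A)"
  unfolding tgen_eq by (rule tideal_Inter) (use tcarrier_tideal in auto)

lemma tgen_ge: "A \<le> tgen G T A"
  unfolding tgen_def le_fun_def by blast

lemma tgen_least: "tideal G T I \<Longrightarrow> A \<le> I \<Longrightarrow> tgen G T A \<le> I"
  unfolding tgen_def le_fun_def by blast


text \<open>Each formula expresses its left-hand side as a sum of transfers, so the left-hand side lies
  in any family of ideals that is closed under transfer and contains one factor of every
  product occurring in the sum.\<close>

lemma res_tr_mem:
  assumes hk: "subgrp_le G H K" and jk: "subgrp_le G J K" and a: "a \<in> carrier (L H)"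
    and Zid: "ideal (Z J) (L J)"
    and Ztr: "\<And>M x. subgrp_le G M J \<Longrightarrow> x \<in> Z M \<Longrightarrow> tr J M x \<in> Z J"
    and key: "\<And>q. q \<in> K \<Longrightarrow> res (conjsub G q H) (J \<inter> conjsub G q H) (cj q H a) \<in> Z (J \<inter> conjsub G q H)"
  shows "res K J (tr K H a) \<in> Z J"
proof -
  have H: "sg H" and K: "sg K" and J: "sg J" using G.subgrp_leD[OF hk] G.subgrp_leD[OF jk] by auto
  obtain Q where Q: "dreps G K J H Q" using G.dreps_exists[OF jk hk] by blast
  show ?thesis unfolding res_tr_double_coset[OF hk jk Q a]
  proof (rule finsum_in_ideal[OF Zid])
    fix q assume "q \<in> Q"
    then have qK: "q \<in> K" using G.dreps_subset[OF Q] by auto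
    then have "sg (conjsub G q H)" using G.conjsub_subgroup[OF H] subgroup.subset[OF K] by auto
    then show "tr J (J \<inter> conjsub G q H) (res (conjsub G q H) (J \<inter> conjsub G q H) (cj q H a)) \<in> Z J"
      by (rule Ztr[OF G.subgrp_le_Int_left[OF J] key[OF qK]])
  qed
qed

lemma nm_add_mem:
  assumes hk: "subgrp_le G H K" and a: "a \<in> carrier (L H)" and b: "b \<in> carrier (L H)"
    and Zid: "\<And>M. subgrp_le G M K \<Longrightarrow> ideal (Z M) (L M)"
    and Ztr: "\<And>M x. subgrp_le G M K \<Longrightarrow> x \<in> Z M \<Longrightarrow> tr K M x \<in> Z K"
    and key: "\<And>S Q. S \<subseteq> lcosetsK G K H \<Longrightarrow> dreps G K (substab G K S) H Q \<Longrightarrow>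
      \<exists>q\<in>Q. nm (substab G K S) (substab G K S \<inter> conjsub G q H)
                  (res (conjsub G q H) (substab G K S \<inter> conjsub G q H)
                     (cj q H (if lco G q H \<in> S then a else b))) \<in> Z (substab G K S)"
  shows "nm K H (a \<oplus>\<^bsub>L H\<^esub> b) \<in> Z K"
proof -
  have H: "sg H" and K: "sg K" and HK: "H \<subseteq> K" using G.subgrp_leD[OF hk] by auto
  obtain SS Qf where SS: "subreps G K H SS" and Qf: "\<forall>S\<in>SS. dreps G K (substab G K S) H (Qf S)"
    using G.subreps_dreps_exist[OF K H HK] by blast
  show ?thesis unfolding nm_add_reciprocity[OF hk SS Qf a b]
  proof (rule finsum_in_ideal[OF Zid[OF G.subgrp_le_refl[OF K]]])
    fix S assume S: "S \<in> SS"
    let ?St = "substab G K S"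
    let ?f = "\<lambda>q. nm ?St (?St \<inter> conjsub G q H) (res (conjsub G q H) (?St \<inter> conjsub G q H)
                     (cj q H (if lco G q H \<in> S then a else b)))"
    have StK: "subgrp_le G ?St K"
      using G.substab_subgroup[OF K subgroup.subset[OF H] G.subreps_subset[OF SS S]] K
      unfolding subgrp_le_def by blast
    have Q: "dreps G K ?St H (Qf S)" using Qf S by blast
    have "?f \<in> Qf S \<rightarrow> carrier (L ?St)"
    proof
      fix q assume "q \<in> Qf S"
      then have q: "q \<in> carrier G" using G.dreps_subset[OF Q] subgroup.subset[OF K] by auto
      have "sg ?St" using G.subgrp_leD[OF StK] by blast
      then show "?f q \<in> carrier (L ?St)"
        using G.conjsub_subgroup[OF H q] a b
        by (intro nm_res_cj_carrier[OF q H]) (auto intro: G.subgrp_le_Int_left G.subgrp_le_Int_right)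
    qed
    moreover obtain q where "q \<in> Qf S" "?f q \<in> Z ?St"
      using key[OF G.subreps_subset[OF SS S] Q] by blast
    ultimately have "finprod (L ?St) ?f (Qf S) \<in> Z ?St"
      using G.subgrp_leD[OF StK] G.dreps_finite[OF finite_G Q K]
      by (intro finprod_in_ideal[OF cring_L Zid[OF StK]]) auto
    then show "tr K ?St (finprod (L ?St) ?f (Qf S)) \<in> Z K" using Ztr[OF StK] by blast
  qed
qed

lemma nm_tr_mem:
  assumes hk: "subgrp_le G H K" and kj: "subgrp_le G K J" and a: "a \<in> carrier (L H)"
    and Zid: "\<And>M. subgrp_le G M J \<Longrightarrow> ideal (Z M) (L M)"
    and Ztr: "\<And>M x. subgrp_le G M J \<Longrightarrow> x \<in> Z M \<Longrightarrow> tr J M x \<in> Z J"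
    and key: "\<And>s Q xf. s \<in> sections G J K H \<Longrightarrow> dreps G J (secstab G J K s) K Q \<Longrightarrow>
        (\<forall>q\<in>Q. xf q \<in> s (lco G q K)) \<Longrightarrow>
      \<exists>q\<in>Q. nm (secstab G J K s) (secstab G J K s \<inter> conjsub G q K)
                  (res (conjsub G (xf q) H) (secstab G J K s \<inter> conjsub G q K)
                     (cj (xf q) H a)) \<in> Z (secstab G J K s)"
  shows "nm J K (tr K H a) \<in> Z J"
proof -
  have H: "sg H" and K: "sg K" and J: "sg J" and KJ: "K \<subseteq> J"
    using G.subgrp_leD[OF hk] G.subgrp_leD[OF kj] by auto
  obtain SS Qf xf where SS: "secreps G J K H SS"
    and Qf: "\<forall>s\<in>SS. dreps G J (secstab G J K s) K (Qf s) \<and> (\<forall>q\<in>Qf s. xf s q \<in> s (lco G q K))"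
    using G.secreps_dreps_exist[OF J K KJ H] by blast
  show ?thesis unfolding nm_tr_reciprocity[OF hk kj SS Qf a]
  proof (rule finsum_in_ideal[OF Zid[OF G.subgrp_le_refl[OF J]]])
    fix s assume s: "s \<in> SS"
    let ?St = "secstab G J K s"
    let ?f = "\<lambda>q. nm ?St (?St \<inter> conjsub G q K) (res (conjsub G (xf s q) H) (?St \<inter> conjsub G q K)
                     (cj (xf s q) H a))"
    have sec: "s \<in> sections G J K H" using G.secreps_subset[OF SS s] .
    have StJ: "subgrp_le G ?St J"
      using G.secstab_subgroup[OF J KJ subgroup.subset[OF H] sec] J unfolding subgrp_le_def by blast
    have St: "sg ?St" using G.subgrp_leD[OF StJ] by blast
    have Q: "dreps G J ?St K (Qf s)" and x: "\<forall>q\<in>Qf s. xf s q \<in> s (lco G q K)"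
      using Qf s by auto
    have "?f \<in> Qf s \<rightarrow> carrier (L ?St)"
    proof
      fix q assume "q \<in> Qf s"
      then have qJ: "q \<in> J" and xq: "xf s q \<in> s (lco G q K)" using G.dreps_subset[OF Q] x by auto
      show "?f q \<in> carrier (L ?St)"
        using nm_res_cj_carrier[OF G.sections_xf_carrier[OF J KJ K H sec qJ xq] H
            G.secstab_Int_conjsub_le[OF J KJ K H sec qJ xq] a] .
    qed
    moreover obtain q where "q \<in> Qf s" "?f q \<in> Z ?St"
      using key[OF sec Q x] by blast
    ultimately have "finprod (L ?St) ?f (Qf s) \<in> Z ?St"
      using St G.dreps_finite[OF finite_G Q J] by (intro finprod_in_ideal[OF cring_L Zid[OF StJ]]) auto
    then show "tr J ?St (finprod (L ?St) ?f (Qf s)) \<in> Z J" using Ztr[OF StJ] by blast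
  qed
qed

definition tsum :: "('g set \<Rightarrow> 'r set) \<Rightarrow> ('g set \<Rightarrow> 'r set) \<Rightarrow> ('g set \<Rightarrow> 'r set)" where
  "tsum I J = (\<lambda>H. I H <+>\<^bsub>L H\<^esub> J H)"

lemma tsum_memI1: "tideal G T J \<Longrightarrow> x \<in> I H \<Longrightarrow> sg H \<Longrightarrow> x \<in> carrier (L H) \<Longrightarrow> x \<in> tsum I J H"
proof -
  assume J: "tideal G T J" and x: "x \<in> I H" and H: "sg H" and xc: "x \<in> carrier (L H)"
  interpret cring "L H" using cring_L[OF H] .
  have "x = x \<oplus>\<^bsub>L H\<^esub> \<zero>\<^bsub>L H\<^esub>" using xc by simp
  then show ?thesis unfolding tsum_def mem_set_add_iff using x tideal_zero[OF J H] by blast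
qed

lemma tsum_memI2: "tideal G T I \<Longrightarrow> x \<in> J H \<Longrightarrow> sg H \<Longrightarrow> x \<in> carrier (L H) \<Longrightarrow> x \<in> tsum I J H"
proof -
  assume I: "tideal G T I" and x: "x \<in> J H" and H: "sg H" and xc: "x \<in> carrier (L H)"
  interpret cring "L H" using cring_L[OF H] .
  have "x = \<zero>\<^bsub>L H\<^esub> \<oplus>\<^bsub>L H\<^esub> x" using xc by simp
  then show ?thesis unfolding tsum_def mem_set_add_iff using x tideal_zero[OF I H] by blast
qed

lemma tsum_ideal: "tideal G T I \<Longrightarrow> tideal G T J \<Longrightarrow> sg H \<Longrightarrow> ideal (tsum I J H) (L H)"
  unfolding tsum_def using tideal_ideal cring_L cring.axioms(1) ring.add_ideals by metis

lemma tsum_tr: "tideal G T I \<Longrightarrow> tideal G T J \<Longrightarrow> subgrp_le G H K \<Longrightarrow> x \<in> tsum I J H \<Longrightarrow> tr K H x \<in> tsum I J K"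
  unfolding tsum_def mem_set_add_iff using tr_add tideal_carrier tideal_tr by metis

text \<open>Closure under norms is where Tambara reciprocity enters: in each product of the
  expansion of a norm of a sum, either some factor is a norm of a restricted conjugate of the
  summand from I, or all factors come from the summand from J.\<close>

lemma tsum_nm:
  assumes I: "tideal G T I" and J: "tideal G T J" and hk: "subgrp_le G H K" and x: "x \<in> tsum I J H"
  shows "nm K H x \<in> tsum I J K"
proof -
  obtain a b where ab: "a \<in> I H" "b \<in> J H" "x = a \<oplus>\<^bsub>L H\<^esub> b"
    using x unfolding tsum_def mem_set_add_iff by blast
  have ac: "a \<in> carrier (L H)" and bc: "b \<in> carrier (L H)"
    using tideal_carrier[OF I ab(1)] tideal_carrier[OF J ab(2)] by auto
  have H: "sg H" and K: "sg K" using G.subgrp_leD[OF hk] by auto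
  show "nm K H x \<in> tsum I J K" unfolding ab(3)
  proof (rule nm_add_mem[OF hk ac bc])
    show "ideal (tsum I J M) (L M)" if "subgrp_le G M K" for M
      using tsum_ideal[OF I J] G.subgrp_leD[OF that] by blast
    show "tr K M y \<in> tsum I J K" if "subgrp_le G M K" "y \<in> tsum I J M" for M y
      using tsum_tr[OF I J that] .
  next
    fix S Q assume S: "S \<subseteq> lcosetsK G K H" and Q: "dreps G K (substab G K S) H Q"
    let ?St = "substab G K S"
    have St: "sg ?St" "?St \<subseteq> K" using G.substab_subgroup[OF K subgroup.subset[OF H] S] by auto
    have mem: "nm ?St (?St \<inter> conjsub G q H) (res (conjsub G q H) (?St \<inter> conjsub G q H) (cj q H y)) \<in> Z ?St"
      if "q \<in> Q" "y \<in> Z H" "tideal G T Z" for q y Z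
    proof -
      have q: "q \<in> carrier G" using G.dreps_subset[OF Q] that(1) subgroup.subset[OF K] by auto
      show ?thesis using G.conjsub_subgroup[OF H q] St(1)
        by (intro tideal_nm_res_cj[OF that(3) q H _ _ that(2)] G.subgrp_le_Int_left G.subgrp_le_Int_right)
    qed
    have carrier: "nm ?St (?St \<inter> conjsub G q H) (res (conjsub G q H) (?St \<inter> conjsub G q H) (cj q H y))
        \<in> carrier (L ?St)" if "q \<in> Q" "y \<in> carrier (L H)" for q y
      using mem[OF that(1) _ tcarrier_tideal] that(2) H St(1) unfolding tcarrier_def by simp
    show "\<exists>q\<in>Q. nm ?St (?St \<inter> conjsub G q H) (res (conjsub G q H) (?St \<inter> conjsub G q H)
                     (cj q H (if lco G q H \<in> S then a else b))) \<in> tsum I J ?St"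
    proof (cases "\<exists>q\<in>Q. lco G q H \<in> S")
      case True
      then obtain q where q: "q \<in> Q" "lco G q H \<in> S" by blast
      then show ?thesis using tsum_memI1[where I=I, OF J mem[OF q(1) ab(1) I] St(1) carrier[OF q(1) ac]] by auto
    next
      case False
      obtain q where q: "q \<in> Q" using G.dreps_nonempty[OF Q K] by blast
      then show ?thesis using False tsum_memI2[where J=J, OF I mem[OF q ab(2) J] St(1) carrier[OF q bc]] by auto
    qed
  qed
qed

lemma tsum_tideal:
  assumes I: "tideal G T I" and J: "tideal G T J"
  shows "tideal G T (tsum I J)"
proof (rule tidealI)
  show "ideal (tsum I J H) (L H)" if "sg H" for H using tsum_ideal[OF I J that] .
  show "tsum I J H = {}" if "\<not> sg H" for H
    unfolding tsum_def using tideal_empty[OF I that] by (simp add: set_add_def')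
  show "tr K H x \<in> tsum I J K" if "subgrp_le G H K" "x \<in> tsum I J H" for H K x
    using tsum_tr[OF I J that] .
  show "nm K H x \<in> tsum I J K" if "subgrp_le G H K" "x \<in> tsum I J H" for H K x
    using tsum_nm[OF I J that] .
next
  fix H K x assume hk: "subgrp_le G H K" and x: "x \<in> tsum I J K"
  obtain a b where ab: "a \<in> I K" "b \<in> J K" "x = a \<oplus>\<^bsub>L K\<^esub> b"
    using x unfolding tsum_def mem_set_add_iff by blast
  then have "res K H x = res K H a \<oplus>\<^bsub>L H\<^esub> res K H b"
    using res_add[OF hk] tideal_carrier[OF I] tideal_carrier[OF J] by blast
  then show "res K H x \<in> tsum I J H" unfolding tsum_def mem_set_add_iff
    using tideal_res[OF I hk ab(1)] tideal_res[OF J hk ab(2)] by blast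
next
  fix g H x assume g: "g \<in> carrier G" and H: "sg H" and x: "x \<in> tsum I J H"
  obtain a b where ab: "a \<in> I H" "b \<in> J H" "x = a \<oplus>\<^bsub>L H\<^esub> b"
    using x unfolding tsum_def mem_set_add_iff by blast
  then have "cj g H x = cj g H a \<oplus>\<^bsub>L (conjsub G g H)\<^esub> cj g H b"
    using cj_add[OF g H] tideal_carrier[OF I] tideal_carrier[OF J] by blast
  then show "cj g H x \<in> tsum I J (conjsub G g H)" unfolding tsum_def mem_set_add_iff
    using tideal_cj[OF I g H ab(1)] tideal_cj[OF J g H ab(2)] by blast
qed

definition levelwise_prod :: "('g set \<Rightarrow> 'r set) \<Rightarrow> ('g set \<Rightarrow> 'r set) \<Rightarrow> ('g set \<Rightarrow> 'r set)" where
  "levelwise_prod I J = (\<lambda>H. {a \<otimes>\<^bsub>L H\<^esub> b | a b. a \<in> I H \<and> b \<in> J H})"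

lemma tprod_eq: "tprod G T I J = tgen G T (levelwise_prod I J)"
  unfolding tprod_def levelwise_prod_def by simp

lemma levelwise_prod_le_tcarrier: "tideal G T I \<Longrightarrow> tideal G T J \<Longrightarrow> levelwise_prod I J \<le> tcarrier"
proof (unfold le_fun_def, intro allI subsetI)
  fix H z assume I: "tideal G T I" and J: "tideal G T J" and z: "z \<in> levelwise_prod I J H"
  then obtain a b where ab: "a \<in> I H" "b \<in> J H" "z = a \<otimes>\<^bsub>L H\<^esub> b" unfolding levelwise_prod_def by blast
  have H: "sg H" and ac: "a \<in> carrier (L H)" using tideal_carrier[OF I ab(1)] by auto
  have bc: "b \<in> carrier (L H)" using tideal_carrier[OF J ab(2)] by auto
  interpret cring "L H" using cring_L[OF H] .
  show "z \<in> tcarrier H" unfolding tcarrier_def using H ab(3) ac bc by simp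
qed

lemma tprod_tideal: "tideal G T I \<Longrightarrow> tideal G T J \<Longrightarrow> tideal G T (tprod G T I J)"
  unfolding tprod_eq by (rule tgen_tideal) (rule levelwise_prod_le_tcarrier)

lemma mult_mem_tprod: "a \<in> I H \<Longrightarrow> b \<in> J H \<Longrightarrow> a \<otimes>\<^bsub>L H\<^esub> b \<in> tprod G T I J H"
proof -
  assume "a \<in> I H" "b \<in> J H"
  then have "a \<otimes>\<^bsub>L H\<^esub> b \<in> levelwise_prod I J H" unfolding levelwise_prod_def by blast
  then show ?thesis unfolding tprod_eq using tgen_ge unfolding le_fun_def by blast
qed

lemma tprod_least: "tideal G T K \<Longrightarrow> (\<And>H a b. a \<in> I H \<Longrightarrow> b \<in> J H \<Longrightarrow> a \<otimes>\<^bsub>L H\<^esub> b \<in> K H) \<Longrightarrow> tprod G T I J \<le> K"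
  unfolding tprod_eq by (rule tgen_least) (auto simp: le_fun_def levelwise_prod_def)

definition tsingleton :: "'g set \<Rightarrow> 'r \<Rightarrow> ('g set \<Rightarrow> 'r set)" where
  "tsingleton H x = (\<lambda>K. if K = H then {x} else {})"

lemma tprinc_eq: "tprinc G T H x = tgen G T (tsingleton H x)"
  unfolding tprinc_def tsingleton_def by simp

lemma tprinc_tideal: "sg H \<Longrightarrow> x \<in> carrier (L H) \<Longrightarrow> tideal G T (tprinc G T H x)"
  unfolding tprinc_eq by (rule tgen_tideal) (auto simp: le_fun_def tsingleton_def tcarrier_def)

lemma tprinc_mem: "x \<in> tprinc G T H x H"
proof -
  have "tsingleton H x H \<subseteq> tgen G T (tsingleton H x) H" using tgen_ge[of "tsingleton H x"] unfolding le_fun_def by blast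
  then show ?thesis unfolding tprinc_eq tsingleton_def by simp
qed

lemma tprinc_least: "tideal G T I \<Longrightarrow> x \<in> I H \<Longrightarrow> tprinc G T H x \<le> I"
  unfolding tprinc_eq by (rule tgen_least) (auto simp: le_fun_def tsingleton_def)

lemma tpow_tideal: "tideal G T I \<Longrightarrow> tideal G T (tpow G T I n)"
  by (induction n) (auto intro: tprod_tideal)

lemma tsum_mult_mem:
  assumes I: "tideal G T I" and J: "tideal G T J" and P: "tideal G T P" and IJ: "tprod G T I J \<le> P"
    and u: "u \<in> tsum I P H" and v: "v \<in> tsum J P H"
  shows "u \<otimes>\<^bsub>L H\<^esub> v \<in> P H"
proof -
  obtain i p where ip: "i \<in> I H" "p \<in> P H" "u = i \<oplus>\<^bsub>L H\<^esub> p"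
    using u unfolding tsum_def mem_set_add_iff by blast
  obtain j p' where jp: "j \<in> J H" "p' \<in> P H" "v = j \<oplus>\<^bsub>L H\<^esub> p'"
    using v unfolding tsum_def mem_set_add_iff by blast
  have H: "sg H" using tideal_carrier[OF I ip(1)] by blast
  interpret R: cring "L H" using cring_L[OF H] .
  have c: "i \<in> carrier (L H)" "p \<in> carrier (L H)" "j \<in> carrier (L H)" "p' \<in> carrier (L H)"
    using tideal_carrier[OF I ip(1)] tideal_carrier[OF P ip(2)] tideal_carrier[OF J jp(1)]
      tideal_carrier[OF P jp(2)] by auto
  have "u \<otimes>\<^bsub>L H\<^esub> v = (i \<otimes>\<^bsub>L H\<^esub> j) \<oplus>\<^bsub>L H\<^esub> ((i \<otimes>\<^bsub>L H\<^esub> p') \<oplus>\<^bsub>L H\<^esub> (p \<otimes>\<^bsub>L H\<^esub> (j \<oplus>\<^bsub>L H\<^esub> p')))"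
    unfolding ip(3) jp(3) using c by (simp add: R.l_distr R.r_distr R.a_assoc R.a_lcomm)
  moreover have "i \<otimes>\<^bsub>L H\<^esub> j \<in> P H"
    using mult_mem_tprod[where I=I and J=J, OF ip(1) jp(1)] IJ unfolding le_fun_def by blast
  moreover have "i \<otimes>\<^bsub>L H\<^esub> p' \<in> P H" using tideal_l_mult[OF P jp(2) c(1)] .
  moreover have "p \<otimes>\<^bsub>L H\<^esub> (j \<oplus>\<^bsub>L H\<^esub> p') \<in> P H" using tideal_r_mult[OF P ip(2)] c by simp
  ultimately show ?thesis using tideal_add[OF P] by simp
qed


subsection \<open>Prime Tambara ideals and the nilradical\<close>

lemma tprime_tideal: "tprime G T P \<Longrightarrow> tideal G T P"
  unfolding tprime_def by blast

lemma tprime_tpow_le: "tprime G T P \<Longrightarrow> tideal G T I \<Longrightarrow> tpow G T I n \<le> P \<Longrightarrow> I \<le> P"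
proof (induction n)
  case (Suc n)
  then have "tpow G T I n \<le> P \<or> I \<le> P"
    using tpow_tideal[OF Suc(3)] unfolding tprime_def by simp
  then show ?case using Suc by blast
qed simp

lemma tzero_le: "tideal G T P \<Longrightarrow> tzero G T \<le> P"
  unfolding le_fun_def tzero_def using tideal_zero by auto

lemma nilradicalI:
  "sg H \<Longrightarrow> x \<in> carrier (L H) \<Longrightarrow> tpow G T (tprinc G T H x) n \<le> tzero G T \<Longrightarrow> x \<in> nilradical G T H"
  unfolding nilradical_def trad_def by auto

lemma nilradicalD: "x \<in> nilradical G T H \<Longrightarrow> sg H \<and> x \<in> carrier (L H)"
  unfolding nilradical_def trad_def by (auto split: if_splits)

lemma nilradical_le_tprime:
  assumes P: "tprime G T P"
  shows "nilradical G T \<le> P"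
proof (unfold le_fun_def, intro allI subsetI)
  fix H x assume x: "x \<in> nilradical G T H"
  then have H: "sg H" and xc: "x \<in> carrier (L H)" using nilradicalD by auto
  then obtain n where "tpow G T (tprinc G T H x) n \<le> tzero G T"
    using x unfolding nilradical_def trad_def by auto
  then have "tpow G T (tprinc G T H x) n \<le> P" using tzero_le[OF tprime_tideal[OF P]] by (rule order_trans)
  then have "tprinc G T H x \<le> P" using tprime_tpow_le[OF P tprinc_tideal[OF H xc]] by blast
  then show "x \<in> P H" using tprinc_mem unfolding le_fun_def by blast
qed

lemma exists_maximal_tideal_avoiding_powers:
  assumes H: "sg H" and nonzero: "\<And>k::nat. x [^]\<^bsub>L H\<^esub> k \<noteq> \<zero>\<^bsub>L H\<^esub>"
  obtains P where "tideal G T P" "\<forall>k::nat. x [^]\<^bsub>L H\<^esub> k \<notin> P H"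
    "\<And>I. tideal G T I \<Longrightarrow> \<forall>k::nat. x [^]\<^bsub>L H\<^esub> k \<notin> I H \<Longrightarrow> P \<le> I \<Longrightarrow> I = P"
proof -
  define \<A> where "\<A> = {I. tideal G T I \<and> (\<forall>k::nat. x [^]\<^bsub>L H\<^esub> k \<notin> I H)}"
  have "\<exists>P\<in>\<A>. \<forall>I\<in>\<A>. P \<le> I \<longrightarrow> I = P"
  proof (rule predicate_Zorn)
    show "partial_order_on \<A> (relation_of (\<le>) \<A>)"
      by (rule partial_order_on_relation_ofI) auto
    fix \<C> assume \<C>: "\<C> \<in> Chains (relation_of (\<le>) \<A>)"
    show "\<exists>U\<in>\<A>. \<forall>I\<in>\<C>. I \<le> U"
    proof (cases "\<C> = {}")
      case True
      have "tzero G T \<in> \<A>" unfolding \<A>_def using tzero_tideal nonzero H unfolding tzero_def by auto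
      then show ?thesis using True by blast
    next
      case False
      have \<C>\<A>: "\<C> \<subseteq> \<A>" using Chains_relation_of[OF \<C>] .
      have chain: "I \<le> J \<or> J \<le> I" if "I \<in> \<C>" "J \<in> \<C>" for I J
        using \<C> that unfolding Chains_def relation_of_def by auto
      let ?U = "\<lambda>K. \<Union>I\<in>\<C>. I K"
      have "tideal G T ?U" using tideal_chain_Union[OF False] \<C>\<A> chain unfolding \<A>_def by auto
      then have "?U \<in> \<A>" using \<C>\<A> unfolding \<A>_def by blast
      moreover have "\<forall>I\<in>\<C>. I \<le> ?U" unfolding le_fun_def by blast
      ultimately show ?thesis by blast
    qed
  qed
  then show ?thesis using that unfolding \<A>_def by blast
qed

lemma maximal_tideal_avoiding_powers_tprime:
  assumes H: "sg H" and xc: "x \<in> carrier (L H)"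
    and P: "tideal G T P" and avoid: "\<forall>k::nat. x [^]\<^bsub>L H\<^esub> k \<notin> P H"
    and maximal: "\<And>I. tideal G T I \<Longrightarrow> \<forall>k::nat. x [^]\<^bsub>L H\<^esub> k \<notin> I H \<Longrightarrow> P \<le> I \<Longrightarrow> I = P"
  shows "tprime G T P"
proof -
  interpret R: cring "L H" using cring_L[OF H] .
  have HG: "subgrp_le G H (carrier G)" using H G.subgroup_self subgroup.subset unfolding subgrp_le_def by blast
  have power_in_sum: "\<exists>k::nat. x [^]\<^bsub>L H\<^esub> k \<in> tsum I P H" if I: "tideal G T I" and "\<not> I \<le> P" for I
  proof (rule ccontr)
    assume "\<not> ?thesis"
    moreover have "P \<le> tsum I P" unfolding le_fun_def using tsum_memI2[OF I] tideal_carrier[OF P] by blast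
    ultimately have "tsum I P = P" using maximal tsum_tideal[OF I P] by blast
    moreover have "I \<le> tsum I P" unfolding le_fun_def using tsum_memI1[OF P] tideal_carrier[OF I] by blast
    ultimately show False using \<open>\<not> I \<le> P\<close> by simp
  qed
  have "\<one>\<^bsub>L (carrier G)\<^esub> \<notin> P (carrier G)"
  proof
    assume "\<one>\<^bsub>L (carrier G)\<^esub> \<in> P (carrier G)"
    then have "x [^]\<^bsub>L H\<^esub> (0::nat) \<in> P H" using tideal_res[OF P HG] res_one[OF HG] by fastforce
    then show False using avoid by blast
  qed
  moreover have "I \<le> P \<or> J \<le> P" if I: "tideal G T I" and J: "tideal G T J" and IJ: "tprod G T I J \<le> P" for I J
  proof (rule ccontr)
    assume "\<not> (I \<le> P \<or> J \<le> P)"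
    then obtain k m where k: "x [^]\<^bsub>L H\<^esub> (k::nat) \<in> tsum I P H" and m: "x [^]\<^bsub>L H\<^esub> (m::nat) \<in> tsum J P H"
      using power_in_sum[OF I] power_in_sum[OF J] by blast
    have "x [^]\<^bsub>L H\<^esub> (k + m) = x [^]\<^bsub>L H\<^esub> k \<otimes>\<^bsub>L H\<^esub> x [^]\<^bsub>L H\<^esub> m"
      using R.nat_pow_mult[OF xc] by simp
    also have "\<dots> \<in> P H" using tsum_mult_mem[OF I J P IJ k m] .
    finally show False using avoid by blast
  qed
  ultimately show ?thesis using P unfolding tprime_def by blast
qed

lemma exists_tprime_avoiding_powers:
  assumes H: "sg H" and xc: "x \<in> carrier (L H)" and nonzero: "\<And>k::nat. x [^]\<^bsub>L H\<^esub> k \<noteq> \<zero>\<^bsub>L H\<^esub>"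
  obtains P where "tprime G T P" "x \<notin> P H"
proof -
  interpret R: cring "L H" using cring_L[OF H] .
  obtain P where P: "tideal G T P" and avoid: "\<forall>k::nat. x [^]\<^bsub>L H\<^esub> k \<notin> P H"
    and "\<And>I. tideal G T I \<Longrightarrow> \<forall>k::nat. x [^]\<^bsub>L H\<^esub> k \<notin> I H \<Longrightarrow> P \<le> I \<Longrightarrow> I = P"
    using exists_maximal_tideal_avoiding_powers[OF H nonzero] by blast
  then have "tprime G T P" using maximal_tideal_avoiding_powers_tprime[OF H xc] by blast
  moreover have "x \<notin> P H" using avoid[rule_format, of 1] xc by simp
  ultimately show ?thesis using that by blast
qed


end

section \<open>Nilpotent elements generate nilpotent Tambara ideals\<close>

locale tambara_element = tambara_functor G T for G :: "('g,'b) monoid_scheme" and T :: "('g,'r) tambara" +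
  fixes H0 :: "'g set" and x0 :: 'r
  assumes H0: "subgroup H0 G" and x0: "x0 \<in> carrier (t_lev T H0)"
begin

definition norm_res_conj :: "'g set \<Rightarrow> 'g \<Rightarrow> 'g set \<Rightarrow> 'r" where
  "norm_res_conj B g A = nm B A (res (conjsub G g H0) A (cj g H0 x0))"

definition norm_conjs :: "'g set \<Rightarrow> 'r set" where
  "norm_conjs B = {norm_res_conj B g A | g A. g \<in> carrier G \<and> sg A \<and> A \<subseteq> B \<and> A \<subseteq> conjsub G g H0}"

lemma norm_res_conj_carrier: "sg B \<Longrightarrow> g \<in> carrier G \<Longrightarrow> sg A \<Longrightarrow> A \<subseteq> B \<Longrightarrow> A \<subseteq> conjsub G g H0 \<Longrightarrow>
  norm_res_conj B g A \<in> carrier (L B)"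
proof -
  assume B: "sg B" and g: "g \<in> carrier G" and A: "sg A" and AB: "A \<subseteq> B" and AC: "A \<subseteq> conjsub G g H0"
  have C: "sg (conjsub G g H0)" using G.conjsub_subgroup[OF H0 g] .
  have "cj g H0 x0 \<in> carrier (L (conjsub G g H0))" using cj_carrier[OF g H0 x0] .
  then have "res (conjsub G g H0) A (cj g H0 x0) \<in> carrier (L A)" using res_carrier G.subgrp_leI[OF A C AC] by blast
  then show ?thesis unfolding norm_res_conj_def using nm_carrier G.subgrp_leI[OF A B AB] by blast
qed

lemma norm_conjs_carrier: "sg B \<Longrightarrow> norm_conjs B \<subseteq> carrier (L B)"
  unfolding norm_conjs_def using norm_res_conj_carrier by blast

definition norm_conjs_bound :: nat where "norm_conjs_bound = card (carrier G \<times> Pow (carrier G))"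

lemma finite_norm_conjs: "finite (norm_conjs B) \<and> card (norm_conjs B) \<le> norm_conjs_bound"
proof -
  have sub: "norm_conjs B \<subseteq> (\<lambda>(g, A). norm_res_conj B g A) ` (carrier G \<times> Pow (carrier G))"
    unfolding norm_conjs_def using subgroup.subset by fastforce
  have fin: "finite (carrier G \<times> Pow (carrier G))" using finite_G by simp
  have "finite (norm_conjs B)" using finite_subset[OF sub finite_imageI[OF fin]] .
  moreover have "card (norm_conjs B) \<le> norm_conjs_bound" unfolding norm_conjs_bound_def
    using card_mono[OF finite_imageI[OF fin] sub] card_image_le[OF fin] by (rule order_trans)
  ultimately show ?thesis by blast
qed

lemma x0_in_norm_conjs: "x0 \<in> norm_conjs H0"
proof -
  have one: "\<one>\<^bsub>G\<^esub> \<in> carrier G" by simp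
  have c1: "conjsub G \<one>\<^bsub>G\<^esub> H0 = H0" using G.conjsub_one subgroup.subset[OF H0] by blast
  have "norm_res_conj H0 \<one>\<^bsub>G\<^esub> H0 = x0" unfolding norm_res_conj_def c1
    using cj_inner[OF H0 subgroup.one_closed[OF H0] x0] res_id[OF H0 x0] nm_id[OF H0 x0] by simp
  moreover have "sg H0 \<and> H0 \<subseteq> H0 \<and> H0 \<subseteq> conjsub G \<one>\<^bsub>G\<^esub> H0" using c1 H0 by simp
  ultimately have "\<exists>g A. x0 = norm_res_conj H0 g A \<and> g \<in> carrier G \<and> sg A \<and> A \<subseteq> H0 \<and> A \<subseteq> conjsub G g H0"
    using one by metis
  then show ?thesis unfolding norm_conjs_def by simp
qed


lemma norm_conjsE: "v \<in> norm_conjs B \<Longrightarrow> (\<And>g A. v = norm_res_conj B g A \<Longrightarrow> g \<in> carrier G \<Longrightarrow> sg A \<Longrightarrow> A \<subseteq> B \<Longrightarrow> A \<subseteq> conjsub G g H0 \<Longrightarrow> P) \<Longrightarrow> P"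
  unfolding norm_conjs_def by blast

lemma norm_conjsI: "g \<in> carrier G \<Longrightarrow> sg A \<Longrightarrow> A \<subseteq> B \<Longrightarrow> A \<subseteq> conjsub G g H0 \<Longrightarrow> norm_res_conj B g A \<in> norm_conjs B"
  unfolding norm_conjs_def by blast

lemma norm_res_conj_pow:
  assumes B: "sg B" and g: "g \<in> carrier G" and A: "sg A" and AB: "A \<subseteq> B" and AC: "A \<subseteq> conjsub G g H0"
  shows "norm_res_conj B g A [^]\<^bsub>L B\<^esub> (n::nat) = nm B A (res (conjsub G g H0) A (cj g H0 (x0 [^]\<^bsub>L H0\<^esub> n)))"
proof -
  have C: "sg (conjsub G g H0)" using G.conjsub_subgroup[OF H0 g] .
  have le1: "subgrp_le G A (conjsub G g H0)" using G.subgrp_leI[OF A C AC] .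
  have le2: "subgrp_le G A B" using G.subgrp_leI[OF A B AB] .
  have y: "cj g H0 x0 \<in> carrier (L (conjsub G g H0))" using cj_carrier[OF g H0 x0] .
  have w: "res (conjsub G g H0) A (cj g H0 x0) \<in> carrier (L A)" using res_carrier[OF le1 y] .
  have "cj g H0 (x0 [^]\<^bsub>L H0\<^esub> n) = cj g H0 x0 [^]\<^bsub>L (conjsub G g H0)\<^esub> n"
    by (rule nat_pow_hom[OF cring_L[OF H0] cj_mult[OF g H0] cj_one[OF g H0] x0])
  moreover have "res (conjsub G g H0) A (cj g H0 x0 [^]\<^bsub>L (conjsub G g H0)\<^esub> n) = res (conjsub G g H0) A (cj g H0 x0) [^]\<^bsub>L A\<^esub> n"
    by (rule nat_pow_hom[OF cring_L[OF C] res_mult[OF le1] res_one[OF le1] y])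
  moreover have "nm B A (res (conjsub G g H0) A (cj g H0 x0) [^]\<^bsub>L A\<^esub> n) = norm_res_conj B g A [^]\<^bsub>L B\<^esub> n"
    unfolding norm_res_conj_def by (rule nat_pow_hom[OF cring_L[OF A] nm_mult[OF le2] nm_one[OF le2] w])
  ultimately show ?thesis by simp
qed

lemma norm_conjs_nilpotent:
  assumes B: "sg B" and v: "v \<in> norm_conjs B" and k: "x0 [^]\<^bsub>L H0\<^esub> (k::nat) = \<zero>\<^bsub>L H0\<^esub>"
  shows "v [^]\<^bsub>L B\<^esub> k = \<zero>\<^bsub>L B\<^esub>"
  using v
proof (rule norm_conjsE)
  fix g A assume v: "v = norm_res_conj B g A" and g: "g \<in> carrier G" and A: "sg A" and AB: "A \<subseteq> B" and AC: "A \<subseteq> conjsub G g H0"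
  have C: "sg (conjsub G g H0)" using G.conjsub_subgroup[OF H0 g] .
  show ?thesis unfolding v norm_res_conj_pow[OF B g A AB AC] k
    using cj_zero[OF g H0] res_zero[OF G.subgrp_leI[OF A C AC]] nm_zero[OF G.subgrp_leI[OF A B AB]] by simp
qed

lemma cj_norm_conjs:
  assumes B: "sg B" and v: "v \<in> norm_conjs B" and g': "g' \<in> carrier G"
  shows "cj g' B v \<in> norm_conjs (conjsub G g' B)"
  using v
proof (rule norm_conjsE)
  fix g A assume v: "v = norm_res_conj B g A" and g: "g \<in> carrier G" and A: "sg A" and AB: "A \<subseteq> B" and AC: "A \<subseteq> conjsub G g H0"
  have C: "sg (conjsub G g H0)" using G.conjsub_subgroup[OF H0 g] .
  have le1: "subgrp_le G A (conjsub G g H0)" using G.subgrp_leI[OF A C AC] .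
  have le2: "subgrp_le G A B" using G.subgrp_leI[OF A B AB] .
  have y: "cj g H0 x0 \<in> carrier (L (conjsub G g H0))" using cj_carrier[OF g H0 x0] .
  have w: "res (conjsub G g H0) A (cj g H0 x0) \<in> carrier (L A)" using res_carrier[OF le1 y] .
  have cc: "conjsub G g' (conjsub G g H0) = conjsub G (g' \<otimes>\<^bsub>G\<^esub> g) H0"
    using G.conjsub_comp[OF subgroup.subset[OF H0] g g'] .
  have "cj g' B v = nm (conjsub G g' B) (conjsub G g' A) (cj g' A (res (conjsub G g H0) A (cj g H0 x0)))"
    unfolding v norm_res_conj_def using cj_nm[OF g' le2 w] .
  also have "cj g' A (res (conjsub G g H0) A (cj g H0 x0)) = res (conjsub G g' (conjsub G g H0)) (conjsub G g' A) (cj g' (conjsub G g H0) (cj g H0 x0))"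
    using cj_res[OF g' le1 y] .
  also have "cj g' (conjsub G g H0) (cj g H0 x0) = cj (g' \<otimes>\<^bsub>G\<^esub> g) H0 x0" using cj_comp[OF g g' H0 x0] .
  finally have "cj g' B v = norm_res_conj (conjsub G g' B) (g' \<otimes>\<^bsub>G\<^esub> g) (conjsub G g' A)" unfolding norm_res_conj_def cc .
  moreover have "norm_res_conj (conjsub G g' B) (g' \<otimes>\<^bsub>G\<^esub> g) (conjsub G g' A) \<in> norm_conjs (conjsub G g' B)"
  proof (rule norm_conjsI)
    show "g' \<otimes>\<^bsub>G\<^esub> g \<in> carrier G" using g g' by simp
    show "sg (conjsub G g' A)" using G.conjsub_subgroup[OF A g'] .
    show "conjsub G g' A \<subseteq> conjsub G g' B" using G.conjsub_mono[OF AB] .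
    show "conjsub G g' A \<subseteq> conjsub G (g' \<otimes>\<^bsub>G\<^esub> g) H0" using G.conjsub_mono[OF AC, of g'] cc by simp
  qed
  ultimately show ?thesis by simp
qed

lemma nm_norm_conjs:
  assumes BB: "subgrp_le G B B2" and v: "v \<in> norm_conjs B"
  shows "nm B2 B v \<in> norm_conjs B2"
  using v
proof (rule norm_conjsE)
  fix g A assume v: "v = norm_res_conj B g A" and g: "g \<in> carrier G" and A: "sg A" and AB: "A \<subseteq> B" and AC: "A \<subseteq> conjsub G g H0"
  have B: "sg B" and B2: "sg B2" and BB2: "B \<subseteq> B2" using G.subgrp_leD[OF BB] by auto
  have C: "sg (conjsub G g H0)" using G.conjsub_subgroup[OF H0 g] .
  have le1: "subgrp_le G A (conjsub G g H0)" using G.subgrp_leI[OF A C AC] .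
  have le2: "subgrp_le G A B" using G.subgrp_leI[OF A B AB] .
  have y: "cj g H0 x0 \<in> carrier (L (conjsub G g H0))" using cj_carrier[OF g H0 x0] .
  have w: "res (conjsub G g H0) A (cj g H0 x0) \<in> carrier (L A)" using res_carrier[OF le1 y] .
  have "nm B2 B v = norm_res_conj B2 g A" unfolding v norm_res_conj_def using nm_trans[OF le2 BB w] .
  moreover have "norm_res_conj B2 g A \<in> norm_conjs B2" by (rule norm_conjsI[OF g A _ AC]) (use AB BB2 in auto)
  ultimately show ?thesis by simp
qed

lemma nm_res_cj_mem_norm_conjs:
  assumes g: "g \<in> carrier G" and A: "sg A" and AC: "A \<subseteq> conjsub G g H0"
    and q: "q \<in> carrier G" and B': "sg B'"
  shows "nm B' (B' \<inter> conjsub G q A) (res (conjsub G q A) (B' \<inter> conjsub G q A)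
           (cj q A (res (conjsub G g H0) A (cj g H0 x0)))) \<in> norm_conjs B'"
proof -
  have C: "sg (conjsub G g H0)" using G.conjsub_subgroup[OF H0 g] .
  have le1: "subgrp_le G A (conjsub G g H0)" using G.subgrp_leI[OF A C AC] .
  have cA: "sg (conjsub G q A)" using G.conjsub_subgroup[OF A q] .
  have cc: "conjsub G q (conjsub G g H0) = conjsub G (q \<otimes>\<^bsub>G\<^esub> g) H0"
    using G.conjsub_comp[OF subgroup.subset[OF H0] g q] .
  have le3: "subgrp_le G (conjsub G q A) (conjsub G (q \<otimes>\<^bsub>G\<^esub> g) H0)"
    using G.conjsub_le[OF le1 q] cc by simp
  have le4: "subgrp_le G (B' \<inter> conjsub G q A) (conjsub G q A)" using G.subgrp_le_Int_right[OF B' cA] .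
  have "cj q A (res (conjsub G g H0) A (cj g H0 x0))
      = res (conjsub G (q \<otimes>\<^bsub>G\<^esub> g) H0) (conjsub G q A) (cj (q \<otimes>\<^bsub>G\<^esub> g) H0 x0)"
    using cj_res[OF q le1 cj_carrier[OF g H0 x0]] cj_comp[OF g q H0 x0] cc by simp
  then have "nm B' (B' \<inter> conjsub G q A) (res (conjsub G q A) (B' \<inter> conjsub G q A)
           (cj q A (res (conjsub G g H0) A (cj g H0 x0)))) = norm_res_conj B' (q \<otimes>\<^bsub>G\<^esub> g) (B' \<inter> conjsub G q A)"
    unfolding norm_res_conj_def using res_trans[OF le4 le3 cj_carrier[OF _ H0 x0]] q g by simp
  moreover have "norm_res_conj B' (q \<otimes>\<^bsub>G\<^esub> g) (B' \<inter> conjsub G q A) \<in> norm_conjs B'"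
    using G.subgroups_Inter_pair[OF B' cA] G.subgrp_leD[OF le3] q g by (intro norm_conjsI) auto
  ultimately show ?thesis by simp
qed

lemma res_norm_conjs:
  assumes BB: "subgrp_le G B' B" and v: "v \<in> norm_conjs B"
  shows "\<exists>ws. set ws \<subseteq> norm_conjs B' \<and> 1 \<le> length ws \<and> res B B' v = list_prod (L B') ws"
  using v
proof (rule norm_conjsE)
  fix g A assume v: "v = norm_res_conj B g A" and g: "g \<in> carrier G" and A: "sg A" and AB: "A \<subseteq> B"
    and AC: "A \<subseteq> conjsub G g H0"
  have B: "sg B" and B': "sg B'" using G.subgrp_leD[OF BB] by auto
  have le2: "subgrp_le G A B" using G.subgrp_leI[OF A B AB] .
  let ?w = "res (conjsub G g H0) A (cj g H0 x0)"
  let ?f = "\<lambda>q. nm B' (B' \<inter> conjsub G q A) (res (conjsub G q A) (B' \<inter> conjsub G q A) (cj q A ?w))"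
  have w: "?w \<in> carrier (L A)"
    using res_carrier[OF G.subgrp_leI[OF A G.conjsub_subgroup[OF H0 g] AC] cj_carrier[OF g H0 x0]] .
  obtain Q where Q: "dreps G B B' A Q" using G.dreps_exists[OF BB le2] by blast
  have fV: "?f q \<in> norm_conjs B'" if "q \<in> Q" for q
    using that G.dreps_subset[OF Q] subgroup.subset[OF B]
    by (intro nm_res_cj_mem_norm_conjs[OF g A AC _ B']) auto
  obtain qs where qs: "set qs = Q" "distinct qs" using finite_distinct_list[OF G.dreps_finite[OF finite_G Q B]] by blast
  have "res B B' v = finprod (L B') ?f Q" unfolding v norm_res_conj_def
    using res_nm_double_coset[OF le2 BB Q w] .
  also have "\<dots> = list_prod (L B') (map ?f qs)"
    unfolding qs(1)[symmetric] using fV qs norm_conjs_carrier[OF B']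
    by (intro finprod_eq_list_prod[OF cring_L[OF B'] qs(2)]) auto
  finally show ?thesis
    using fV qs G.dreps_nonempty[OF Q B] by (intro exI[of _ "map ?f qs"]) (auto simp: Suc_le_eq)
qed

definition monomials :: "nat \<Rightarrow> 'g set \<Rightarrow> 'r set" where
  "monomials d B = {list_prod (L B) vs | vs. set vs \<subseteq> norm_conjs B \<and> d \<le> length vs}"

lemma monomialsE: "m \<in> monomials d B \<Longrightarrow> (\<And>vs. m = list_prod (L B) vs \<Longrightarrow> set vs \<subseteq> norm_conjs B \<Longrightarrow> d \<le> length vs \<Longrightarrow> P) \<Longrightarrow> P"
  unfolding monomials_def by blast

lemma monomialsI: "set vs \<subseteq> norm_conjs B \<Longrightarrow> d \<le> length vs \<Longrightarrow> list_prod (L B) vs \<in> monomials d B"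
  unfolding monomials_def by blast

lemma monomials_carrier: "sg B \<Longrightarrow> m \<in> monomials d B \<Longrightarrow> m \<in> carrier (L B)"
  by (erule monomialsE) (use list_prod_closed[OF cring_L] norm_conjs_carrier in blast)

lemma res_list_prod_norm_conjs:
  assumes BB: "subgrp_le G B' B"
  shows "set vs \<subseteq> norm_conjs B \<Longrightarrow> \<exists>ws. set ws \<subseteq> norm_conjs B' \<and> length vs \<le> length ws \<and> res B B' (list_prod (L B) vs) = list_prod (L B') ws"
proof (induction vs)
  case Nil
  have "res B B' (list_prod (L B) []) = list_prod (L B') []" using res_one[OF BB] by simp
  then show ?case by (intro exI[of _ "[]"]) simp
next
  case (Cons v vs)
  have B: "sg B" and B': "sg B'" using G.subgrp_leD[OF BB] by auto
  obtain ws where ws: "set ws \<subseteq> norm_conjs B'" "length vs \<le> length ws" "res B B' (list_prod (L B) vs) = list_prod (L B') ws"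
    using Cons by auto
  have vV: "v \<in> norm_conjs B" using Cons(2) by simp
  obtain ws1 where ws1: "set ws1 \<subseteq> norm_conjs B'" "1 \<le> length ws1" "res B B' v = list_prod (L B') ws1"
    using res_norm_conjs[OF BB vV] by blast
  have vc: "v \<in> carrier (L B)" and vsc: "list_prod (L B) vs \<in> carrier (L B)"
    using Cons(2) norm_conjs_carrier[OF B] list_prod_closed[OF cring_L[OF B]] by auto
  have "res B B' (list_prod (L B) (v # vs)) = res B B' v \<otimes>\<^bsub>L B'\<^esub> res B B' (list_prod (L B) vs)"
    using res_mult[OF BB vc vsc] by simp
  also have "\<dots> = list_prod (L B') (ws1 @ ws)" unfolding ws1(3) ws(3)
    using list_prod_append[OF cring_L[OF B']] ws(1) ws1(1) norm_conjs_carrier[OF B'] by auto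
  finally show ?case using ws ws1 by (intro exI[of _ "ws1 @ ws"]) auto
qed

lemma res_monomials: "subgrp_le G B' B \<Longrightarrow> m \<in> monomials d B \<Longrightarrow> res B B' m \<in> monomials d B'"
proof -
  assume BB: "subgrp_le G B' B" and m: "m \<in> monomials d B"
  obtain vs where vs: "m = list_prod (L B) vs" "set vs \<subseteq> norm_conjs B" "d \<le> length vs" using m by (rule monomialsE)
  obtain ws where "set ws \<subseteq> norm_conjs B'" "length vs \<le> length ws" "res B B' (list_prod (L B) vs) = list_prod (L B') ws"
    using res_list_prod_norm_conjs[OF BB vs(2)] by blast
  then show ?thesis using vs monomialsI by auto
qed

lemma cj_monomials: "g \<in> carrier G \<Longrightarrow> sg B \<Longrightarrow> m \<in> monomials d B \<Longrightarrow> cj g B m \<in> monomials d (conjsub G g B)"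
proof -
  assume g: "g \<in> carrier G" and B: "sg B" and m: "m \<in> monomials d B"
  obtain vs where vs: "m = list_prod (L B) vs" "set vs \<subseteq> norm_conjs B" "d \<le> length vs" using m by (rule monomialsE)
  have "cj g B m = list_prod (L (conjsub G g B)) (map (cj g B) vs)" unfolding vs(1)
    by (rule list_prod_hom[OF cring_L[OF B] cj_mult[OF g B] cj_one[OF g B]]) (use vs(2) norm_conjs_carrier[OF B] in auto)
  moreover have "set (map (cj g B) vs) \<subseteq> norm_conjs (conjsub G g B)" using vs(2) cj_norm_conjs[OF B _ g] by auto
  ultimately show ?thesis using monomialsI vs(3) by (metis length_map)
qed

lemma nm_monomials: "subgrp_le G B B2 \<Longrightarrow> m \<in> monomials d B \<Longrightarrow> nm B2 B m \<in> monomials d B2"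
proof -
  assume BB: "subgrp_le G B B2" and m: "m \<in> monomials d B"
  have B: "sg B" using G.subgrp_leD[OF BB] by auto
  obtain vs where vs: "m = list_prod (L B) vs" "set vs \<subseteq> norm_conjs B" "d \<le> length vs" using m by (rule monomialsE)
  have "nm B2 B m = list_prod (L B2) (map (nm B2 B) vs)" unfolding vs(1)
    by (rule list_prod_hom[OF cring_L[OF B] nm_mult[OF BB] nm_one[OF BB]]) (use vs(2) norm_conjs_carrier[OF B] in auto)
  moreover have "set (map (nm B2 B) vs) \<subseteq> norm_conjs B2" using vs(2) nm_norm_conjs[OF BB] by auto
  ultimately show ?thesis using monomialsI vs(3) by (metis length_map)
qed

lemma monomials_mult: "sg B \<Longrightarrow> m \<in> monomials d B \<Longrightarrow> m' \<in> monomials e B \<Longrightarrow> m \<otimes>\<^bsub>L B\<^esub> m' \<in> monomials (d + e) B"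
proof -
  assume B: "sg B" and m: "m \<in> monomials d B" and m': "m' \<in> monomials e B"
  obtain vs where vs: "m = list_prod (L B) vs" "set vs \<subseteq> norm_conjs B" "d \<le> length vs" using m by (rule monomialsE)
  obtain ws where ws: "m' = list_prod (L B) ws" "set ws \<subseteq> norm_conjs B" "e \<le> length ws" using m' by (rule monomialsE)
  have "m \<otimes>\<^bsub>L B\<^esub> m' = list_prod (L B) (vs @ ws)" unfolding vs(1) ws(1)
    using list_prod_append[OF cring_L[OF B]] vs(2) ws(2) norm_conjs_carrier[OF B] by auto
  then show ?thesis using monomialsI[of "vs @ ws" B "d + e"] vs ws by auto
qed

lemma x0_in_monomials: "x0 \<in> monomials 1 H0"
proof -
  interpret cring "L H0" using cring_L[OF H0] .
  have "list_prod (L H0) [x0] = x0" using x0 by simp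
  then show ?thesis using monomialsI[of "[x0]" H0 1] x0_in_norm_conjs by auto
qed

definition nil_degree :: "nat \<Rightarrow> nat" where "nil_degree k = norm_conjs_bound * (k - 1) + 1"

lemma monomials_nil_degree_eq_zero:
  assumes B: "sg B" and k: "x0 [^]\<^bsub>L H0\<^esub> (k::nat) = \<zero>\<^bsub>L H0\<^esub>" and m: "m \<in> monomials (nil_degree k) B"
  shows "m = \<zero>\<^bsub>L B\<^esub>"
proof -
  obtain vs where vs: "m = list_prod (L B) vs" "set vs \<subseteq> norm_conjs B" "nil_degree k \<le> length vs" using m by (rule monomialsE)
  obtain v where v: "v \<in> set vs" "count_list vs v \<ge> k"
    using pigeonhole_count_list[OF vs(2) _ _ vs(3)[unfolded nil_degree_def]] finite_norm_conjs by blast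
  have vV: "v \<in> norm_conjs B" using v(1) vs(2) by auto
  show ?thesis unfolding vs(1)
    by (rule list_prod_eq_zero[OF cring_L[OF B] _ _ norm_conjs_nilpotent[OF B vV k] v(2)]) (use vs(2) norm_conjs_carrier[OF B] vV in auto)
qed


definition filt_gens :: "nat \<Rightarrow> 'g set \<Rightarrow> 'r set" where
  "filt_gens d B = {tr B M (c \<otimes>\<^bsub>L M\<^esub> m) | M c m. subgrp_le G M B \<and> c \<in> carrier (L M) \<and> m \<in> monomials d M}"

definition filt :: "nat \<Rightarrow> 'g set \<Rightarrow> 'r set" where
  "filt d B = (if sg B then genideal (L B) (filt_gens d B) else {})"

lemma filt_gensE:
  assumes "z \<in> filt_gens d B"
  obtains M c m where "z = tr B M (c \<otimes>\<^bsub>L M\<^esub> m)" "subgrp_le G M B" "c \<in> carrier (L M)" "m \<in> monomials d M"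
  using assms unfolding filt_gens_def by blast

lemma filt_gens_carrier: "sg B \<Longrightarrow> filt_gens d B \<subseteq> carrier (L B)"
proof
  fix z assume B: "sg B" and z: "z \<in> filt_gens d B"
  then obtain M c m where z: "z = tr B M (c \<otimes>\<^bsub>L M\<^esub> m)" "subgrp_le G M B" "c \<in> carrier (L M)" "m \<in> monomials d M"
    unfolding filt_gens_def by blast
  have M: "sg M" using G.subgrp_leD[OF z(2)] by auto
  interpret cring "L M" using cring_L[OF M] .
  have "c \<otimes>\<^bsub>L M\<^esub> m \<in> carrier (L M)" using z(3) monomials_carrier[OF M z(4)] by simp
  then show "z \<in> carrier (L B)" using tr_carrier[OF z(2)] z(1) by simp
qed

lemma filt_ideal: "sg B \<Longrightarrow> ideal (filt d B) (L B)"
  unfolding filt_def using ring.genideal_ideal[OF cring.axioms(1)[OF cring_L] filt_gens_carrier] by simp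

lemma filt_gens_subset: "sg B \<Longrightarrow> filt_gens d B \<subseteq> filt d B"
  unfolding filt_def using ring.genideal_self[OF cring.axioms(1)[OF cring_L] filt_gens_carrier] by simp

lemma filt_least: "sg B \<Longrightarrow> ideal Y (L B) \<Longrightarrow> filt_gens d B \<subseteq> Y \<Longrightarrow> filt d B \<subseteq> Y"
  unfolding filt_def using ring.genideal_minimal[OF cring.axioms(1)[OF cring_L]] by simp

lemma filt_carrier: "sg B \<Longrightarrow> filt d B \<subseteq> carrier (L B)"
  by (rule additive_subgroup.a_subset[OF ideal.axioms(1)[OF filt_ideal]])

lemma filt_empty: "\<not> sg B \<Longrightarrow> filt d B = {}"
  unfolding filt_def by simp

lemma filt_add: "sg B \<Longrightarrow> a \<in> filt d B \<Longrightarrow> b \<in> filt d B \<Longrightarrow> a \<oplus>\<^bsub>L B\<^esub> b \<in> filt d B"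
  by (rule additive_subgroup.a_closed[OF ideal.axioms(1)[OF filt_ideal]])

lemma filt_l_mult: "sg B \<Longrightarrow> a \<in> filt d B \<Longrightarrow> r \<in> carrier (L B) \<Longrightarrow> r \<otimes>\<^bsub>L B\<^esub> a \<in> filt d B"
  by (rule ideal.I_l_closed[OF filt_ideal])

lemma filt_zero: "sg B \<Longrightarrow> \<zero>\<^bsub>L B\<^esub> \<in> filt d B"
  by (rule additive_subgroup.zero_closed[OF ideal.axioms(1)[OF filt_ideal]])

lemma tr_monomial_mem_filt: "subgrp_le G M B \<Longrightarrow> c \<in> carrier (L M) \<Longrightarrow> m \<in> monomials d M \<Longrightarrow> tr B M (c \<otimes>\<^bsub>L M\<^esub> m) \<in> filt d B"
proof -
  assume a: "subgrp_le G M B" "c \<in> carrier (L M)" "m \<in> monomials d M"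
  have B: "sg B" using G.subgrp_leD[OF a(1)] by auto
  have "tr B M (c \<otimes>\<^bsub>L M\<^esub> m) \<in> filt_gens d B" unfolding filt_gens_def using a by blast
  then show ?thesis using filt_gens_subset[OF B] by blast
qed

lemma monomial_mem_filt: "sg B \<Longrightarrow> c \<in> carrier (L B) \<Longrightarrow> m \<in> monomials d B \<Longrightarrow> c \<otimes>\<^bsub>L B\<^esub> m \<in> filt d B"
proof -
  assume B: "sg B" and c: "c \<in> carrier (L B)" and m: "m \<in> monomials d B"
  interpret cring "L B" using cring_L[OF B] .
  have "c \<otimes>\<^bsub>L B\<^esub> m \<in> carrier (L B)" using c monomials_carrier[OF B m] by simp
  then have "tr B B (c \<otimes>\<^bsub>L B\<^esub> m) = c \<otimes>\<^bsub>L B\<^esub> m" using tr_id[OF B] by blast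
  then show ?thesis using tr_monomial_mem_filt[OF G.subgrp_le_refl[OF B] c m] by simp
qed

lemma tr_filt:
  assumes BB: "subgrp_le G B B2" and a: "a \<in> filt d B"
  shows "tr B2 B a \<in> filt d B2"
proof -
  have B: "sg B" and B2: "sg B2" using G.subgrp_leD[OF BB] by auto
  interpret RB: cring "L B" using cring_L[OF B] .
  let ?Y = "{a \<in> carrier (L B). \<forall>r\<in>carrier (L B). tr B2 B (r \<otimes>\<^bsub>L B\<^esub> a) \<in> filt d B2}"
  have "ideal ?Y (L B)"
    using tr_zero[OF BB] filt_zero[OF B2] tr_add[OF BB]
    by (intro ideal_additive_vimage[OF cring_L[OF B] filt_ideal[OF B2]]) auto
  moreover have "filt_gens d B \<subseteq> ?Y"
  proof
    fix z assume zG: "z \<in> filt_gens d B"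
    then obtain M c m where z: "z = tr B M (c \<otimes>\<^bsub>L M\<^esub> m)" "subgrp_le G M B" "c \<in> carrier (L M)"
      "m \<in> monomials d M" by (rule filt_gensE)
    have M: "sg M" using G.subgrp_leD[OF z(2)] by auto
    interpret RM: cring "L M" using cring_L[OF M] .
    have mc: "m \<in> carrier (L M)" using monomials_carrier[OF M z(4)] .
    have zc: "z \<in> carrier (L B)" using filt_gens_carrier[OF B] zG by blast
    have "tr B2 B (r \<otimes>\<^bsub>L B\<^esub> z) \<in> filt d B2" if r: "r \<in> carrier (L B)" for r
    proof -
      have rr: "res B M r \<in> carrier (L M)" using res_carrier[OF z(2) r] .
      have "r \<otimes>\<^bsub>L B\<^esub> z = tr B M ((c \<otimes>\<^bsub>L M\<^esub> m) \<otimes>\<^bsub>L M\<^esub> res B M r)"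
        using tr_frobenius[OF z(2) _ r] z(1,3) mc r zc RB.m_comm by simp
      then have "tr B2 B (r \<otimes>\<^bsub>L B\<^esub> z) = tr B2 M ((c \<otimes>\<^bsub>L M\<^esub> res B M r) \<otimes>\<^bsub>L M\<^esub> m)"
        using tr_trans[OF z(2) BB] z(3) mc rr by (simp add: RM.m_ac)
      also have "\<dots> \<in> filt d B2"
        using tr_monomial_mem_filt[OF G.subgrp_le_trans[OF z(2) BB] _ z(4)] z(3) rr by simp
      finally show ?thesis .
    qed
    then show "z \<in> ?Y" using zc by blast
  qed
  ultimately have "filt d B \<subseteq> ?Y" using filt_least[OF B] by blast
  then have "tr B2 B (\<one>\<^bsub>L B\<^esub> \<otimes>\<^bsub>L B\<^esub> a) \<in> filt d B2" using a by auto
  moreover have "a \<in> carrier (L B)" using a filt_carrier[OF B] by blast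
  ultimately show ?thesis by simp
qed

lemma res_filt: "subgrp_le G B' B \<Longrightarrow> a \<in> filt d B \<Longrightarrow> res B B' a \<in> filt d B'"
proof -
  assume BB: "subgrp_le G B' B" and a: "a \<in> filt d B"
  have B: "sg B" and B': "sg B'" using G.subgrp_leD[OF BB] by auto
  have Bc: "B \<subseteq> carrier G" using subgroup.subset[OF B] .
  define Y where "Y = {a \<in> carrier (L B). res B B' a \<in> filt d B'}"
  have "ideal Y (L B)" unfolding Y_def
    by (rule ideal_vimage[OF cring_L[OF B] filt_ideal[OF B']])
      (use res_zero[OF BB] filt_zero[OF B'] res_add[OF BB] res_mult[OF BB] res_carrier[OF BB] in auto)
  moreover have "filt_gens d B \<subseteq> Y"
  proof
    fix z assume zG: "z \<in> filt_gens d B"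
    then obtain M c m where z: "z = tr B M (c \<otimes>\<^bsub>L M\<^esub> m)" "subgrp_le G M B" "c \<in> carrier (L M)" "m \<in> monomials d M"
      unfolding filt_gens_def by blast
    have M: "sg M" using G.subgrp_leD[OF z(2)] by auto
    interpret RM: cring "L M" using cring_L[OF M] .
    have mc: "m \<in> carrier (L M)" using monomials_carrier[OF M z(4)] .
    have "res B B' (tr B M (c \<otimes>\<^bsub>L M\<^esub> m)) \<in> filt d B'"
    proof (rule res_tr_mem[where Z="filt d", OF z(2) BB _ filt_ideal[OF B']])
      show "c \<otimes>\<^bsub>L M\<^esub> m \<in> carrier (L M)" using z(3) mc by simp
      show "\<And>M' x. subgrp_le G M' B' \<Longrightarrow> x \<in> filt d M' \<Longrightarrow> tr B' M' x \<in> filt d B'" using tr_filt by blast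
      fix q assume q: "q \<in> B"
      have qc: "q \<in> carrier G" using q Bc by auto
      have cM: "sg (conjsub G q M)" using G.conjsub_subgroup[OF M qc] .
      define A where "A = B' \<inter> conjsub G q M"
      have le: "subgrp_le G A (conjsub G q M)" unfolding A_def using G.subgrp_le_Int_right[OF B' cM] .
      have A: "sg A" using G.subgrp_leD[OF le] by auto
      have cjc: "cj q M c \<in> carrier (L (conjsub G q M))" using cj_carrier[OF qc M z(3)] .
      have cjm: "cj q M m \<in> carrier (L (conjsub G q M))" using cj_carrier[OF qc M mc] .
      have "res (conjsub G q M) A (cj q M (c \<otimes>\<^bsub>L M\<^esub> m)) = res (conjsub G q M) A (cj q M c) \<otimes>\<^bsub>L A\<^esub> res (conjsub G q M) A (cj q M m)"
        using cj_mult[OF qc M z(3) mc] res_mult[OF le cjc cjm] by simp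
      also have "\<dots> \<in> filt d A"
        by (rule monomial_mem_filt[OF A res_carrier[OF le cjc] res_monomials[OF le cj_monomials[OF qc M z(4)]]])
      finally show "res (conjsub G q M) (B' \<inter> conjsub G q M) (cj q M (c \<otimes>\<^bsub>L M\<^esub> m)) \<in> filt d (B' \<inter> conjsub G q M)"
        unfolding A_def .
    qed
    then show "z \<in> Y" unfolding Y_def using z(1) filt_gens_carrier[OF B] zG by blast
  qed
  ultimately have "filt d B \<subseteq> Y" using filt_least[OF B] by blast
  then show ?thesis using a unfolding Y_def by blast
qed


lemma cj_filt: "g \<in> carrier G \<Longrightarrow> sg B \<Longrightarrow> a \<in> filt d B \<Longrightarrow> cj g B a \<in> filt d (conjsub G g B)"
proof -
  assume g: "g \<in> carrier G" and B: "sg B" and a: "a \<in> filt d B"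
  have gB: "sg (conjsub G g B)" using G.conjsub_subgroup[OF B g] .
  define Y where "Y = {a \<in> carrier (L B). cj g B a \<in> filt d (conjsub G g B)}"
  have "ideal Y (L B)" unfolding Y_def
    by (rule ideal_vimage[OF cring_L[OF B] filt_ideal[OF gB]])
      (use cj_zero[OF g B] filt_zero[OF gB] cj_add[OF g B] cj_mult[OF g B] cj_carrier[OF g B] in auto)
  moreover have "filt_gens d B \<subseteq> Y"
  proof
    fix z assume zG: "z \<in> filt_gens d B"
    then obtain M c m where z: "z = tr B M (c \<otimes>\<^bsub>L M\<^esub> m)" "subgrp_le G M B" "c \<in> carrier (L M)" "m \<in> monomials d M"
      unfolding filt_gens_def by blast
    have M: "sg M" using G.subgrp_leD[OF z(2)] by auto
    interpret RM: cring "L M" using cring_L[OF M] .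
    have mc: "m \<in> carrier (L M)" using monomials_carrier[OF M z(4)] .
    have "cj g B z = tr (conjsub G g B) (conjsub G g M) (cj g M (c \<otimes>\<^bsub>L M\<^esub> m))"
      unfolding z(1) using cj_tr[OF g z(2)] z(3) mc by simp
    also have "\<dots> = tr (conjsub G g B) (conjsub G g M) (cj g M c \<otimes>\<^bsub>L (conjsub G g M)\<^esub> cj g M m)"
      using cj_mult[OF g M z(3) mc] by simp
    also have "\<dots> \<in> filt d (conjsub G g B)"
      by (rule tr_monomial_mem_filt[OF G.conjsub_le[OF z(2) g] cj_carrier[OF g M z(3)] cj_monomials[OF g M z(4)]])
    finally show "z \<in> Y" unfolding Y_def using filt_gens_carrier[OF B] zG by blast
  qed
  ultimately have "filt d B \<subseteq> Y" using filt_least[OF B] by blast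
  then show ?thesis using a unfolding Y_def by blast
qed


lemma nm_filt_gens:
  assumes BB: "subgrp_le G B B2" and zG: "z \<in> filt_gens d B"
  shows "nm B2 B z \<in> filt d B2"
proof -
  obtain M c m where z: "z = tr B M (c \<otimes>\<^bsub>L M\<^esub> m)" "subgrp_le G M B" "c \<in> carrier (L M)"
    "m \<in> monomials d M" using zG by (rule filt_gensE)
  have B: "sg B" and B2: "sg B2" and BB2: "B \<subseteq> B2" and M: "sg M"
    using G.subgrp_leD[OF BB] G.subgrp_leD[OF z(2)] by auto
  interpret RM: cring "L M" using cring_L[OF M] .
  have mc: "m \<in> carrier (L M)" using monomials_carrier[OF M z(4)] .
  have "nm B2 B (tr B M (c \<otimes>\<^bsub>L M\<^esub> m)) \<in> filt d B2"
  proof (rule nm_tr_mem[where Z="filt d", OF z(2) BB])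
    show "c \<otimes>\<^bsub>L M\<^esub> m \<in> carrier (L M)" using z(3) mc by simp
    show "\<And>M. subgrp_le G M B2 \<Longrightarrow> ideal (filt d M) (L M)" using filt_ideal G.subgrp_leD by blast
    show "\<And>M x. subgrp_le G M B2 \<Longrightarrow> x \<in> filt d M \<Longrightarrow> tr B2 M x \<in> filt d B2" using tr_filt by blast
    fix s Q xf assume s: "s \<in> sections G B2 B M" and Q: "dreps G B2 (secstab G B2 B s) B Q"
      and xf: "\<forall>q\<in>Q. xf q \<in> s (lco G q B)"
    let ?St = "secstab G B2 B s"
    have St: "sg ?St" using G.secstab_subgroup[OF B2 BB2 subgroup.subset[OF M] s] by auto
    obtain q where q: "q \<in> Q" using G.dreps_nonempty[OF Q B2] by blast
    have qB2: "q \<in> B2" using G.dreps_subset[OF Q] q by auto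
    let ?A = "?St \<inter> conjsub G q B"
    have xq: "xf q \<in> s (lco G q B)" using xf q by blast
    have xc: "xf q \<in> carrier G" using G.sections_xf_carrier[OF B2 BB2 B M s qB2 xq] .
    note le1 = G.secstab_Int_conjsub_le(1)[OF B2 BB2 B M s qB2 xq]
    note le2 = G.secstab_Int_conjsub_le(2)[OF B2 BB2 B M s qB2 xq]
    have cjc: "cj (xf q) M c \<in> carrier (L (conjsub G (xf q) M))" using cj_carrier[OF xc M z(3)] .
    have cjm: "cj (xf q) M m \<in> carrier (L (conjsub G (xf q) M))" using cj_carrier[OF xc M mc] .
    have rc: "res (conjsub G (xf q) M) ?A (cj (xf q) M c) \<in> carrier (L ?A)" using res_carrier[OF le1 cjc] .
    have rm: "res (conjsub G (xf q) M) ?A (cj (xf q) M m) \<in> carrier (L ?A)" using res_carrier[OF le1 cjm] .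
    have "nm ?St ?A (res (conjsub G (xf q) M) ?A (cj (xf q) M (c \<otimes>\<^bsub>L M\<^esub> m)))
        = nm ?St ?A (res (conjsub G (xf q) M) ?A (cj (xf q) M c))
          \<otimes>\<^bsub>L ?St\<^esub> nm ?St ?A (res (conjsub G (xf q) M) ?A (cj (xf q) M m))"
      using cj_mult[OF xc M z(3) mc] res_mult[OF le1 cjc cjm] nm_mult[OF le2 rc rm] by simp
    also have "\<dots> \<in> filt d ?St"
      by (rule monomial_mem_filt[OF St nm_carrier[OF le2 rc]
            nm_monomials[OF le2 res_monomials[OF le1 cj_monomials[OF xc M z(4)]]]])
    finally show "\<exists>q\<in>Q. nm ?St (?St \<inter> conjsub G q B) (res (conjsub G (xf q) M) (?St \<inter> conjsub G q B)
        (cj (xf q) M (c \<otimes>\<^bsub>L M\<^esub> m))) \<in> filt d ?St"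
      using q by blast
  qed
  then show ?thesis using z(1) by simp
qed

text \<open>The reciprocity formula for norms of sums only involves norms from proper subgroups
  of the target, except for the orbit of the empty set and of all of the cosets, whose products
  are conjugates of the norms of the two summands.  This is what makes an induction on the
  order of the target group work.\<close>

lemma nm_filt_add:
  assumes IH: "\<And>B' A a. subgrp_le G A B' \<Longrightarrow> B' \<subset> B2 \<Longrightarrow> a \<in> filt d A \<Longrightarrow> nm B' A a \<in> filt d B'"
    and BB: "subgrp_le G B B2"
    and a: "a \<in> filt d B" "nm B2 B a \<in> filt d B2" and b: "b \<in> filt d B" "nm B2 B b \<in> filt d B2"
  shows "nm B2 B (a \<oplus>\<^bsub>L B\<^esub> b) \<in> filt d B2"
proof -
  have B: "sg B" and B2: "sg B2" and BB2: "B \<subseteq> B2" using G.subgrp_leD[OF BB] by auto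
  have ac: "a \<in> carrier (L B)" and bc: "b \<in> carrier (L B)" using a b filt_carrier[OF B] by auto
  show ?thesis
  proof (rule nm_add_mem[where Z="filt d", OF BB ac bc])
    show "\<And>M. subgrp_le G M B2 \<Longrightarrow> ideal (filt d M) (L M)" using filt_ideal G.subgrp_leD by blast
    show "\<And>M x. subgrp_le G M B2 \<Longrightarrow> x \<in> filt d M \<Longrightarrow> tr B2 M x \<in> filt d B2" using tr_filt by blast
    fix S Q assume S: "S \<subseteq> lcosetsK G B2 B" and Q: "dreps G B2 (substab G B2 S) B Q"
    let ?St = "substab G B2 S"
    have St: "sg ?St" "?St \<subseteq> B2" using G.substab_subgroup[OF B2 subgroup.subset[OF B] S] by auto
    obtain q where q: "q \<in> Q" using G.dreps_nonempty[OF Q B2] by blast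
    have qB2: "q \<in> B2" using G.dreps_subset[OF Q] q by auto
    have qc: "q \<in> carrier G" using qB2 subgroup.subset[OF B2] by auto
    define y where "y = (if lco G q B \<in> S then a else b)"
    have yF: "y \<in> filt d B" and ynm: "nm B2 B y \<in> filt d B2" using a b unfolding y_def by auto
    have yc: "y \<in> carrier (L B)" using yF filt_carrier[OF B] by auto
    have cB: "sg (conjsub G q B)" using G.conjsub_subgroup[OF B qc] .
    have "nm ?St (?St \<inter> conjsub G q B) (res (conjsub G q B) (?St \<inter> conjsub G q B) (cj q B y)) \<in> filt d ?St"
    proof (cases "?St = B2")
      case True
      have "conjsub G q B \<subseteq> B2" using G.conjsub_mono[OF BB2] G.conjsub_self[OF B2 qB2] by blast
      then have "?St \<inter> conjsub G q B = conjsub G q B" using True by blast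
      moreover have "res (conjsub G q B) (conjsub G q B) (cj q B y) = cj q B y"
        using res_id[OF cB cj_carrier[OF qc B yc]] .
      ultimately show ?thesis using True nm_cj_inner[OF BB qB2 yc] ynm by simp
    next
      case False
      then have "?St \<subset> B2" using St by blast
      moreover have "res (conjsub G q B) (?St \<inter> conjsub G q B) (cj q B y) \<in> filt d (?St \<inter> conjsub G q B)"
        using res_filt[OF G.subgrp_le_Int_right[OF St(1) cB] cj_filt[OF qc B yF]] .
      ultimately show ?thesis using IH G.subgrp_le_Int_left[OF St(1) cB] by blast
    qed
    then show "\<exists>q\<in>Q. nm ?St (?St \<inter> conjsub G q B) (res (conjsub G q B) (?St \<inter> conjsub G q B)
        (cj q B (if lco G q B \<in> S then a else b))) \<in> filt d ?St"
      using q unfolding y_def by blast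
  qed
qed

lemma nm_filt: "subgrp_le G B B2 \<Longrightarrow> a \<in> filt d B \<Longrightarrow> nm B2 B a \<in> filt d B2"
proof (induction "card B2" arbitrary: B2 B a rule: less_induct)
  case less
  have BB: "subgrp_le G B B2" and B: "sg B" and B2: "sg B2" using less.prems G.subgrp_leD by auto
  have "finite B2" using finite_subset[OF subgroup.subset[OF B2] finite_G] .
  then have IH: "\<And>B' A a. subgrp_le G A B' \<Longrightarrow> B' \<subset> B2 \<Longrightarrow> a \<in> filt d A \<Longrightarrow> nm B' A a \<in> filt d B'"
    using less.hyps psubset_card_mono by blast
  let ?Y = "{a \<in> filt d B. nm B2 B a \<in> filt d B2}"
  have "ideal ?Y (L B)"
  proof (rule cring_idealI[OF cring_L[OF B]])
    show "?Y \<subseteq> carrier (L B)" using filt_carrier[OF B] by blast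
    show "\<zero>\<^bsub>L B\<^esub> \<in> ?Y" using filt_zero[OF B] filt_zero[OF B2] nm_zero[OF BB] by simp
    show "a \<oplus>\<^bsub>L B\<^esub> b \<in> ?Y" if "a \<in> ?Y" "b \<in> ?Y" for a b
      using that nm_filt_add[OF IH BB] filt_add[OF B] by blast
    show "r \<otimes>\<^bsub>L B\<^esub> a \<in> ?Y" if "a \<in> ?Y" and r: "r \<in> carrier (L B)" for a r
    proof -
      have a: "a \<in> filt d B" "nm B2 B a \<in> filt d B2" using that by auto
      have "nm B2 B (r \<otimes>\<^bsub>L B\<^esub> a) = nm B2 B r \<otimes>\<^bsub>L B2\<^esub> nm B2 B a"
        using nm_mult[OF BB r] a filt_carrier[OF B] by blast
      then show ?thesis
        using filt_l_mult[OF B a(1) r] filt_l_mult[OF B2 a(2) nm_carrier[OF BB r]] by simp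
    qed
  qed
  moreover have "filt_gens d B \<subseteq> ?Y" using nm_filt_gens[OF BB] filt_gens_subset[OF B] by blast
  ultimately show ?case using filt_least[OF B] less.prems(2) by blast
qed

lemma filt_tideal: "tideal G T (filt d)"
  by (rule tidealI) (simp_all add: filt_ideal filt_empty res_filt tr_filt nm_filt cj_filt)

lemma res_monomial_mult_mem_filt:
  assumes le: "subgrp_le G A M" and le': "subgrp_le G A M'"
    and c: "c \<in> carrier (L M)" and m: "m \<in> monomials d M"
    and c': "c' \<in> carrier (L M')" and m': "m' \<in> monomials e M'"
  shows "res M A (c \<otimes>\<^bsub>L M\<^esub> m) \<otimes>\<^bsub>L A\<^esub> res M' A (c' \<otimes>\<^bsub>L M'\<^esub> m') \<in> filt (d + e) A"
proof -
  have A: "sg A" and M: "sg M" and M': "sg M'" using G.subgrp_leD[OF le] G.subgrp_leD[OF le'] by auto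
  interpret RA: cring "L A" using cring_L[OF A] .
  have mc: "m \<in> carrier (L M)" and m'c: "m' \<in> carrier (L M')"
    using monomials_carrier[OF M m] monomials_carrier[OF M' m'] .
  have "res M A (c \<otimes>\<^bsub>L M\<^esub> m) \<otimes>\<^bsub>L A\<^esub> res M' A (c' \<otimes>\<^bsub>L M'\<^esub> m')
      = (res M A c \<otimes>\<^bsub>L A\<^esub> res M' A c') \<otimes>\<^bsub>L A\<^esub> (res M A m \<otimes>\<^bsub>L A\<^esub> res M' A m')"
    using res_mult[OF le c mc] res_mult[OF le' c' m'c] res_carrier[OF le] res_carrier[OF le'] c mc c' m'c
    by (simp add: RA.m_ac)
  also have "\<dots> \<in> filt (d + e) A"
    using res_carrier[OF le c] res_carrier[OF le' c']
    by (intro monomial_mem_filt[OF A] monomials_mult[OF A] res_monomials[OF le m] res_monomials[OF le' m']) auto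
  finally show ?thesis .
qed

lemma mult_res_filt_gens:
  assumes MB: "subgrp_le G M B" and c: "c \<in> carrier (L M)" and m: "m \<in> monomials d M"
    and zG: "z \<in> filt_gens e B"
  shows "(c \<otimes>\<^bsub>L M\<^esub> m) \<otimes>\<^bsub>L M\<^esub> res B M z \<in> filt (d + e) M"
proof -
  obtain M' c' m' where z: "z = tr B M' (c' \<otimes>\<^bsub>L M'\<^esub> m')" "subgrp_le G M' B" "c' \<in> carrier (L M')"
    "m' \<in> monomials e M'" using zG by (rule filt_gensE)
  have M: "sg M" and M': "sg M'" and B: "sg B" using G.subgrp_leD[OF MB] G.subgrp_leD[OF z(2)] by auto
  interpret RM: cring "L M" using cring_L[OF M] .
  interpret RM': cring "L M'" using cring_L[OF M'] .
  have m'c: "m' \<in> carrier (L M')" using monomials_carrier[OF M' z(4)] .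
  let ?u = "c \<otimes>\<^bsub>L M\<^esub> m"
  have uc: "?u \<in> carrier (L M)" using c monomials_carrier[OF M m] by simp
  define Z where "Z A = {w \<in> carrier (L A). res M A ?u \<otimes>\<^bsub>L A\<^esub> w \<in> filt (d + e) A}" for A
  have ZM: "Z M = {w \<in> carrier (L M). ?u \<otimes>\<^bsub>L M\<^esub> w \<in> filt (d + e) M}"
    unfolding Z_def res_id[OF M uc] ..
  have "res B M (tr B M' (c' \<otimes>\<^bsub>L M'\<^esub> m')) \<in> Z M"
  proof (rule res_tr_mem[where Z=Z, OF z(2) MB])
    show "c' \<otimes>\<^bsub>L M'\<^esub> m' \<in> carrier (L M')" using z(3) m'c by simp
    show "ideal (Z M) (L M)" unfolding ZM by (rule ideal_colon[OF cring_L[OF M] filt_ideal[OF M] uc])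
    show "tr M A w \<in> Z M" if A: "subgrp_le G A M" and w: "w \<in> Z A" for A w
    proof -
      interpret RA: cring "L A" using cring_L G.subgrp_leD[OF A] by blast
      have wc: "w \<in> carrier (L A)" and wZ: "res M A ?u \<otimes>\<^bsub>L A\<^esub> w \<in> filt (d + e) A"
        using w unfolding Z_def by auto
      have "?u \<otimes>\<^bsub>L M\<^esub> tr M A w = tr M A (res M A ?u \<otimes>\<^bsub>L A\<^esub> w)"
        using tr_frobenius[OF A wc uc] tr_carrier[OF A wc] uc wc res_carrier[OF A uc]
        by (simp add: RM.m_comm RA.m_comm)
      then show ?thesis using tr_filt[OF A wZ] tr_carrier[OF A wc] unfolding ZM by simp
    qed
    fix q assume "q \<in> B"
    then have q: "q \<in> carrier G" using subgroup.subset[OF B] by auto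
    let ?A = "M \<inter> conjsub G q M'"
    have le1: "subgrp_le G ?A (conjsub G q M')"
      using G.subgrp_le_Int_right[OF M G.conjsub_subgroup[OF M' q]] .
    have le2: "subgrp_le G ?A M" using G.subgrp_le_Int_left[OF M G.conjsub_subgroup[OF M' q]] .
    have "res (conjsub G q M') ?A (cj q M' (c' \<otimes>\<^bsub>L M'\<^esub> m'))
        = res (conjsub G q M') ?A (cj q M' c' \<otimes>\<^bsub>L (conjsub G q M')\<^esub> cj q M' m')"
      using cj_mult[OF q M' z(3) m'c] by simp
    moreover have "res (conjsub G q M') ?A (cj q M' (c' \<otimes>\<^bsub>L M'\<^esub> m')) \<in> carrier (L ?A)"
      using res_carrier[OF le1 cj_carrier[OF q M']] z(3) m'c by simp
    ultimately show "res (conjsub G q M') ?A (cj q M' (c' \<otimes>\<^bsub>L M'\<^esub> m')) \<in> Z ?A"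
      using res_monomial_mult_mem_filt[OF le2 le1 c m cj_carrier[OF q M' z(3)] cj_monomials[OF q M' z(4)]]
      unfolding Z_def by simp
  qed
  then show ?thesis using z(1) unfolding ZM by simp
qed

lemma filt_gens_mult:
  assumes B: "sg B" and z1: "z1 \<in> filt_gens d B" and z2: "z2 \<in> filt_gens e B"
  shows "z1 \<otimes>\<^bsub>L B\<^esub> z2 \<in> filt (d + e) B"
proof -
  obtain M c m where z: "z1 = tr B M (c \<otimes>\<^bsub>L M\<^esub> m)" "subgrp_le G M B" "c \<in> carrier (L M)"
    "m \<in> monomials d M" using z1 by (rule filt_gensE)
  have M: "sg M" using G.subgrp_leD[OF z(2)] by auto
  interpret RM: cring "L M" using cring_L[OF M] .
  have uc: "c \<otimes>\<^bsub>L M\<^esub> m \<in> carrier (L M)" using z(3) monomials_carrier[OF M z(4)] by simp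
  have "z2 \<in> carrier (L B)" using filt_gens_carrier[OF B] z2 by blast
  then have "z1 \<otimes>\<^bsub>L B\<^esub> z2 = tr B M ((c \<otimes>\<^bsub>L M\<^esub> m) \<otimes>\<^bsub>L M\<^esub> res B M z2)"
    unfolding z(1) using tr_frobenius[OF z(2) uc] by simp
  also have "\<dots> \<in> filt (d + e) B" using tr_filt[OF z(2) mult_res_filt_gens[OF z(2-4) z2]] .
  finally show ?thesis .
qed

lemma filt_mult:
  assumes B: "sg B" and a: "a \<in> filt d B" and b: "b \<in> filt e B"
  shows "a \<otimes>\<^bsub>L B\<^esub> b \<in> filt (d + e) B"
proof (rule genideal_mult_mem[where A="filt_gens d B" and B="filt_gens e B"])
  show "cring (L B)" using cring_L[OF B] .
  show "ideal (filt (d + e) B) (L B)" using filt_ideal[OF B] .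
  show "filt_gens d B \<subseteq> carrier (L B)" "filt_gens e B \<subseteq> carrier (L B)"
    using filt_gens_carrier[OF B] by auto
  show "z1 \<otimes>\<^bsub>L B\<^esub> z2 \<in> filt (d + e) B" if "z1 \<in> filt_gens d B" "z2 \<in> filt_gens e B" for z1 z2
    using filt_gens_mult[OF B that] .
  show "a \<in> genideal (L B) (filt_gens d B)" "b \<in> genideal (L B) (filt_gens e B)"
    using a b B unfolding filt_def by auto
qed

lemma x0_mem_filt: "x0 \<in> filt 1 H0"
proof -
  interpret cring "L H0" using cring_L[OF H0] .
  show ?thesis using monomial_mem_filt[OF H0 one_closed x0_in_monomials] x0 by simp
qed

lemma tpow_tprinc_le_filt: "tpow G T (tprinc G T H0 x0) n \<le> filt (Suc n)"
proof (induction n)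
  case 0
  show ?case using tprinc_least[OF filt_tideal x0_mem_filt] by simp
next
  case (Suc n)
  have "tprod G T (tpow G T (tprinc G T H0 x0) n) (tprinc G T H0 x0) \<le> filt (Suc n + 1)"
  proof (rule tprod_least[OF filt_tideal])
    fix H a b assume "a \<in> tpow G T (tprinc G T H0 x0) n H" and "b \<in> tprinc G T H0 x0 H"
    then have "a \<in> filt (Suc n) H" "b \<in> filt 1 H"
      using Suc tprinc_least[OF filt_tideal x0_mem_filt] unfolding le_fun_def by blast+
    then show "a \<otimes>\<^bsub>L H\<^esub> b \<in> filt (Suc n + 1) H" using filt_mult filt_empty by blast
  qed
  then show ?case by simp
qed

lemma filt_nil_degree_eq_zero:
  assumes k: "x0 [^]\<^bsub>L H0\<^esub> (k::nat) = \<zero>\<^bsub>L H0\<^esub>"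
  shows "filt (nil_degree k) \<le> tzero G T"
proof (unfold le_fun_def, intro allI)
  fix B
  show "filt (nil_degree k) B \<subseteq> tzero G T B"
  proof (cases "sg B")
    case True
    interpret RB: cring "L B" using cring_L[OF True] .
    have "filt_gens (nil_degree k) B \<subseteq> {\<zero>\<^bsub>L B\<^esub>}"
    proof
      fix z assume "z \<in> filt_gens (nil_degree k) B"
      then obtain M c m where z: "z = tr B M (c \<otimes>\<^bsub>L M\<^esub> m)" "subgrp_le G M B" "c \<in> carrier (L M)"
        "m \<in> monomials (nil_degree k) M" by (rule filt_gensE)
      have M: "sg M" using G.subgrp_leD[OF z(2)] by auto
      interpret RM: cring "L M" using cring_L[OF M] .
      show "z \<in> {\<zero>\<^bsub>L B\<^esub>}"
        using monomials_nil_degree_eq_zero[OF M k z(4)] z(1,3) tr_zero[OF z(2)] by simp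
    qed
    then show ?thesis using filt_least[OF True RB.zeroideal] True unfolding tzero_def by simp
  qed (simp add: filt_empty)
qed

lemma x0_mem_nilradical:
  assumes "x0 [^]\<^bsub>L H0\<^esub> (k::nat) = \<zero>\<^bsub>L H0\<^esub>"
  shows "x0 \<in> nilradical G T H0"
proof -
  have "tpow G T (tprinc G T H0 x0) (nil_degree k - 1) \<le> filt (nil_degree k)"
    using tpow_tprinc_le_filt[of "nil_degree k - 1"] unfolding nil_degree_def by simp
  also have "\<dots> \<le> tzero G T" using filt_nil_degree_eq_zero[OF assms] .
  finally show ?thesis using nilradicalI[OF H0 x0] by blast
qed


end

section \<open>The nilradical and the irreducibility of the spectrum\<close>

context tambara_functor
begin

lemma nilpotent_mem_nilradical:
  assumes H: "sg H" and x: "x \<in> carrier (L H)" and nil: "x [^]\<^bsub>L H\<^esub> (k::nat) = \<zero>\<^bsub>L H\<^esub>"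
  shows "x \<in> nilradical G T H"
proof -
  interpret tambara_element G T H x
    unfolding tambara_element_def tambara_element_axioms_def using tambara_functor_axioms H x by blast
  show ?thesis using x0_mem_nilradical[OF nil] .
qed

lemma nilradical_iff_mem_all_tprimes:
  assumes H: "sg H" and x: "x \<in> carrier (L H)"
  shows "x \<in> nilradical G T H \<longleftrightarrow> (\<forall>P. tprime G T P \<longrightarrow> x \<in> P H)"
proof
  show "\<forall>P. tprime G T P \<longrightarrow> x \<in> P H" if "x \<in> nilradical G T H"
    using that nilradical_le_tprime unfolding le_fun_def by blast
  show "x \<in> nilradical G T H" if all: "\<forall>P. tprime G T P \<longrightarrow> x \<in> P H"
  proof (rule ccontr)
    assume "x \<notin> nilradical G T H"
    then have "x [^]\<^bsub>L H\<^esub> (k::nat) \<noteq> \<zero>\<^bsub>L H\<^esub>" for k using nilpotent_mem_nilradical[OF H x] by blast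
    then obtain P where "tprime G T P" "x \<notin> P H" using exists_tprime_avoiding_powers[OF H x] by blast
    then show False using all by blast
  qed
qed

lemma tprime_exists:
  assumes "sg H" and "\<one>\<^bsub>L H\<^esub> \<noteq> \<zero>\<^bsub>L H\<^esub>"
  obtains P where "tprime G T P"
proof -
  interpret cring "L H" using cring_L[OF assms(1)] .
  show ?thesis using exists_tprime_avoiding_powers[OF assms(1) one_closed] assms(2) that by auto
qed

lemma nilradical_eq_Inter_tspec:
  assumes "tspec G T \<noteq> {}"
  shows "nilradical G T = (\<lambda>H. \<Inter>P\<in>tspec G T. P H)"
proof
  fix H
  obtain P0 where P0: "tprime G T P0" using assms unfolding tspec_def by blast
  show "nilradical G T H = (\<Inter>P\<in>tspec G T. P H)"
  proof (cases "sg H")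
    case True
    have "(\<Inter>P\<in>tspec G T. P H) \<subseteq> carrier (L H)"
      using P0 tideal_carrier[OF tprime_tideal[OF P0]] unfolding tspec_def by blast
    moreover have "nilradical G T H \<subseteq> carrier (L H)" using nilradicalD by blast
    ultimately show ?thesis using nilradical_iff_mem_all_tprimes[OF True] unfolding tspec_def by blast
  next
    case False
    then have "nilradical G T H = {}" and "P0 H = {}"
      using nilradicalD tideal_empty[OF tprime_tideal[OF P0]] by auto
    then show ?thesis using P0 unfolding tspec_def by blast
  qed
qed

lemma nilradical_tideal: "tspec G T \<noteq> {} \<Longrightarrow> tideal G T (nilradical G T)"
  unfolding nilradical_eq_Inter_tspec
  by (rule tideal_Inter) (auto simp: tspec_def intro: tprime_tideal)

lemma openin_spec_top_basic:
  "sg H \<Longrightarrow> x \<in> carrier (L H) \<Longrightarrow> openin (spec_top G T) (tspec G T - Vset G T H x)"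
  unfolding spec_top_def openin_topology_generated_by_iff
  by (rule generate_topology_on.Basis) blast

lemma nilradical_mem_openin:
  assumes N: "tprime G T (nilradical G T)" and U: "openin (spec_top G T) U" and P: "P \<in> U"
  shows "nilradical G T \<in> U"
proof -
  have N_spec: "nilradical G T \<in> tspec G T" using N unfolding tspec_def by simp
  have "generate_topology_on
      (insert (tspec G T) {tspec G T - Vset G T H x | H x. sg H \<and> x \<in> carrier (L H)}) U"
    using U unfolding spec_top_def openin_topology_generated_by_iff .
  then have "\<forall>P\<in>U. nilradical G T \<in> U"
  proof (induction rule: generate_topology_on.induct)
    case (Basis s)
    then consider "s = tspec G T" | H x where "s = tspec G T - Vset G T H x" by blast
    then show ?case
    proof cases
      case 1
      then show ?thesis using N_spec by blast
    next
      case (2 H x)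
      have "x \<notin> nilradical G T H" if "P \<in> s" for P
        using that nilradical_le_tprime unfolding 2 Vset_def tspec_def le_fun_def by blast
      then show ?thesis unfolding 2 Vset_def using N_spec by blast
    qed
  qed blast+
  then show ?thesis using P by blast
qed

lemma irreducible_if_nilradical_tprime:
  assumes "tprime G T (nilradical G T)"
  shows "irreducible_space (spec_top G T)"
  unfolding irreducible_space_def using nilradical_mem_openin[OF assms] by blast

lemma nilradical_tprime_if_irreducible:
  assumes irr: "irreducible_space (spec_top G T)" and ne: "tspec G T \<noteq> {}"
  shows "tprime G T (nilradical G T)"
  unfolding tprime_def
proof (intro conjI allI impI)
  obtain P0 where P0: "tprime G T P0" using ne unfolding tspec_def by blast
  show "tideal G T (nilradical G T)" using nilradical_tideal[OF ne] .
  show "\<one>\<^bsub>L (carrier G)\<^esub> \<notin> nilradical G T (carrier G)"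
    using P0 nilradical_le_tprime[OF P0] unfolding tprime_def le_fun_def by blast
  fix I J assume I: "tideal G T I" and J: "tideal G T J" and IJ: "tprod G T I J \<le> nilradical G T"
  show "I \<le> nilradical G T \<or> J \<le> nilradical G T"
  proof (rule ccontr)
    assume "\<not> (I \<le> nilradical G T \<or> J \<le> nilradical G T)"
    then obtain H x K y where x: "x \<in> I H" "x \<notin> nilradical G T H" and y: "y \<in> J K" "y \<notin> nilradical G T K"
      unfolding le_fun_def by blast
    have H: "sg H" and xc: "x \<in> carrier (L H)" using tideal_carrier[OF I x(1)] by auto
    have K: "sg K" and yc: "y \<in> carrier (L K)" using tideal_carrier[OF J y(1)] by auto
    obtain P where "tprime G T P" "x \<notin> P H" using nilradical_iff_mem_all_tprimes[OF H xc] x(2) by blast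
    then have "P \<in> tspec G T - Vset G T H x" unfolding Vset_def tspec_def by auto
    moreover obtain Q where "tprime G T Q" "y \<notin> Q K" using nilradical_iff_mem_all_tprimes[OF K yc] y(2) by blast
    then have "Q \<in> tspec G T - Vset G T K y" unfolding Vset_def tspec_def by auto
    ultimately obtain R where "R \<in> tspec G T - Vset G T H x" "R \<in> tspec G T - Vset G T K y"
      using irr openin_spec_top_basic[OF H xc] openin_spec_top_basic[OF K yc]
      unfolding irreducible_space_def by blast
    then have R: "tprime G T R" and "x \<notin> R H" "y \<notin> R K" unfolding Vset_def tspec_def by auto
    moreover have "I \<le> R \<or> J \<le> R"
      using IJ nilradical_le_tprime[OF R] R I J order_trans unfolding tprime_def by metis
    ultimately show False using x(1) y(1) unfolding le_fun_def by blast
  qed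
qed

end

theorem proposition7p3:
  fixes G :: "('g, 'b) monoid_scheme" and T :: "('g, 'r) tambara"
  assumes "group G" and "finite (carrier G)" and "is_tambara G T"
    and "\<exists>H. subgroup H G \<and> \<one>\<^bsub>t_lev T H\<^esub> \<noteq> \<zero>\<^bsub>t_lev T H\<^esub>"
  shows "tprime G T (nilradical G T) \<longleftrightarrow> irreducible_space (spec_top G T)"
proof -
  interpret tambara_functor G T
    using assms(1-3) unfolding tambara_functor_def tambara_functor_axioms_def by blast
  have "tspec G T \<noteq> {}"
    using assms(4) tprime_exists unfolding tspec_def by blast
  then show ?thesis
    using irreducible_if_nilradical_tprime nilradical_tprime_if_irreducible by blast
qed


end
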